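(* Let $I=[0,1]$, let $C$ be a Cantor set and let $M$ be an M-Cantorval. For each of the sets: a one-point set, $I$, $C$, $M$, $I\times I$, $I\times C$, $I\times M$, $C\times M$, $M\times M$, there exists a sequence $(v_n)$ in $\mathbb R^2$ with $\sum_n v_n$ absolutely convergent such that the achievement set $E(v_n)$ is homeomorphic to that set.
   Context: For an absolutely convergent series $\sum_n v_n$ in $\mathbb R^d$, its achievement set is $E(v_n)=\{\sum_{n=1}^\infty \varepsilon_n v_n : (\varepsilon_n)\in\{0,1\}^{\mathbb N}\}$. A Cantor set is a nonempty, totally disconnected, perfect, compact subset of $\mathbb R^n$. An M-Cantorval is a nonempty compact set $M\subset\mathbb R$ which is regularly closed (equal to the closure of its interior) and such that both endpoints of every maximal interval $J\subset M$ are accumulation points of $M\setminus J$. *)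

theory Defs
  imports "HOL-Analysis.Analysis"
begin

definition achievement_set :: "(nat \<Rightarrow> 'a::real_normed_vector) \<Rightarrow> 'a set" where
  "achievement_set v = {(\<Sum>n. (if e n then 1 else 0) *\<^sub>R v n) | e :: nat \<Rightarrow> bool. True}"

definition totally_disconnected :: "'a::topological_space set \<Rightarrow> bool" where
  "totally_disconnected S \<longleftrightarrow> (\<forall>T. T \<subseteq> S \<and> connected T \<longrightarrow> (\<exists>a. T \<subseteq> {a}))"

definition perfect_set :: "'a::topological_space set \<Rightarrow> bool" where
  "perfect_set S \<longleftrightarrow> closed S \<and> (\<forall>x\<in>S. x islimpt S)"

definition cantor_set :: "'a::topological_space set \<Rightarrow> bool" where
  "cantor_set S \<longleftrightarrow> S \<noteq> {} \<and> totally_disconnected S \<and> perfect_set S \<and> compact S"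

definition maximal_interval :: "real set \<Rightarrow> real set \<Rightarrow> bool" where
  "maximal_interval J M \<longleftrightarrow> J \<noteq> {} \<and> is_interval J \<and> J \<subseteq> M \<and>
     (\<forall>K. is_interval K \<and> J \<subseteq> K \<and> K \<subseteq> M \<longrightarrow> K = J)"

definition m_cantorval :: "real set \<Rightarrow> bool" where
  "m_cantorval M \<longleftrightarrow> M \<noteq> {} \<and> compact M \<and> closure (interior M) = M \<and>
     (\<forall>J. maximal_interval J M \<longrightarrow> (Inf J) islimpt (M - J) \<and> (Sup J) islimpt (M - J))"

definition realizable_in_plane :: "'a::topological_space set \<Rightarrow> bool" where
  "realizable_in_plane S \<longleftrightarrow>
     (\<exists>v :: nat \<Rightarrow> real \<times> real. summable (\<lambda>n. norm (v n)) \<and> achievement_set v homeomorphic S)"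

end

theory Submission
  imports Defs
begin

text \<open>
  Achievement sets of real series already realize every shape in the list: the zero series gives a
  point, \<open>\<Sum> 2\<^sup>-\<^sup>n\<close> gives \<open>[0,1]\<close>, \<open>\<Sum> 2\<sdot>3\<^sup>-\<^sup>n\<close> gives the middle-thirds Cantor set and the
  Guthrie--Nymann series \<open>3/4, 2/4, 3/16, 2/16, \<dots>\<close> gives an M-Cantorval; a real series \<open>x\<close> sits in
  the plane as \<open>(x, 0)\<close>, and interleaving \<open>(x\<^sub>n, 0)\<close> with \<open>(0, y\<^sub>n)\<close> realizes a product.

  It remains to see that every Cantor set is homeomorphic to the middle-thirds set and every
  M-Cantorval to the Guthrie--Nymann one. For this a compact \<open>K \<subseteq> \<real>\<close> is coded by a binary tree
  of intervals \<open>[a s, b s]\<close> with endpoints in \<open>K\<close>, each split at a cut \<open>c s \<le> d s\<close> with no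
  point of \<open>K\<close> strictly between, and with lengths tending to \<open>0\<close> along every branch. Two such
  trees whose cuts are degenerate (\<open>c s = d s\<close>) at the same nodes induce an increasing bijection
  between the two sets, which is a homeomorphism. A Cantor set gets a tree whose cuts are
  always gaps, chosen through a fixed enumeration of the rationals; since every gap is
  eventually cut, the intervals shrink. An M-Cantorval gets a tree following a five-state
  automaton that mirrors the self-similar structure of the Guthrie--Nymann Cantorval.
\<close>

definition subsum :: "(nat \<Rightarrow> 'a::real_normed_vector) \<Rightarrow> (nat \<Rightarrow> bool) \<Rightarrow> 'a" where
  "subsum v e = (\<Sum>n. (if e n then 1 else 0) *\<^sub>R v n)"

lemma achievement_set_eq_range_subsum: "achievement_set v = range (subsum v)"
  by (auto simp: achievement_set_def subsum_def)

lemma summable_selected: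
  fixes v :: "nat \<Rightarrow> 'a::banach"
  assumes "summable (\<lambda>n. norm (v n))"
  shows "summable (\<lambda>n. (if e n then 1 else 0) *\<^sub>R v n)"
  by (rule summable_norm_cancel, rule summable_comparison_test[OF _ assms]) auto

lemma continuous_on_subsum:
  fixes v :: "nat \<Rightarrow> 'a::banach"
  assumes "summable (\<lambda>n. norm (v n))"
  shows "continuous_on UNIV (subsum v)"
proof -
  have "uniformly_convergent_on UNIV (\<lambda>N e. \<Sum>i<N. (if e i then 1 else 0) *\<^sub>R v i)"
    by (rule Weierstrass_m_test'[OF _ assms]) auto
  then have lim: "uniform_limit UNIV (\<lambda>N e. \<Sum>i<N. (if e i then 1 else 0) *\<^sub>R v i) (subsum v) sequentially"
    unfolding subsum_def by (rule uniform_limit_suminf)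
  have "continuous_on UNIV (\<lambda>e::nat \<Rightarrow> bool. if e i then 1 else (0::real))" for i
    using continuous_on_compose[of UNIV "\<lambda>e. e i" "\<lambda>b::bool. if b then 1 else (0::real)"]
    by (simp add: o_def continuous_on_discrete)
  then have "continuous_on UNIV (\<lambda>e::nat \<Rightarrow> bool. \<Sum>i<N. (if e i then 1 else 0) *\<^sub>R v i)" for N
    by (intro continuous_on_sum continuous_on_scaleR continuous_on_const)
  then show ?thesis
    by (intro uniform_limit_theorem[OF _ lim]) auto
qed

lemma compact_cantor_space: "compact (UNIV :: (nat \<Rightarrow> bool) set)"
proof -
  have "compact_space (euclidean :: bool topology)"
    by (simp add: compact_space_def compactin_euclidean_iff finite_imp_compact)
  then have "compact_space (product_topology (\<lambda>i::nat. (euclidean :: bool topology)) UNIV)"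
    by (simp add: compact_space_product_topology)
  then show ?thesis
    by (simp add: euclidean_product_topology compact_space_def compactin_euclidean_iff)
qed

lemma compact_achievement_set:
  fixes v :: "nat \<Rightarrow> 'a::banach"
  assumes "summable (\<lambda>n. norm (v n))"
  shows "compact (achievement_set v)"
  unfolding achievement_set_eq_range_subsum
  by (rule compact_continuous_image[OF continuous_on_subsum[OF assms] compact_cantor_space])

lemma sums_Pair: "f sums a \<Longrightarrow> g sums b \<Longrightarrow> (\<lambda>n. (f n, g n)) sums (a, b)"
proof -
  assume "f sums a" "g sums b"
  then have "(\<lambda>n. (sum f {..<n}, sum g {..<n})) \<longlonglongrightarrow> (a,b)"
    unfolding sums_def by (rule tendsto_Pair)
  moreover have "(\<Sum>i<n. (f i, g i)) = (sum f {..<n}, sum g {..<n})" for n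
    by (induct n) (auto simp: zero_prod_def)
  ultimately show ?thesis unfolding sums_def by simp
qed

lemma sums_even_spread: "a sums s \<Longrightarrow> (\<lambda>n. if even n then a (n div 2) else 0) sums s"
  by (subst sums_mono_reindex[of "\<lambda>n. 2*n", symmetric]) (auto simp: strict_mono_def elim!: oddE)

lemma sums_odd_spread: "a sums s \<Longrightarrow> (\<lambda>n. if odd n then a (n div 2) else 0) sums s"
  apply (subst sums_mono_reindex[of "\<lambda>n. 2*n+1", symmetric])
    apply (auto simp: strict_mono_def)
  by (metis oddE add.commute plus_1_eq_Suc rangeI)

definition interleave :: "(nat \<Rightarrow> real) \<Rightarrow> (nat \<Rightarrow> real) \<Rightarrow> nat \<Rightarrow> real \<times> real" where
  "interleave x y n = (if even n then (x (n div 2), 0) else (0, y (n div 2)))"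

lemma selected_sums_subsum:
  fixes x :: "nat \<Rightarrow> 'a::banach"
  assumes "summable (\<lambda>n. norm (x n))"
  shows "(\<lambda>n. (if e n then 1 else 0) *\<^sub>R x n) sums subsum x e"
  unfolding subsum_def using summable_selected[OF assms] by (simp add: summable_sums)

lemma summable_norm_interleave:
  assumes "summable (\<lambda>n. norm (x n))" "summable (\<lambda>n. norm (y n))"
  shows "summable (\<lambda>n. norm (interleave x y n))"
proof -
  have "(\<lambda>n. (if even n then norm (x (n div 2)) else 0) + (if odd n then norm (y (n div 2)) else 0))
     sums ((\<Sum>n. norm (x n)) + (\<Sum>n. norm (y n)))"
    by (intro sums_add sums_even_spread sums_odd_spread summable_sums assms)
  moreover have "norm (interleave x y n) = (if even n then norm (x (n div 2)) else 0) + (if odd n then norm (y (n div 2)) else 0)" for n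
    by (auto simp: interleave_def)
  ultimately show ?thesis by (simp add: sums_iff)
qed

lemma subsum_interleave:
  assumes "summable (\<lambda>n. norm (x n))" "summable (\<lambda>n. norm (y n))"
  shows "subsum (interleave x y) e = (subsum x (\<lambda>k. e (2*k)), subsum y (\<lambda>k. e (2*k+1)))"
proof -
  let ?A = "\<lambda>k. ((if e (2*k) then 1 else 0) *\<^sub>R x k, 0::real)"
  let ?B = "\<lambda>k. (0::real, (if e (2*k+1) then 1 else 0) *\<^sub>R y k)"
  have "?A sums (subsum x (\<lambda>k. e (2*k)), 0)"
    by (rule sums_Pair[OF selected_sums_subsum[OF assms(1)]]) simp
  moreover have "?B sums (0, subsum y (\<lambda>k. e (2*k+1)))"
    by (rule sums_Pair[OF _ selected_sums_subsum[OF assms(2)]]) simp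
  ultimately have "(\<lambda>n. (if even n then ?A (n div 2) else 0) + (if odd n then ?B (n div 2) else 0))
      sums ((subsum x (\<lambda>k. e (2*k)), 0) + (0, subsum y (\<lambda>k. e (2*k+1))))"
    by (intro sums_add sums_even_spread sums_odd_spread)
  moreover have "(if even n then ?A (n div 2) else 0) + (if odd n then ?B (n div 2) else 0)
      = (if e n then 1 else 0) *\<^sub>R interleave x y n" for n
    by (auto simp: interleave_def elim!: evenE oddE)
  ultimately have "(\<lambda>n. (if e n then 1 else 0) *\<^sub>R interleave x y n) sums (subsum x (\<lambda>k. e (2*k)), subsum y (\<lambda>k. e (2*k+1)))"
    by simp
  then show ?thesis unfolding subsum_def by (simp add: sums_iff)
qed

lemma achievement_set_interleave:
  assumes "summable (\<lambda>n. norm (x n))" "summable (\<lambda>n. norm (y n))"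
  shows "achievement_set (interleave x y) = achievement_set x \<times> achievement_set y"
proof -
  have "achievement_set (interleave x y) \<subseteq> achievement_set x \<times> achievement_set y"
    unfolding achievement_set_eq_range_subsum using subsum_interleave[OF assms] by auto
  moreover have "achievement_set x \<times> achievement_set y \<subseteq> achievement_set (interleave x y)"
  proof
    fix p assume "p \<in> achievement_set x \<times> achievement_set y"
    then obtain e1 e2 where p: "p = (subsum x e1, subsum y e2)" unfolding achievement_set_eq_range_subsum by auto
    define e where "e n = (if even n then e1 (n div 2) else e2 (n div 2))" for n
    have "subsum (interleave x y) e = p"
      using subsum_interleave[OF assms, of e] p by (simp add: e_def)
    then show "p \<in> achievement_set (interleave x y)" unfolding achievement_set_eq_range_subsum by (metis rangeI)
  qed
  ultimately show ?thesis by blast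
qed

lemma homeomorphic_Times:
  fixes S :: "'a::topological_space set" and S' :: "'b::topological_space set"
    and T :: "'c::topological_space set" and T' :: "'d::topological_space set"
  assumes "S homeomorphic S'" "T homeomorphic T'"
  shows "(S \<times> T) homeomorphic (S' \<times> T')"
proof -
  obtain f g where fg: "homeomorphism S S' f g" using assms(1) by (auto simp: homeomorphic_def)
  obtain h k where hk: "homeomorphism T T' h k" using assms(2) by (auto simp: homeomorphic_def)
  have "homeomorphism (S \<times> T) (S' \<times> T') (\<lambda>p. (f (fst p), h (snd p))) (\<lambda>p. (g (fst p), k (snd p)))"
    using fg hk unfolding homeomorphism_def
    by (auto intro!: continuous_intros continuous_on_compose2[where f=fst] continuous_on_compose2[where f=snd]
        simp: image_iff)
  then show ?thesis by (auto simp: homeomorphic_def)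
qed

lemma achievement_set_zero: "achievement_set (\<lambda>n. 0::real) = {0}"
  by (auto simp: achievement_set_def)

lemma realizable_in_plane_Times:
  fixes x y :: "nat \<Rightarrow> real"
  assumes "summable (\<lambda>n. norm (x n))" "summable (\<lambda>n. norm (y n))"
    and "achievement_set x homeomorphic S" "achievement_set y homeomorphic T"
  shows "realizable_in_plane (S \<times> T)"
  unfolding realizable_in_plane_def
  using achievement_set_interleave[OF assms(1,2)] summable_norm_interleave[OF assms(1,2)]
    homeomorphic_Times[OF assms(3,4)] by metis

lemma realizable_in_plane_real:
  fixes x :: "nat \<Rightarrow> real"
  assumes "summable (\<lambda>n. norm (x n))" and "achievement_set x homeomorphic S"
  shows "realizable_in_plane S"
proof -
  have "realizable_in_plane (S \<times> {0::real})"
    by (rule realizable_in_plane_Times[OF assms(1) _ assms(2), where y="\<lambda>n. 0"])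
      (simp_all add: achievement_set_zero homeomorphic_refl)
  moreover have "(S \<times> {0::real}) homeomorphic S"
    unfolding homeomorphic_def homeomorphism_def
    by (rule exI[of _ fst], rule exI[of _ "\<lambda>t. (t, 0)"]) (auto intro!: continuous_intros)
  ultimately show ?thesis
    unfolding realizable_in_plane_def by (meson homeomorphic_trans)
qed

section \<open>Strictly increasing maps between compact sets of reals\<close>

lemma strict_mono_surj_closed_cont_left:
  fixes f :: "real \<Rightarrow> real"
  assumes K': "closed K'" and mono: "\<And>x y. x \<in> K \<Longrightarrow> y \<in> K \<Longrightarrow> x < y \<Longrightarrow> f x < f y"
    and img: "f ` K = K'" and x: "x \<in> K" and e: "e > 0"
  shows "\<exists>dl>0. \<forall>x'\<in>K. x - dl < x' \<and> x' \<le> x \<longrightarrow> f x - e < f x'"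
proof (cases "{x'\<in>K. x' < x \<and> f x' \<le> f x - e} = {}")
  case True
  show ?thesis
  proof (intro exI[of _ 1] conjI ballI impI)
    fix x' assume "x' \<in> K" "x - 1 < x' \<and> x' \<le> x"
    then show "f x - e < f x'" using True e by (cases "x' = x") force+
  qed simp
next
  case False
  define A where "A = {x'\<in>K. x' < x \<and> f x' \<le> f x - e}"
  have Ane: "f ` A \<noteq> {}" using False A_def by auto
  have bdd: "bdd_above (f ` A)" unfolding A_def by (rule bdd_aboveI[of _ "f x - e"]) auto
  define w where "w = Sup (f ` A)"
  have "w \<in> closure (f ` A)" unfolding w_def by (rule closure_contains_Sup[OF Ane bdd])
  moreover have "closure (f ` A) \<subseteq> K'" using img A_def K' by (intro closure_minimal) auto
  ultimately have "w \<in> K'" by auto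
  have wle: "w \<le> f x - e" unfolding w_def using Ane by (intro cSup_least) (auto simp: A_def)
  have "w \<in> f ` K" using \<open>w \<in> K'\<close> img by simp
  then obtain z where z: "z \<in> K" "w = f z" by auto
  have zx: "z < x"
  proof (rule ccontr)
    assume "\<not> z < x"
    then have "x \<le> z" by simp
    then have "f x \<le> f z" using mono[OF x z(1)] by (cases "x = z") auto
    then show False using wle z e by simp
  qed
  show ?thesis
  proof (intro exI[of _ "x - z"] conjI ballI impI)
    fix x' assume x': "x' \<in> K" "x - (x - z) < x' \<and> x' \<le> x"
    show "f x - e < f x'"
    proof (rule ccontr)
      assume "\<not> f x - e < f x'"
      then have le: "f x' \<le> f x - e" by simp
      then have "x' \<noteq> x" using e by auto
      then have "x' \<in> A" using x' le A_def by auto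
      then have "f x' \<le> w" unfolding w_def using bdd by (intro cSup_upper) auto
      moreover have "f z < f x'" using mono[OF z(1) x'(1)] x' by auto
      ultimately show False using z by simp
    qed
  qed (use zx in simp)
qed

lemma strict_mono_surj_closed_cont_right:
  fixes f :: "real \<Rightarrow> real"
  assumes K': "closed K'" and mono: "\<And>x y. x \<in> K \<Longrightarrow> y \<in> K \<Longrightarrow> x < y \<Longrightarrow> f x < f y"
    and img: "f ` K = K'" and x: "x \<in> K" and e: "e > 0"
  shows "\<exists>dr>0. \<forall>x'\<in>K. x \<le> x' \<and> x' < x + dr \<longrightarrow> f x' < f x + e"
proof -
  let ?f = "\<lambda>t. - f (- t)"
  have "closed (uminus ` K')" using K' by (simp add: closed_negations)
  moreover have "?f ` uminus ` K = uminus ` K'" using img by (auto simp: image_image)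
  ultimately obtain dl where "dl > 0" "\<forall>t\<in>uminus ` K. - x - dl < t \<and> t \<le> - x \<longrightarrow> ?f (- x) - e < ?f t"
    using strict_mono_surj_closed_cont_left[of "uminus ` K'" "uminus ` K" ?f "- x" e] mono x e by force
  then show ?thesis by (intro exI[of _ dl]) force
qed

lemma strict_mono_surj_closed_continuous_on:
  fixes f :: "real \<Rightarrow> real"
  assumes K': "closed K'" and mono: "\<And>x y. x \<in> K \<Longrightarrow> y \<in> K \<Longrightarrow> x < y \<Longrightarrow> f x < f y"
    and img: "f ` K = K'"
  shows "continuous_on K f"
  unfolding continuous_on_iff
proof (intro ballI allI impI)
  fix x e :: real assume x: "x \<in> K" and e: "e > 0"
  obtain dl where dl: "dl > 0" "\<forall>x'\<in>K. x - dl < x' \<and> x' \<le> x \<longrightarrow> f x - e < f x'"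
    using strict_mono_surj_closed_cont_left[OF K' mono img x e] by blast
  obtain dr where dr: "dr > 0" "\<forall>x'\<in>K. x \<le> x' \<and> x' < x + dr \<longrightarrow> f x' < f x + e"
    using strict_mono_surj_closed_cont_right[OF K' mono img x e] by blast
  show "\<exists>d>0. \<forall>x'\<in>K. dist x' x < d \<longrightarrow> dist (f x') (f x) < e"
  proof (intro exI[of _ "min dl dr"] conjI ballI impI)
    fix x' assume x': "x' \<in> K" "dist x' x < min dl dr"
    show "dist (f x') (f x) < e"
    proof (cases "x' \<le> x")
      case True
      then have "f x - e < f x'" using dl x' by (auto simp: dist_real_def)
      moreover have "f x' \<le> f x" using True mono[OF x'(1) x] by (cases "x' = x") auto
      ultimately show ?thesis by (simp add: dist_real_def)
    next
      case False
      then have "f x' < f x + e" using dr x' by (auto simp: dist_real_def)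
      moreover have "f x \<le> f x'" using False mono[OF x x'(1)] by auto
      ultimately show ?thesis by (simp add: dist_real_def)
    qed
  qed (use dl dr in simp)
qed

lemma strict_mono_surj_compact_homeomorphic:
  fixes f :: "real \<Rightarrow> real"
  assumes "compact K" "compact K'" and mono: "\<And>x y. x \<in> K \<Longrightarrow> y \<in> K \<Longrightarrow> x < y \<Longrightarrow> f x < f y"
    and img: "f ` K = K'"
  shows "K homeomorphic K'"
proof -
  have "continuous_on K f" by (rule strict_mono_surj_closed_continuous_on[OF compact_imp_closed[OF assms(2)] mono img])
  moreover have "inj_on f K"
    unfolding inj_on_def by (metis mono linorder_neqE_linordered_idom less_irrefl)
  ultimately show ?thesis unfolding homeomorphic_def using homeomorphism_compact[OF assms(1) _ img] by blast
qed

section \<open>Cut trees of compact sets of reals\<close>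

definition is_branch :: "(nat \<Rightarrow> bool list) \<Rightarrow> bool" where
  "is_branch ns \<longleftrightarrow> ns 0 = [] \<and> (\<forall>n. \<exists>\<beta>. ns (Suc n) = \<beta> # ns n)"

text \<open>
  A node is the list of turns leading to it, the most recent one first (\<open>True\<close> = right).
\<close>

definition cut_system :: "real set \<Rightarrow> (bool list \<Rightarrow> real) \<Rightarrow> (bool list \<Rightarrow> real) \<Rightarrow>
    (bool list \<Rightarrow> real) \<Rightarrow> (bool list \<Rightarrow> real) \<Rightarrow> bool" where
  "cut_system K a b c d \<longleftrightarrow> (\<forall>s. a s \<in> K \<and> b s \<in> K \<and> a s < c s \<and> c s \<le> d s \<and> d s < b s \<and>
        (\<forall>x\<in>K. \<not> (c s < x \<and> x < d s)) \<and>
        a (False # s) = a s \<and> b (False # s) = c s \<and> a (True # s) = d s \<and> b (True # s) = b s)"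

definition cut_tree :: "real set \<Rightarrow> (bool list \<Rightarrow> real) \<Rightarrow> (bool list \<Rightarrow> real) \<Rightarrow>
    (bool list \<Rightarrow> real) \<Rightarrow> (bool list \<Rightarrow> real) \<Rightarrow> bool" where
  "cut_tree K a b c d \<longleftrightarrow> K \<subseteq> {a []..b []} \<and> cut_system K a b c d \<and>
     (\<forall>ns. is_branch ns \<longrightarrow> (\<lambda>n. b (ns n) - a (ns n)) \<longlonglongrightarrow> 0)"

lemma branch_step:
  assumes "is_branch ns" obtains \<beta> where "ns (Suc n) = \<beta> # ns n"
  using assms unfolding is_branch_def by blast

lemma cut_systemD:
  assumes "cut_system K a b c d"
  shows "a s \<in> K" "b s \<in> K" "a s < c s" "c s \<le> d s" "d s < b s" "\<And>x. x \<in> K \<Longrightarrow> \<not> (c s < x \<and> x < d s)"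
    "a (False # s) = a s" "b (False # s) = c s" "a (True # s) = d s" "b (True # s) = b s"
  using assms unfolding cut_system_def by blast+

lemma cut_system_left_mem: "cut_system K a b c d \<Longrightarrow> a s \<in> K"
  and cut_system_right_mem: "cut_system K a b c d \<Longrightarrow> b s \<in> K"
  and cut_system_order: "cut_system K a b c d \<Longrightarrow> a s < c s" "cut_system K a b c d \<Longrightarrow> c s \<le> d s"
    "cut_system K a b c d \<Longrightarrow> d s < b s"
  and cut_system_gap: "cut_system K a b c d \<Longrightarrow> x \<in> K \<Longrightarrow> \<not> (c s < x \<and> x < d s)"
  and cut_system_child: "cut_system K a b c d \<Longrightarrow> a (False # s) = a s"
    "cut_system K a b c d \<Longrightarrow> b (False # s) = c s" "cut_system K a b c d \<Longrightarrow> a (True # s) = d s"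
    "cut_system K a b c d \<Longrightarrow> b (True # s) = b s"
  by (simp_all add: cut_system_def)

lemma cut_system_nested:
  assumes T: "cut_system K a b c d" and P: "is_branch ns"
  shows "a (ns n) \<le> a (ns (Suc n)) \<and> b (ns (Suc n)) \<le> b (ns n)"
proof -
  obtain \<beta> where "ns (Suc n) = \<beta> # ns n" using P by (rule branch_step)
  then show ?thesis using cut_systemD[OF T, where s="ns n"] by (cases \<beta>) auto
qed

lemma cut_system_less: "cut_system K a b c d \<Longrightarrow> a s < b s"
  using cut_system_order[of K a b c d s] by linarith

lemma cut_system_incseq: assumes "cut_system K a b c d" "is_branch ns" shows "incseq (\<lambda>n. a (ns n))"
proof (rule incseq_SucI)
  fix n show "a (ns n) \<le> a (ns (Suc n))" using cut_system_nested[OF assms, of n] by simp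
qed

lemma cut_system_decseq: assumes "cut_system K a b c d" "is_branch ns" shows "decseq (\<lambda>n. b (ns n))"
proof (rule decseq_SucI)
  fix n show "b (ns (Suc n)) \<le> b (ns n)" using cut_system_nested[OF assms, of n] by simp
qed

lemma cut_system_left_le_right:
  assumes T: "cut_system K a b c d" and P: "is_branch ns"
  shows "a (ns n) \<le> b (ns m)"
proof -
  have "a (ns n) \<le> a (ns (max n m))" using cut_system_incseq[OF T P] by (simp add: incseq_def)
  also have "\<dots> \<le> b (ns (max n m))" using cut_system_less[OF T] less_imp_le by blast
  also have "\<dots> \<le> b (ns m)" using cut_system_decseq[OF T P] by (simp add: decseq_def)
  finally show ?thesis .
qed

definition branch_point :: "(bool list \<Rightarrow> real) \<Rightarrow> (nat \<Rightarrow> bool list) \<Rightarrow> real" where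
  "branch_point a ns = lim (\<lambda>n. a (ns n))"

lemma branch_point_limit:
  assumes T: "cut_tree K a b c d" and P: "is_branch ns"
  shows "(\<lambda>n. a (ns n)) \<longlonglongrightarrow> branch_point a ns" "(\<lambda>n. b (ns n)) \<longlonglongrightarrow> branch_point a ns"
    "\<And>n. a (ns n) \<le> branch_point a ns" "\<And>n. branch_point a ns \<le> b (ns n)"
proof -
  have T': "cut_system K a b c d" using T by (simp add: cut_tree_def)
  have bnd: "\<forall>i. a (ns i) \<le> b (ns 0)" using cut_system_left_le_right[OF T' P] by simp
  obtain L where L: "(\<lambda>n. a (ns n)) \<longlonglongrightarrow> L" and "\<forall>i. a (ns i) \<le> L"
    by (rule incseq_convergent[OF cut_system_incseq[OF T' P] bnd])
  have eq: "branch_point a ns = L" unfolding branch_point_def using L by (rule limI)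
  show A: "(\<lambda>n. a (ns n)) \<longlonglongrightarrow> branch_point a ns" using L eq by simp
  have "(\<lambda>n. a (ns n) + (b (ns n) - a (ns n))) \<longlonglongrightarrow> branch_point a ns + 0"
    using A T P unfolding cut_tree_def by (intro tendsto_add) auto
  then show B: "(\<lambda>n. b (ns n)) \<longlonglongrightarrow> branch_point a ns" by simp
  show "\<And>n. a (ns n) \<le> branch_point a ns" using incseq_le[OF cut_system_incseq[OF T' P] A] .
  show "\<And>n. branch_point a ns \<le> b (ns n)" using decseq_ge[OF cut_system_decseq[OF T' P] B] .
qed

lemma branch_point_unique:
  assumes T: "cut_tree K a b c d" and P: "is_branch ns" and x: "\<And>n. a (ns n) \<le> x \<and> x \<le> b (ns n)"
  shows "x = branch_point a ns"
proof -
  have "branch_point a ns \<le> x" by (rule LIMSEQ_le_const2[OF branch_point_limit(1)[OF T P]]) (use x in blast)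
  moreover have "x \<le> branch_point a ns" by (rule LIMSEQ_le_const[OF branch_point_limit(2)[OF T P]]) (use x in blast)
  ultimately show ?thesis by simp
qed

lemma branch_point_mem:
  assumes T: "cut_tree K a b c d" and P: "is_branch ns" and K: "closed K"
  shows "branch_point a ns \<in> K"
proof -
  have "\<forall>n. a (ns n) \<in> K" using T cut_system_left_mem unfolding cut_tree_def by blast
  then show ?thesis using closed_sequentially[OF K _ branch_point_limit(1)[OF T P]] by blast
qed

primrec branch_of :: "(bool list \<Rightarrow> real) \<Rightarrow> real \<Rightarrow> nat \<Rightarrow> bool list" where
  "branch_of d x 0 = []" | "branch_of d x (Suc n) = (d (branch_of d x n) \<le> x) # branch_of d x n"

lemma is_branch_branch_of: "is_branch (branch_of d x)"
  by (auto simp: is_branch_def)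

lemma branch_of_encloses:
  assumes T: "cut_tree K a b c d" and x: "x \<in> K"
  shows "a (branch_of d x n) \<le> x \<and> x \<le> b (branch_of d x n)"
proof (induct n)
  case 0
  then show ?case using T x by (auto simp: cut_tree_def)
next
  case (Suc n)
  let ?s = "branch_of d x n"
  have t: "a ?s < c ?s \<and> c ?s \<le> d ?s \<and> d ?s < b ?s \<and> \<not> (c ?s < x \<and> x < d ?s) \<and>
        a (False # ?s) = a ?s \<and> b (False # ?s) = c ?s \<and> a (True # ?s) = d ?s \<and> b (True # ?s) = b ?s"
    using T x cut_systemD[of K a b c d, where s="?s"] unfolding cut_tree_def by blast
  show ?case
  proof (cases "d ?s \<le> x")
    case True then show ?thesis using Suc t by simp
  next
    case False then show ?thesis using Suc t by auto
  qed
qed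

lemma branch_stays_right:
  assumes T: "cut_system K a b c d" and P: "is_branch ns"
    and y: "\<And>m. a (ns m) \<le> y \<and> y \<le> b (ns m)" and bn: "b (ns n) = y"
  shows "ns (Suc (n + k)) = True # ns (n + k) \<and> b (ns (n + k)) = y"
proof -
  have B: "b (ns (n + k)) = y" for k
  proof (induct k)
    case 0 then show ?case using bn by simp
  next
    case (Suc k)
    obtain \<beta> where \<beta>: "ns (Suc (n + k)) = \<beta> # ns (n + k)" using P by (rule branch_step)
    have t: "c (ns (n+k)) < b (ns (n+k)) \<and> b (False # ns (n+k)) = c (ns (n+k)) \<and> b (True # ns (n+k)) = b (ns (n+k))"
      using cut_systemD[OF T, where s="ns (n+k)"] by linarith
    show ?case
    proof (cases \<beta>)
      case True then show ?thesis using \<beta> t Suc by simp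
    next
      case False
      then have "b (ns (Suc (n + k))) < y" using \<beta> t Suc by simp
      then show ?thesis using y[of "Suc (n+k)"] by simp
    qed
  qed
  obtain \<beta> where \<beta>: "ns (Suc (n + k)) = \<beta> # ns (n + k)" using P by (rule branch_step)
  have t: "c (ns (n+k)) < b (ns (n+k)) \<and> b (False # ns (n+k)) = c (ns (n+k))"
    using cut_systemD[OF T, where s="ns (n+k)"] by linarith
  have "\<beta> = True"
  proof (rule ccontr)
    assume "\<beta> \<noteq> True"
    then have "b (ns (Suc (n + k))) < y" using \<beta> t B[of k] by simp
    then show False using y[of "Suc (n+k)"] by simp
  qed
  then show ?thesis using \<beta> B by simp
qed

lemma branch_stays_left:
  assumes T: "cut_system K a b c d" and P: "is_branch ns"
    and y: "\<And>m. a (ns m) \<le> y \<and> y \<le> b (ns m)" and an: "a (ns n) = y"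
  shows "ns (Suc (n + k)) = False # ns (n + k) \<and> a (ns (n + k)) = y"
proof -
  have A: "a (ns (n + k)) = y" for k
  proof (induct k)
    case 0 then show ?case using an by simp
  next
    case (Suc k)
    obtain \<beta> where \<beta>: "ns (Suc (n + k)) = \<beta> # ns (n + k)" using P by (rule branch_step)
    have t: "a (ns (n+k)) < d (ns (n+k)) \<and> a (True # ns (n+k)) = d (ns (n+k)) \<and> a (False # ns (n+k)) = a (ns (n+k))"
      using cut_systemD[OF T, where s="ns (n+k)"] by linarith
    show ?case
    proof (cases \<beta>)
      case False then show ?thesis using \<beta> t Suc by simp
    next
      case True
      then have "y < a (ns (Suc (n + k)))" using \<beta> t Suc by simp
      then show ?thesis using y[of "Suc (n+k)"] by simp
    qed
  qed
  obtain \<beta> where \<beta>: "ns (Suc (n + k)) = \<beta> # ns (n + k)" using P by (rule branch_step)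
  have t: "a (ns (n+k)) < d (ns (n+k)) \<and> a (True # ns (n+k)) = d (ns (n+k))"
    using cut_systemD[OF T, where s="ns (n+k)"] by linarith
  have "\<beta> = False"
  proof (rule ccontr)
    assume "\<beta> \<noteq> False"
    then have "y < a (ns (Suc (n + k)))" using \<beta> t A[of k] by simp
    then show False using y[of "Suc (n+k)"] by simp
  qed
  then show ?thesis using \<beta> A by simp
qed

lemma branch_point_right_end:
  assumes T: "cut_tree K a b c d" and P: "is_branch ns" and R: "\<And>k. ns (Suc (n + k)) = True # ns (n + k)"
  shows "branch_point a ns = b (ns n)"
proof -
  have T': "cut_system K a b c d" using T by (simp add: cut_tree_def)
  have B: "b (ns (k + n)) = b (ns n)" for k
  proof (induct k)
    case (Suc k) then show ?case using R[of k] cut_system_child(4)[OF T'] by (simp add: add.commute)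
  qed simp
  have "(\<lambda>k. b (ns (k + n))) \<longlonglongrightarrow> branch_point a ns"
    using branch_point_limit(2)[OF T P] by (rule LIMSEQ_ignore_initial_segment)
  then show ?thesis using B by (simp add: LIMSEQ_const_iff)
qed

lemma branch_point_left_end:
  assumes T: "cut_tree K a b c d" and P: "is_branch ns" and R: "\<And>k. ns (Suc (n + k)) = False # ns (n + k)"
  shows "branch_point a ns = a (ns n)"
proof -
  have T': "cut_system K a b c d" using T by (simp add: cut_tree_def)
  have B: "a (ns (k + n)) = a (ns n)" for k
  proof (induct k)
    case (Suc k) then show ?case using R[of k] cut_system_child(1)[OF T'] by (simp add: add.commute)
  qed simp
  have "(\<lambda>k. a (ns (k + n))) \<longlonglongrightarrow> branch_point a ns"
    using branch_point_limit(1)[OF T P] by (rule LIMSEQ_ignore_initial_segment)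
  then show ?thesis using B by (simp add: LIMSEQ_const_iff)
qed

lemma branches_diverge:
  assumes P: "is_branch p" and Q: "is_branch q" and ne: "p \<noteq> q"
  obtains n \<beta> \<gamma> where "p n = q n" "p (Suc n) = \<beta> # p n" "q (Suc n) = \<gamma> # q n" "\<beta> \<noteq> \<gamma>"
proof -
  obtain m where m: "p m \<noteq> q m" using ne by blast
  define N where "N = (LEAST m. p m \<noteq> q m)"
  have N: "p N \<noteq> q N" unfolding N_def using m by (rule LeastI)
  have lt: "k < N \<Longrightarrow> p k = q k" for k unfolding N_def using not_less_Least by blast
  have "N \<noteq> 0"
  proof
    assume "N = 0" then show False using N P Q by (simp add: is_branch_def)
  qed
  then obtain n where n: "N = Suc n" by (cases N) auto
  have eq: "p n = q n" using lt n by simp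
  obtain \<beta> where \<beta>: "p (Suc n) = \<beta> # p n" using P by (rule branch_step)
  obtain \<gamma> where \<gamma>: "q (Suc n) = \<gamma> # q n" using Q by (rule branch_step)
  have "\<beta> \<noteq> \<gamma>" using N n \<beta> \<gamma> eq by auto
  then show ?thesis using that eq \<beta> \<gamma> by blast
qed

lemma branch_points_eq_split:
  assumes T: "cut_tree K a b c d" and T': "cut_tree K' a' b' c' d'"
    and sync: "\<And>s. c s = d s \<longleftrightarrow> c' s = d' s"
    and P: "is_branch p" and Q: "is_branch q"
    and xp: "\<And>m. a (p m) \<le> x \<and> x \<le> b (p m)" and xq: "\<And>m. a (q m) \<le> x \<and> x \<le> b (q m)"
    and eq: "p n = q n" and pn: "p (Suc n) = False # p n" and qn: "q (Suc n) = True # q n"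
  shows "branch_point a' p = branch_point a' q"
proof -
  have To: "cut_system K a b c d" using T by (simp add: cut_tree_def)
  have To': "cut_system K' a' b' c' d'" using T' by (simp add: cut_tree_def)
  define s where "s = p n"
  have bp: "b (p (Suc n)) = c s" using pn cut_system_child(2)[OF To] s_def by simp
  have aq: "a (q (Suc n)) = d s" using qn cut_system_child(3)[OF To] s_def eq by simp
  have "x \<le> c s" "d s \<le> x" using xp[of "Suc n"] xq[of "Suc n"] bp aq by auto
  then have cx: "c s = x" "d s = x" using cut_system_order(2)[OF To, where s=s] by auto
  have R: "p (Suc (Suc n + k)) = True # p (Suc n + k)" for k
    using branch_stays_right[OF To P xp, of "Suc n" k] bp cx by simp
  have L: "q (Suc (Suc n + k)) = False # q (Suc n + k)" for k
    using branch_stays_left[OF To Q xq, of "Suc n" k] aq cx by simp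
  have "branch_point a' p = b' (p (Suc n))" by (rule branch_point_right_end[OF T' P R])
  also have "\<dots> = c' s" using pn cut_system_child(2)[OF To'] s_def by simp
  also have "\<dots> = d' s" using sync[of s] cx by simp
  also have "\<dots> = a' (q (Suc n))" using qn cut_system_child(3)[OF To'] s_def eq by simp
  also have "\<dots> = branch_point a' q" by (rule branch_point_left_end[OF T' Q L, symmetric])
  finally show ?thesis .
qed

lemma branch_points_eq:
  assumes T: "cut_tree K a b c d" and T': "cut_tree K' a' b' c' d'"
    and sync: "\<And>s. c s = d s \<longleftrightarrow> c' s = d' s"
    and P: "is_branch p" and Q: "is_branch q"
    and xp: "\<And>m. a (p m) \<le> x \<and> x \<le> b (p m)" and xq: "\<And>m. a (q m) \<le> x \<and> x \<le> b (q m)"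
  shows "branch_point a' p = branch_point a' q"
proof (cases "p = q")
  case False
  obtain n \<beta> \<gamma> where n: "p n = q n" "p (Suc n) = \<beta> # p n" "q (Suc n) = \<gamma> # q n" "\<beta> \<noteq> \<gamma>"
    by (rule branches_diverge[OF P Q False])
  show ?thesis
  proof (cases \<beta>)
    case True
    then have "\<gamma> = False" using n by simp
    then show ?thesis using branch_points_eq_split[OF T T' sync Q P xq xp n(1)[symmetric]] n True by simp
  next
    case False
    then have "\<gamma> = True" using n by simp
    then show ?thesis using branch_points_eq_split[OF T T' sync P Q xp xq n(1)] n False by simp
  qed
qed simp

lemma cut_trees_strict_mono:
  assumes T: "cut_tree K a b c d" and T': "cut_tree K' a' b' c' d'"
    and sync: "\<And>s. c s = d s \<longleftrightarrow> c' s = d' s"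
    and x: "x \<in> K" and y: "y \<in> K" and xy: "x < y"
  shows "branch_point a' (branch_of d x) < branch_point a' (branch_of d y)"
proof -
  have To: "cut_system K a b c d" and To': "cut_system K' a' b' c' d'"
    using T T' by (simp_all add: cut_tree_def)
  let ?px = "branch_of d x" and ?py = "branch_of d y"
  have "?px \<noteq> ?py"
    using branch_point_unique[OF T is_branch_branch_of branch_of_encloses[OF T x]]
      branch_point_unique[OF T is_branch_branch_of branch_of_encloses[OF T y]] xy by auto
  then obtain n \<beta> \<gamma> where n: "?px n = ?py n" "?px (Suc n) = \<beta> # ?px n" "?py (Suc n) = \<gamma> # ?py n" "\<beta> \<noteq> \<gamma>"
    by (rule branches_diverge[OF is_branch_branch_of is_branch_branch_of])
  define s where "s = ?px n"
  have "\<beta> = (d s \<le> x)" "\<gamma> = (d s \<le> y)" using n(1-3) s_def by simp_all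
  then have px: "?px (Suc n) = False # ?px n" and py: "?py (Suc n) = True # ?px n"
    using n xy by auto
  have "branch_point a' ?px \<le> b' (?px (Suc n))"
    by (rule branch_point_limit(4)[OF T' is_branch_branch_of])
  also have "\<dots> = c' s" unfolding px s_def by (rule cut_system_child(2)[OF To'])
  also have "\<dots> \<le> d' s" by (rule cut_system_order(2)[OF To'])
  also have "\<dots> = a' (?py (Suc n))" unfolding py s_def by (rule cut_system_child(3)[OF To', symmetric])
  also have "\<dots> \<le> branch_point a' ?py"
    by (rule branch_point_limit(3)[OF T' is_branch_branch_of])
  finally have le: "branch_point a' ?px \<le> branch_point a' ?py" .
  moreover have "branch_point a' ?px \<noteq> branch_point a' ?py"
  proof
    \<comment> \<open>Read the two branches in the second tree: they enclose a common point and split at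
      \<open>s\<close>, so by the symmetric argument they determine the same point of the first tree.\<close>
    assume eq: "branch_point a' ?px = branch_point a' ?py"
    have "branch_point a ?px = branch_point a ?py"
    proof (rule branch_points_eq_split[OF T' T sync[symmetric] is_branch_branch_of is_branch_branch_of])
      show "a' (?px m) \<le> branch_point a' ?px \<and> branch_point a' ?px \<le> b' (?px m)"
        and "a' (?py m) \<le> branch_point a' ?px \<and> branch_point a' ?px \<le> b' (?py m)" for m
        using branch_point_limit(3,4)[OF T' is_branch_branch_of[of d x]]
          branch_point_limit(3,4)[OF T' is_branch_branch_of[of d y]] eq by simp_all
    qed (use n(1) px py in simp_all)
    then show False
      using branch_point_unique[OF T is_branch_branch_of branch_of_encloses[OF T x]]
        branch_point_unique[OF T is_branch_branch_of branch_of_encloses[OF T y]] xy by simp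
  qed
  ultimately show ?thesis by simp
qed

lemma cut_trees_image:
  assumes T: "cut_tree K a b c d" and T': "cut_tree K' a' b' c' d'"
    and sync: "\<And>s. c s = d s \<longleftrightarrow> c' s = d' s"
    and K: "closed K" and K': "closed K'"
  shows "(\<lambda>x. branch_point a' (branch_of d x)) ` K = K'"
proof
  show "(\<lambda>x. branch_point a' (branch_of d x)) ` K \<subseteq> K'"
    using branch_point_mem[OF T' is_branch_branch_of K'] by auto
  show "K' \<subseteq> (\<lambda>x. branch_point a' (branch_of d x)) ` K"
  proof
    fix y assume y: "y \<in> K'"
    let ?q = "branch_of d' y"
    define x where "x = branch_point a ?q"
    have xK: "x \<in> K" unfolding x_def by (rule branch_point_mem[OF T is_branch_branch_of K])
    have "branch_point a' (branch_of d x) = branch_point a' ?q"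
      by (rule branch_points_eq[OF T T' sync is_branch_branch_of is_branch_branch_of
            branch_of_encloses[OF T xK]]) (use branch_point_limit(3,4)[OF T is_branch_branch_of] x_def in simp)
    also have "\<dots> = y"
      using branch_point_unique[OF T' is_branch_branch_of branch_of_encloses[OF T' y]] by simp
    finally show "y \<in> (\<lambda>x. branch_point a' (branch_of d x)) ` K" using xK by (metis image_eqI)
  qed
qed

theorem cut_trees_homeomorphic:
  assumes "cut_tree K a b c d" and "cut_tree K' a' b' c' d'"
    and "\<And>s. c s = d s \<longleftrightarrow> c' s = d' s"
    and "compact K" and "compact K'"
  shows "K homeomorphic K'"
  using strict_mono_surj_compact_homeomorphic[OF assms(4,5) cut_trees_strict_mono[OF assms(1-3)]
      cut_trees_image[OF assms(1-3) compact_imp_closed compact_imp_closed]] assms(4,5) by blast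

lemma branch_avoids_cut:
  assumes T: "cut_system K a b c d" and P: "is_branch ns" and nm: "n < m"
    and z: "c (ns n) < z" "z < d (ns n)"
  shows "z < a (ns m) \<or> b (ns m) < z"
proof -
  obtain \<beta> where \<beta>: "ns (Suc n) = \<beta> # ns n" using P by (rule branch_step)
  have "a (ns (Suc n)) \<le> a (ns m)" using cut_system_incseq[OF T P] nm by (simp add: incseq_def)
  moreover have "b (ns m) \<le> b (ns (Suc n))" using cut_system_decseq[OF T P] nm by (simp add: decseq_def)
  ultimately show ?thesis using \<beta> z cut_system_child(2,3)[OF T, where s="ns n"] by (cases \<beta>) auto
qed

lemma branch_limits:
  assumes T: "cut_system K a b c d" and P: "is_branch ns" and K: "closed K"
  obtains \<alpha> \<beta> where "(\<lambda>n. a (ns n)) \<longlonglongrightarrow> \<alpha>" "(\<lambda>n. b (ns n)) \<longlonglongrightarrow> \<beta>" "\<And>n. a (ns n) \<le> \<alpha>"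
    "\<And>n. \<beta> \<le> b (ns n)" "\<alpha> \<le> \<beta>" "\<alpha> \<in> K" "\<beta> \<in> K"
proof -
  have bnd: "\<forall>i. a (ns i) \<le> b (ns 0)" using cut_system_left_le_right[OF T P] by simp
  obtain \<alpha> where A: "(\<lambda>n. a (ns n)) \<longlonglongrightarrow> \<alpha>" "\<forall>i. a (ns i) \<le> \<alpha>"
    by (rule incseq_convergent[OF cut_system_incseq[OF T P] bnd])
  have bnd2: "\<forall>i. a (ns 0) \<le> b (ns i)" using cut_system_left_le_right[OF T P] by simp
  obtain \<beta> where B: "(\<lambda>n. b (ns n)) \<longlonglongrightarrow> \<beta>" "\<forall>i. \<beta> \<le> b (ns i)"
    by (rule decseq_convergent[OF cut_system_decseq[OF T P] bnd2])
  have "\<alpha> \<le> \<beta>"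
  proof (rule LIMSEQ_le[OF A(1) B(1)])
    show "\<exists>N. \<forall>n\<ge>N. a (ns n) \<le> b (ns n)" using cut_system_left_le_right[OF T P] by blast
  qed
  moreover have "\<alpha> \<in> K"
    using closed_sequentially[OF K _ A(1)] cut_system_left_mem[OF T] by blast
  moreover have "\<beta> \<in> K"
    using closed_sequentially[OF K _ B(1)] cut_system_right_mem[OF T] by blast
  ultimately show ?thesis using that A B by blast
qed


section \<open>Self-similarity of real achievement sets\<close>

lemma subsum_real: "subsum v e = (\<Sum>n. if e n then v n else (0::real))"
  unfolding subsum_def by (rule suminf_cong) simp

lemma summable_selected_real:
  fixes v :: "nat \<Rightarrow> real"
  assumes "summable (\<lambda>n. norm (v n))"
  shows "summable (\<lambda>n. if e n then v n else 0)"
proof -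
  have "(\<lambda>n. (if e n then 1 else 0) *\<^sub>R v n) = (\<lambda>n. if e n then v n else 0)" by auto
  then show ?thesis using summable_selected[OF assms, of e] by simp
qed

lemma summable_norm_shift:
  fixes v :: "nat \<Rightarrow> real"
  assumes "summable (\<lambda>n. norm (v n))" shows "summable (\<lambda>n. norm (v (Suc n)))"
  using assms summable_Suc_iff[of "\<lambda>n. norm (v n)"] by simp

lemma subsum_head:
  fixes v :: "nat \<Rightarrow> real"
  assumes "summable (\<lambda>n. norm (v n))"
  shows "subsum v e = (if e 0 then v 0 else 0) + subsum (\<lambda>n. v (Suc n)) (\<lambda>n. e (Suc n))"
  using suminf_split_head[OF summable_selected_real[OF assms, of e]] unfolding subsum_real by simp

lemma achievement_set_split_head:
  fixes v :: "nat \<Rightarrow> real"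
  assumes sv: "summable (\<lambda>n. norm (v n))"
  shows "achievement_set v = achievement_set (\<lambda>n. v (Suc n)) \<union> (\<lambda>t. v 0 + t) ` achievement_set (\<lambda>n. v (Suc n))"
proof
  show "achievement_set v \<subseteq> achievement_set (\<lambda>n. v (Suc n)) \<union> (\<lambda>t. v 0 + t) ` achievement_set (\<lambda>n. v (Suc n))"
  proof
    fix t assume "t \<in> achievement_set v"
    then obtain e where t: "t = subsum v e" unfolding achievement_set_eq_range_subsum by auto
    show "t \<in> achievement_set (\<lambda>n. v (Suc n)) \<union> (\<lambda>t. v 0 + t) ` achievement_set (\<lambda>n. v (Suc n))"
    proof (cases "e 0")
      case True
      then have "t = v 0 + subsum (\<lambda>n. v (Suc n)) (\<lambda>n. e (Suc n))" using t subsum_head[OF sv, of e] by simp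
      then show ?thesis unfolding achievement_set_eq_range_subsum by blast
    next
      case False
      then have "t = subsum (\<lambda>n. v (Suc n)) (\<lambda>n. e (Suc n))" using t subsum_head[OF sv, of e] by simp
      then show ?thesis unfolding achievement_set_eq_range_subsum by blast
    qed
  qed
  have H: "(if b then v 0 else 0) + subsum (\<lambda>n. v (Suc n)) e' \<in> achievement_set v" for b e'
  proof -
    define e where "e n = (case n of 0 \<Rightarrow> b | Suc m \<Rightarrow> e' m)" for n
    have "subsum v e = (if b then v 0 else 0) + subsum (\<lambda>n. v (Suc n)) e'"
      using subsum_head[OF sv, of e] by (simp add: e_def)
    then show ?thesis unfolding achievement_set_eq_range_subsum by (metis rangeI)
  qed
  show "achievement_set (\<lambda>n. v (Suc n)) \<union> (\<lambda>t. v 0 + t) ` achievement_set (\<lambda>n. v (Suc n)) \<subseteq> achievement_set v"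
  proof
    fix t assume "t \<in> achievement_set (\<lambda>n. v (Suc n)) \<union> (\<lambda>t. v 0 + t) ` achievement_set (\<lambda>n. v (Suc n))"
    then consider e' where "t = subsum (\<lambda>n. v (Suc n)) e'" | e' where "t = v 0 + subsum (\<lambda>n. v (Suc n)) e'"
      unfolding achievement_set_eq_range_subsum by blast
    then show "t \<in> achievement_set v"
    proof cases
      case 1 then show ?thesis using H[of False e'] by simp
    next
      case 2 then show ?thesis using H[of True e'] by simp
    qed
  qed
qed

lemma achievement_set_scale:
  fixes v :: "nat \<Rightarrow> real"
  assumes sv: "summable (\<lambda>n. norm (v n))"
  shows "achievement_set (\<lambda>n. q * v n) = (\<lambda>t. q * t) ` achievement_set v"
proof -
  have "subsum (\<lambda>n. q * v n) e = q * subsum v e" for e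
    unfolding subsum_real using suminf_mult[OF summable_selected_real[OF sv, of e], of q]
    by (simp add: if_distrib cong: if_cong)
  then show ?thesis unfolding achievement_set_eq_range_subsum by (auto simp: image_iff)
qed

lemma achievement_set_subset_sum:
  fixes v :: "nat \<Rightarrow> real"
  assumes sv: "summable (\<lambda>n. norm (v n))" and nn: "\<And>n. 0 \<le> v n"
  shows "achievement_set v \<subseteq> {0..(\<Sum>n. v n)}"
proof
  fix t assume "t \<in> achievement_set v"
  then obtain e where t: "t = subsum v e" unfolding achievement_set_eq_range_subsum by auto
  have sv': "summable v" using sv nn by simp
  have "0 \<le> t" unfolding t subsum_real by (rule suminf_nonneg[OF summable_selected_real[OF sv]]) (use nn in auto)
  moreover have "t \<le> (\<Sum>n. v n)" unfolding t subsum_real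
    by (rule suminf_le[OF _ summable_selected_real[OF sv] sv']) (use nn in auto)
  ultimately show "t \<in> {0..(\<Sum>n. v n)}" by simp
qed

lemma achievement_set_reflect:
  fixes v :: "nat \<Rightarrow> real"
  assumes sv: "summable (\<lambda>n. norm (v n))" and t: "t \<in> achievement_set v"
  shows "(\<Sum>n. v n) - t \<in> achievement_set v"
proof -
  obtain e where te: "t = subsum v e" using t unfolding achievement_set_eq_range_subsum by auto
  have sv': "summable v" using sv summable_norm_cancel by blast
  have "(\<Sum>n. v n) - t = (\<Sum>n. v n - (if e n then v n else 0))"
    unfolding te subsum_real by (rule suminf_diff[OF sv' summable_selected_real[OF sv]])
  also have "\<dots> = subsum v (\<lambda>n. \<not> e n)" unfolding subsum_real by (rule suminf_cong) auto
  finally show ?thesis unfolding achievement_set_eq_range_subsum by (metis rangeI)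
qed

lemma zero_in_achievement_set:
  fixes v :: "nat \<Rightarrow> real"
  shows "0 \<in> achievement_set v"
proof -
  have "subsum v (\<lambda>n. False) = 0" unfolding subsum_real by simp
  then show ?thesis unfolding achievement_set_eq_range_subsum by (metis rangeI)
qed

lemma suminf_in_achievement_set:
  fixes v :: "nat \<Rightarrow> real"
  assumes sv: "summable (\<lambda>n. norm (v n))"
  shows "(\<Sum>n. v n) \<in> achievement_set v"
  using achievement_set_reflect[OF sv zero_in_achievement_set] by simp

section \<open>Closed sets filling the unit interval\<close>

lemma unit_interval_subset_contractive:
  fixes S :: "real set"
  assumes cl: "closed S" and sub: "S \<subseteq> {0..1}" and ne: "S \<noteq> {}"
    and til: "\<And>t. t \<in> {0..1} \<Longrightarrow> \<exists>u\<in>{0..1}. \<forall>w\<in>S. \<exists>s\<in>S. \<bar>s - t\<bar> \<le> \<bar>w - u\<bar> / 2"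
  shows "{0..1} \<subseteq> S"
proof -
  have A: "\<forall>t\<in>{0..1}. \<exists>s\<in>S. \<bar>s - t\<bar> \<le> (1/2)^n" for n
  proof (induct n)
    case 0
    obtain s where s: "s \<in> S" using ne by auto
    then have "s \<in> {0..1}" using sub by blast
    then have "\<bar>s - t\<bar> \<le> (1/2)^0" if "t \<in> {0..1}" for t :: real using that by auto
    then show ?case using s by blast
  next
    case (Suc n)
    show ?case
    proof
      fix t :: real assume t: "t \<in> {0..1}"
      obtain u where u: "u \<in> {0..1}" "\<forall>w\<in>S. \<exists>s\<in>S. \<bar>s - t\<bar> \<le> \<bar>w - u\<bar> / 2" using til[OF t] by blast
      obtain w where w: "w \<in> S" "\<bar>w - u\<bar> \<le> (1/2)^n" using Suc u(1) by blast
      obtain s where s: "s \<in> S" "\<bar>s - t\<bar> \<le> \<bar>w - u\<bar> / 2" using u(2) w(1) by blast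
      have "\<bar>s - t\<bar> \<le> (1/2)^Suc n" using s(2) w(2) by simp
      then show "\<exists>s\<in>S. \<bar>s - t\<bar> \<le> (1/2)^Suc n" using s(1) by blast
    qed
  qed
  show ?thesis
  proof
    fix t :: real assume t: "t \<in> {0..1}"
    have "\<forall>\<epsilon>>0. \<exists>y\<in>S. dist y t < \<epsilon>"
    proof (intro allI impI)
      fix \<epsilon> :: real assume "\<epsilon> > 0"
      then obtain n where n: "(1/2)^n < \<epsilon>" using real_arch_pow_inv[of \<epsilon> "1/2"] by auto
      obtain s where s: "s \<in> S" "\<bar>s - t\<bar> \<le> (1/2)^n" using A t by blast
      then have "dist s t < \<epsilon>" using n by (simp add: dist_real_def)
      then show "\<exists>y\<in>S. dist y t < \<epsilon>" using s by blast
    qed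
    then show "t \<in> S" using closed_approachable[OF cl] by blast
  qed
qed

lemma achievement_set_shift_geometric:
  fixes v :: "nat \<Rightarrow> real"
  assumes sv: "summable (\<lambda>n. norm (v n))" and g: "\<And>n. v (Suc n) = q * v n"
  shows "achievement_set (\<lambda>n. v (Suc n)) = (\<lambda>t. q * t) ` achievement_set v"
  using achievement_set_scale[OF sv, of q] g by simp

lemma affine_image_Int_atLeastAtMost:
  fixes p0 s :: real
  assumes s: "s > 0"
  shows "(\<lambda>t. p0 + s*t) ` X \<inter> {p0 + s*\<alpha> .. p0 + s*\<beta>} = (\<lambda>t. p0 + s*t) ` (X \<inter> {\<alpha>..\<beta>})"
  using s by (auto simp: image_iff)

section \<open>The unit interval and the middle-thirds Cantor set\<close>

definition dyadic_terms :: "nat \<Rightarrow> real" where "dyadic_terms n = (1/2)^Suc n"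

lemma dyadic_terms_sums: "dyadic_terms sums 1" unfolding dyadic_terms_def by (rule power_half_series)

lemma dyadic_terms_summable: "summable (\<lambda>n. norm (dyadic_terms n))"
  using dyadic_terms_sums by (simp add: dyadic_terms_def sums_iff)

lemma achievement_set_dyadic_terms: "achievement_set dyadic_terms = {0..1}"
proof -
  let ?A = "achievement_set dyadic_terms"
  have st: "dyadic_terms (Suc n) = (1/2) * dyadic_terms n" for n by (simp add: dyadic_terms_def)
  have e1: "?A = achievement_set (\<lambda>n. dyadic_terms (Suc n)) \<union> (\<lambda>t. dyadic_terms 0 + t) ` achievement_set (\<lambda>n. dyadic_terms (Suc n))"
    by (rule achievement_set_split_head[OF dyadic_terms_summable])
  have e2: "achievement_set (\<lambda>n. dyadic_terms (Suc n)) = (\<lambda>t. (1/2)*t) ` ?A" by (rule achievement_set_shift_geometric[OF dyadic_terms_summable st])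
  have e3: "dyadic_terms 0 = 1/2" by (simp add: dyadic_terms_def)
  have split: "?A = (\<lambda>t. (1/2) * t) ` ?A \<union> (\<lambda>t. 1/2 + t) ` ((\<lambda>t. (1/2) * t) ` ?A)"
    using e1 unfolding e2 e3 .
  have nn: "\<And>n. 0 \<le> dyadic_terms n" by (simp add: dyadic_terms_def)
  have sub: "?A \<subseteq> {0..1}"
    using achievement_set_subset_sum[OF dyadic_terms_summable nn] dyadic_terms_sums by (simp add: sums_iff)
  have cl: "closed ?A" using compact_achievement_set[OF dyadic_terms_summable] compact_imp_closed by blast
  have h1: "w \<in> ?A \<Longrightarrow> w/2 \<in> ?A" for w using split by auto
  have h2: "w \<in> ?A \<Longrightarrow> 1/2 + w/2 \<in> ?A" for w using split by auto
  have "{0..1} \<subseteq> ?A"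
  proof (rule unit_interval_subset_contractive[OF cl sub])
    show "?A \<noteq> {}" using zero_in_achievement_set by blast
    fix t :: real assume t: "t \<in> {0..1}"
    show "\<exists>u\<in>{0..1}. \<forall>w\<in>?A. \<exists>s\<in>?A. \<bar>s - t\<bar> \<le> \<bar>w - u\<bar> / 2"
    proof (cases "t \<le> 1/2")
      case True
      show ?thesis
      proof (rule bexI[of _ "2*t"], rule ballI)
        fix w assume "w \<in> ?A"
        then show "\<exists>s\<in>?A. \<bar>s - t\<bar> \<le> \<bar>w - 2*t\<bar> / 2" using h1 by (intro bexI[of _ "w/2"]) (auto simp: abs_if)
      qed (use t True in auto)
    next
      case False
      show ?thesis
      proof (rule bexI[of _ "2*t - 1"], rule ballI)
        fix w assume "w \<in> ?A"
        then show "\<exists>s\<in>?A. \<bar>s - t\<bar> \<le> \<bar>w - (2*t - 1)\<bar> / 2" using h2 by (intro bexI[of _ "1/2 + w/2"]) (auto simp: abs_if)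
      qed (use t False in auto)
    qed
  qed
  then show ?thesis using sub by blast
qed

definition ternary_terms :: "nat \<Rightarrow> real" where "ternary_terms n = (2/3) * (1/3)^n"

lemma ternary_terms_sums: "ternary_terms sums 1"
proof -
  have "(\<lambda>n. (1/3::real)^n) sums (1 / (1 - 1/3))" by (rule geometric_sums) simp
  then have "(\<lambda>n. (2/3) * (1/3::real)^n) sums ((2/3) * (1 / (1 - 1/3)))" by (rule sums_mult)
  then show ?thesis unfolding ternary_terms_def by simp
qed

lemma ternary_terms_summable: "summable (\<lambda>n. norm (ternary_terms n))"
proof -
  have "norm (ternary_terms n) = ternary_terms n" for n by (simp add: ternary_terms_def)
  then show ?thesis using ternary_terms_sums by (simp add: sums_iff)
qed

definition cantor_ternary where "cantor_ternary = achievement_set ternary_terms"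

lemma cantor_ternary_split: "cantor_ternary = (\<lambda>t. (1/3) * t) ` cantor_ternary \<union> (\<lambda>t. 2/3 + t) ` ((\<lambda>t. (1/3) * t) ` cantor_ternary)"
proof -
  have st: "ternary_terms (Suc n) = (1/3) * ternary_terms n" for n by (simp add: ternary_terms_def)
  have e1: "cantor_ternary = achievement_set (\<lambda>n. ternary_terms (Suc n)) \<union> (\<lambda>t. ternary_terms 0 + t) ` achievement_set (\<lambda>n. ternary_terms (Suc n))"
    unfolding cantor_ternary_def by (rule achievement_set_split_head[OF ternary_terms_summable])
  have e2: "achievement_set (\<lambda>n. ternary_terms (Suc n)) = (\<lambda>t. (1/3)*t) ` cantor_ternary" unfolding cantor_ternary_def by (rule achievement_set_shift_geometric[OF ternary_terms_summable st])
  have e3: "ternary_terms 0 = 2/3" by (simp add: ternary_terms_def)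
  show ?thesis using e1 unfolding e2 e3 .
qed

lemma cantor_ternary_subset: "cantor_ternary \<subseteq> {0..1}"
proof -
  have nn: "\<And>n. 0 \<le> ternary_terms n" by (simp add: ternary_terms_def)
  show ?thesis using achievement_set_subset_sum[OF ternary_terms_summable nn] ternary_terms_sums unfolding cantor_ternary_def by (simp add: sums_iff)
qed

lemma compact_cantor_ternary: "compact cantor_ternary"
  unfolding cantor_ternary_def by (rule compact_achievement_set[OF ternary_terms_summable])

lemma cantor_ternary_0: "0 \<in> cantor_ternary" unfolding cantor_ternary_def by (rule zero_in_achievement_set)
lemma cantor_ternary_1: "1 \<in> cantor_ternary" unfolding cantor_ternary_def using suminf_in_achievement_set[OF ternary_terms_summable] ternary_terms_sums by (simp add: sums_iff)

lemma cantor_ternary_Int_left: "cantor_ternary \<inter> {0..1/3} = (\<lambda>t. (1/3) * t) ` cantor_ternary"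
  using cantor_ternary_subset by (subst (1) cantor_ternary_split) (auto simp: image_iff)

lemma cantor_ternary_Int_right: "cantor_ternary \<inter> {2/3..1} = (\<lambda>t. 2/3 + (1/3) * t) ` cantor_ternary"
  using cantor_ternary_subset by (subst (1) cantor_ternary_split) (auto simp: image_iff)

lemma cantor_ternary_gap: "cantor_ternary \<inter> {1/3<..<2/3} = {}"
  using cantor_ternary_subset by (subst cantor_ternary_split) (auto simp: image_iff)

fun ternary_node :: "bool list \<Rightarrow> real \<times> real" where
  "ternary_node [] = (0, 1)"
| "ternary_node (\<beta> # l) = (if \<beta> then (fst (ternary_node l) + 2/3 * snd (ternary_node l), snd (ternary_node l) / 3) else (fst (ternary_node l), snd (ternary_node l) / 3))"

definition "ternary_a l = fst (ternary_node l)"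
definition "ternary_b l = fst (ternary_node l) + snd (ternary_node l)"
definition "ternary_c l = fst (ternary_node l) + snd (ternary_node l) / 3"
definition "ternary_d l = fst (ternary_node l) + 2/3 * snd (ternary_node l)"

lemma ternary_node_scale: "snd (ternary_node l) = (1/3)^length l"
  by (induct l) auto

lemma ternary_node_scale_pos: "snd (ternary_node l) > 0" by (simp add: ternary_node_scale)

lemma length_branch: "is_branch ns \<Longrightarrow> length (ns n) = n"
proof (induct n)
  case 0 then show ?case by (simp add: is_branch_def)
next
  case (Suc n)
  obtain \<beta> where "ns (Suc n) = \<beta> # ns n" using Suc(2) by (rule branch_step)
  then show ?case using Suc by simp
qed

lemma cantor_ternary_Int_node: "cantor_ternary \<inter> {ternary_a l .. ternary_b l} = (\<lambda>t. fst (ternary_node l) + snd (ternary_node l) * t) ` cantor_ternary"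
proof (induct l)
  case Nil then show ?case using cantor_ternary_subset by (auto simp: ternary_a_def ternary_b_def)
next
  case (Cons \<beta> l)
  define p where "p = fst (ternary_node l)"
  define s where "s = snd (ternary_node l)"
  have s: "s > 0" using ternary_node_scale_pos s_def by simp
  have IH: "cantor_ternary \<inter> {p .. p + s} = (\<lambda>t. p + s * t) ` cantor_ternary" using Cons by (simp add: ternary_a_def ternary_b_def p_def s_def)
  show ?case
  proof (cases \<beta>)
    case False
    have "cantor_ternary \<inter> {p .. p + s/3} = (cantor_ternary \<inter> {p .. p + s}) \<inter> {p + s*0 .. p + s*(1/3)}" using s by auto
    also have "\<dots> = (\<lambda>t. p + s * t) ` (cantor_ternary \<inter> {0..1/3})" unfolding IH by (rule affine_image_Int_atLeastAtMost[OF s])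
    also have "\<dots> = (\<lambda>t. p + (s/3) * t) ` cantor_ternary" unfolding cantor_ternary_Int_left image_image by (simp add: mult.assoc)
    finally show ?thesis using False by (simp add: ternary_a_def ternary_b_def p_def s_def)
  next
    case True
    have "cantor_ternary \<inter> {(p + 2/3* s) .. (p + 2/3* s + s/3)} = (cantor_ternary \<inter> {p .. p + s}) \<inter> {p + s*(2/3) .. p + s*1}" using s by auto
    also have "\<dots> = (\<lambda>t. p + s * t) ` (cantor_ternary \<inter> {2/3..1})" unfolding IH by (rule affine_image_Int_atLeastAtMost[OF s])
    also have "\<dots> = (\<lambda>t. (p + 2/3* s) + (s/3) * t) ` cantor_ternary" unfolding cantor_ternary_Int_right image_image by (simp add: algebra_simps)
    finally show ?thesis using True by (simp add: ternary_a_def ternary_b_def p_def s_def)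
  qed
qed

lemma ternary_node_mem: "t \<in> cantor_ternary \<Longrightarrow> fst (ternary_node l) + snd (ternary_node l) * t \<in> cantor_ternary"
  using cantor_ternary_Int_node[of l] by blast

lemma cantor_ternary_cut_tree: "cut_tree cantor_ternary ternary_a ternary_b ternary_c ternary_d"
  unfolding cut_tree_def
proof (intro conjI allI impI)
  show "cantor_ternary \<subseteq> {ternary_a []..ternary_b []}" using cantor_ternary_subset by (simp add: ternary_a_def ternary_b_def)
  show "cut_system cantor_ternary ternary_a ternary_b ternary_c ternary_d"
    unfolding cut_system_def
  proof (intro allI conjI ballI)
    fix l
    have s: "snd (ternary_node l) > 0" by (rule ternary_node_scale_pos)
    show "ternary_a l \<in> cantor_ternary" using ternary_node_mem[OF cantor_ternary_0, of l] by (simp add: ternary_a_def)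
    show "ternary_b l \<in> cantor_ternary" using ternary_node_mem[OF cantor_ternary_1, of l] by (simp add: ternary_b_def)
    show "ternary_a l < ternary_c l" "ternary_c l \<le> ternary_d l" "ternary_d l < ternary_b l" using s by (auto simp: ternary_a_def ternary_b_def ternary_c_def ternary_d_def)
    show "ternary_a (False # l) = ternary_a l" "ternary_b (False # l) = ternary_c l" "ternary_a (True # l) = ternary_d l" "ternary_b (True # l) = ternary_b l"
      by (auto simp: ternary_a_def ternary_b_def ternary_c_def ternary_d_def)
    fix x assume x: "x \<in> cantor_ternary"
    show "\<not> (ternary_c l < x \<and> x < ternary_d l)"
    proof
      assume cx: "ternary_c l < x \<and> x < ternary_d l"
      then have "x \<in> cantor_ternary \<inter> {ternary_a l .. ternary_b l}" using x s by (auto simp: ternary_a_def ternary_b_def ternary_c_def ternary_d_def)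
      then obtain t where t: "t \<in> cantor_ternary" "x = fst (ternary_node l) + snd (ternary_node l) * t" using cantor_ternary_Int_node by auto
      have "1/3 < t" "t < 2/3" using cx t s by (auto simp: ternary_c_def ternary_d_def)
      then show False using cantor_ternary_gap t by auto
    qed
  qed
  fix ns :: "nat \<Rightarrow> bool list" assume P: "is_branch ns"
  have "(\<lambda>n. ternary_b (ns n) - ternary_a (ns n)) = (\<lambda>n. (1/3)^n)"
    using length_branch[OF P] by (simp add: ternary_a_def ternary_b_def ternary_node_scale)
  then show "(\<lambda>n. ternary_b (ns n) - ternary_a (ns n)) \<longlonglongrightarrow> 0" by (simp add: LIMSEQ_power_zero)
qed

section \<open>Enumerating the rationals\<close>

definition rat_enum :: "nat \<Rightarrow> real" where "rat_enum k = of_rat (from_nat k)"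

definition first_rat :: "real set \<Rightarrow> nat" where "first_rat U = (LEAST k. rat_enum k \<in> U)"

lemma rat_enum_dense: "x < y \<Longrightarrow> \<exists>k. x < rat_enum k \<and> rat_enum k < y"
proof -
  assume "x < y"
  then obtain q where q: "q \<in> \<rat>" "x < q" "q < y" using Rats_dense_in_real by blast
  then obtain q' where "q = of_rat q'" by (auto elim: Rats_cases)
  then have "q = rat_enum (to_nat q')" by (simp add: rat_enum_def)
  then show ?thesis using q by blast
qed

lemma first_rat_mem:
  assumes "open U" and "U \<noteq> {}"
  shows "rat_enum (first_rat U) \<in> U"
proof -
  obtain y e where "y \<in> U" "e > 0" "ball y e \<subseteq> U" using assms open_contains_ball by blast
  moreover obtain k where "y - e < rat_enum k" "rat_enum k < y + e"
    using rat_enum_dense[of "y - e" "y + e"] \<open>e > 0\<close> by auto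
  ultimately have "rat_enum k \<in> U" by (auto simp: dist_real_def)
  then show ?thesis unfolding first_rat_def by (rule LeastI)
qed

lemma first_rat_le: "rat_enum k \<in> U \<Longrightarrow> first_rat U \<le> k"
  unfolding first_rat_def by (rule Least_le)

lemma infinite_injective_bounded_False:
  fixes k :: "nat \<Rightarrow> nat"
  assumes "infinite I" "\<And>n. n \<in> I \<Longrightarrow> k n \<le> j" "\<And>n m. n \<in> I \<Longrightarrow> m \<in> I \<Longrightarrow> n < m \<Longrightarrow> k n \<noteq> k m"
  shows False
proof -
  have "inj_on k I" unfolding inj_on_def by (metis assms(3) linorder_neqE_nat)
  moreover have "k ` I \<subseteq> {..j}" using assms(2) by auto
  ultimately have "finite I" by (meson finite_atMost finite_imageD finite_subset)
  then show False using assms(1) by simp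
qed

section \<open>Gaps of closed sets\<close>

definition gap_lo :: "real set \<Rightarrow> real \<Rightarrow> real" where "gap_lo K y = Sup (K \<inter> {..y})"
definition gap_hi :: "real set \<Rightarrow> real \<Rightarrow> real" where "gap_hi K y = Inf (K \<inter> {y..})"

lemma gap_bounds:
  assumes K: "closed K" and a: "a \<in> K" "a < y" and b: "b \<in> K" "y < b" and y: "y \<notin> K"
  shows "gap_lo K y \<in> K" "a \<le> gap_lo K y" "gap_lo K y < y" "y < gap_hi K y" "gap_hi K y \<le> b" "gap_hi K y \<in> K"
    "\<And>x. x \<in> K \<Longrightarrow> x < y \<Longrightarrow> x \<le> gap_lo K y" "\<And>x. x \<in> K \<Longrightarrow> y < x \<Longrightarrow> gap_hi K y \<le> x"
    "\<And>x. x \<in> K \<Longrightarrow> \<not> (gap_lo K y < x \<and> x < gap_hi K y)"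
proof -
  have ne1: "K \<inter> {..y} \<noteq> {}" using a by auto
  have bd1: "bdd_above (K \<inter> {..y})" by (rule bdd_aboveI[of _ y]) auto
  have cl1: "closed (K \<inter> {..y})" using K by (intro closed_Int) auto
  have ne2: "K \<inter> {y..} \<noteq> {}" using b by auto
  have bd2: "bdd_below (K \<inter> {y..})" by (rule bdd_belowI[of _ y]) auto
  have cl2: "closed (K \<inter> {y..})" using K by (intro closed_Int) auto
  have g1: "gap_lo K y \<in> K \<inter> {..y}" unfolding gap_lo_def by (rule closed_contains_Sup[OF ne1 bd1 cl1])
  have g2: "gap_hi K y \<in> K \<inter> {y..}" unfolding gap_hi_def by (rule closed_contains_Inf[OF ne2 bd2 cl2])
  show L: "\<And>x. x \<in> K \<Longrightarrow> x < y \<Longrightarrow> x \<le> gap_lo K y"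
    unfolding gap_lo_def by (rule cSup_upper) (use bd1 in auto)
  show R: "\<And>x. x \<in> K \<Longrightarrow> y < x \<Longrightarrow> gap_hi K y \<le> x"
    unfolding gap_hi_def by (rule cInf_lower) (use bd2 in auto)
  show "gap_lo K y \<in> K" "gap_hi K y \<in> K" using g1 g2 by auto
  show "gap_lo K y < y" using g1 y by (cases "gap_lo K y = y") auto
  show "y < gap_hi K y" using g2 y by (cases "gap_hi K y = y") auto
  show "a \<le> gap_lo K y" using L a by blast
  show "gap_hi K y \<le> b" using R b by blast
  show "\<And>x. x \<in> K \<Longrightarrow> \<not> (gap_lo K y < x \<and> x < gap_hi K y)"
  proof
    fix x assume x: "x \<in> K" "gap_lo K y < x \<and> x < gap_hi K y"
    show False
    proof (cases "x < y")
      case True then show False using L[OF x(1)] x by simp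
    next
      case False
      then have "y < x" using x y by (cases "x = y") auto
      then show False using R[OF x(1)] x by simp
    qed
  qed
qed


definition accum_right :: "real set \<Rightarrow> real \<Rightarrow> bool" where
  "accum_right K x \<longleftrightarrow> (\<forall>e>0. \<exists>y\<in>K. x < y \<and> y < x + e)"

definition accum_left :: "real set \<Rightarrow> real \<Rightarrow> bool" where
  "accum_left K x \<longleftrightarrow> (\<forall>e>0. \<exists>y\<in>K. x - e < y \<and> y < x)"

definition accum_pair :: "real set \<Rightarrow> real \<Rightarrow> real \<Rightarrow> bool" where
  "accum_pair K a b \<longleftrightarrow> a < b \<and> a \<in> K \<and> b \<in> K \<and> accum_right K a \<and> accum_left K b"

lemma accum_rightD:
  assumes "accum_right K x" and "x < y"
  shows "\<exists>z\<in>K. x < z \<and> z < y"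
proof -
  obtain z where "z \<in> K" "x < z" "z < x + (y - x)"
    using assms unfolding accum_right_def by (meson diff_gt_0_iff_gt)
  then show ?thesis by auto
qed

lemma accum_leftD:
  assumes "accum_left K x" and "y < x"
  shows "\<exists>z\<in>K. y < z \<and> z < x"
proof -
  obtain z where "z \<in> K" "x - (x - y) < z" "z < x"
    using assms unfolding accum_left_def by (meson diff_gt_0_iff_gt)
  then show ?thesis by auto
qed

lemma islimpt_imp_accum_right:
  assumes "x islimpt K" and "\<delta> > 0" and "\<And>y. x - \<delta> < y \<Longrightarrow> y < x \<Longrightarrow> y \<notin> K"
  shows "accum_right K x"
  unfolding accum_right_def
proof (intro allI impI)
  fix e :: real assume "e > 0"
  then obtain z where "z \<in> K" "z \<noteq> x" "dist z x < min e \<delta>"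
    using assms(1,2) unfolding islimpt_approachable by (metis min_less_iff_conj)
  moreover have "x < z"
    using calculation assms(3)[of z] by (cases "z < x") (auto simp: dist_real_def)
  ultimately show "\<exists>z\<in>K. x < z \<and> z < x + e" by (intro bexI[of _ z]) (auto simp: dist_real_def)
qed

lemma islimpt_imp_accum_left:
  assumes "x islimpt K" and "\<delta> > 0" and "\<And>y. x < y \<Longrightarrow> y < x + \<delta> \<Longrightarrow> y \<notin> K"
  shows "accum_left K x"
  unfolding accum_left_def
proof (intro allI impI)
  fix e :: real assume "e > 0"
  then obtain z where "z \<in> K" "z \<noteq> x" "dist z x < min e \<delta>"
    using assms(1,2) unfolding islimpt_approachable by (metis min_less_iff_conj)
  moreover have "z < x"
    using calculation assms(3)[of z] by (cases "x < z") (auto simp: dist_real_def)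
  ultimately show "\<exists>z\<in>K. x - e < z \<and> z < x" by (intro bexI[of _ z]) (auto simp: dist_real_def)
qed

lemma accum_pair_gap:
  assumes K: "closed K" and I: "accum_pair K a b" and y: "a < y" "y < b" "y \<notin> K"
  shows "a < gap_lo K y" "gap_hi K y < b"
proof -
  have ab: "a \<in> K" "b \<in> K" using I by (auto simp: accum_pair_def)
  note G = gap_bounds[OF K ab(1) y(1) ab(2) y(2,3)]
  obtain z where "z \<in> K" "a < z" "z < y" using I y(1) accum_rightD[of K a y] by (auto simp: accum_pair_def)
  then show "a < gap_lo K y" using G(7) by fastforce
  obtain z where "z \<in> K" "y < z" "z < b" using I y(2) accum_leftD[of K b y] by (auto simp: accum_pair_def)
  then show "gap_hi K y < b" using G(8) by fastforce
qed

section \<open>Every Cantor set is homeomorphic to the middle-thirds set\<close>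

definition gap_rat :: "real set \<Rightarrow> real \<Rightarrow> real \<Rightarrow> real" where
  "gap_rat C a b = rat_enum (first_rat ({a<..<b} - C))"

fun cantor_node :: "real set \<Rightarrow> bool list \<Rightarrow> real \<times> real" where
  "cantor_node C [] = (Inf C, Sup C)"
| "cantor_node C (\<beta> # l) =
    (let p = cantor_node C l; y = gap_rat C (fst p) (snd p) in
     if \<beta> then (gap_hi C y, snd p) else (fst p, gap_lo C y))"

definition "cantor_a C l = fst (cantor_node C l)"
definition "cantor_b C l = snd (cantor_node C l)"
definition "cantor_c C l = gap_lo C (gap_rat C (cantor_a C l) (cantor_b C l))"
definition "cantor_d C l = gap_hi C (gap_rat C (cantor_a C l) (cantor_b C l))"

lemma cantor_node_Cons:
  "cantor_a C (\<beta> # l) = (if \<beta> then cantor_d C l else cantor_a C l)"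
  "cantor_b C (\<beta> # l) = (if \<beta> then cantor_b C l else cantor_c C l)"
  by (simp_all add: cantor_a_def cantor_b_def cantor_c_def cantor_d_def Let_def)

lemma cantor_set_closed:
  fixes C :: "'a::t2_space set"
  shows "cantor_set C \<Longrightarrow> closed C"
  unfolding cantor_set_def by (simp add: compact_imp_closed)

lemma cantor_set_islimpt: "cantor_set C \<Longrightarrow> x \<in> C \<Longrightarrow> x islimpt C"
  unfolding cantor_set_def perfect_set_def by blast

lemma cantor_set_no_interval:
  fixes C :: "real set"
  assumes C: "cantor_set C" and ab: "a < b"
  shows "{a<..<b} - C \<noteq> {}"
proof
  assume "{a<..<b} - C = {}"
  then have "{a<..<b} \<subseteq> C" by auto
  then obtain x where x: "{a<..<b} \<subseteq> {x}"
    using C connected_Ioo unfolding cantor_set_def totally_disconnected_def by blast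
  have "(2*a+b)/3 \<in> {a<..<b}" "(a+2*b)/3 \<in> {a<..<b}" using ab by auto
  then have "(2*a+b)/3 = (a+2*b)/3" using x by blast
  moreover have "(2*a+b)/3 < (a+2*b)/3" using ab by (intro divide_strict_right_mono) auto
  ultimately show False by simp
qed

lemma gap_rat:
  fixes C :: "real set"
  assumes "cantor_set C" and "a < b"
  shows "a < gap_rat C a b" "gap_rat C a b < b" "gap_rat C a b \<notin> C"
proof -
  have "open ({a<..<b} - C)" using cantor_set_closed[OF assms(1)] by (intro open_Diff) auto
  then have "gap_rat C a b \<in> {a<..<b} - C"
    unfolding gap_rat_def by (rule first_rat_mem[OF _ cantor_set_no_interval[OF assms]])
  then show "a < gap_rat C a b" "gap_rat C a b < b" "gap_rat C a b \<notin> C" by auto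
qed

lemma cantor_inv_step:
  fixes C :: "real set"
  assumes C: "cantor_set C" and I: "accum_pair C a b"
  shows "accum_pair C a (gap_lo C (gap_rat C a b))" "accum_pair C (gap_hi C (gap_rat C a b)) b"
proof -
  define y where "y = gap_rat C a b"
  have cl: "closed C" using C by (rule cantor_set_closed)
  have ab: "a < b" "a \<in> C" "b \<in> C" using I by (auto simp: accum_pair_def)
  have y: "a < y" "y < b" "y \<notin> C" using gap_rat[OF C ab(1)] by (simp_all add: y_def)
  note G = gap_bounds[OF cl ab(2) y(1) ab(3) y(2,3)]
  note inner = accum_pair_gap[OF cl I y]
  have "accum_left C (gap_lo C y)"
    by (rule islimpt_imp_accum_left[where \<delta>="gap_hi C y - gap_lo C y", OF cantor_set_islimpt[OF C G(1)]])
      (use G(3,4,9) in auto)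
  then show "accum_pair C a (gap_lo C y)"
    using I inner(1) G(1) by (auto simp: accum_pair_def)
  have "accum_right C (gap_hi C y)"
    by (rule islimpt_imp_accum_right[where \<delta>="gap_hi C y - gap_lo C y", OF cantor_set_islimpt[OF C G(6)]])
      (use G(3,4,9) in auto)
  then show "accum_pair C (gap_hi C y) b"
    using I inner(2) G(6) by (auto simp: accum_pair_def)
qed

lemma compact_Inf_Sup:
  fixes C :: "real set"
  assumes "compact C" "C \<noteq> {}"
  shows "Inf C \<in> C" "Sup C \<in> C" "\<And>x. x \<in> C \<Longrightarrow> Inf C \<le> x" "\<And>x. x \<in> C \<Longrightarrow> x \<le> Sup C"
proof -
  have "bounded C" using assms(1) by (rule compact_imp_bounded)
  then have bb: "bdd_below C" "bdd_above C" by (simp_all add: bounded_imp_bdd_below bounded_imp_bdd_above)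
  have cl: "closed C" using assms compact_imp_closed by blast
  show "Inf C \<in> C" by (rule closed_contains_Inf[OF assms(2) bb(1) cl])
  show "Sup C \<in> C" by (rule closed_contains_Sup[OF assms(2) bb(2) cl])
  show "\<And>x. x \<in> C \<Longrightarrow> Inf C \<le> x" using bb by (intro cInf_lower) auto
  show "\<And>x. x \<in> C \<Longrightarrow> x \<le> Sup C" using bb by (intro cSup_upper) auto
qed

lemma compact_accum_pair_Inf_Sup:
  fixes K :: "real set"
  assumes "compact K" "K \<noteq> {}" and limpt: "\<And>x. x \<in> K \<Longrightarrow> x islimpt K"
  shows "accum_pair K (Inf K) (Sup K)"
proof -
  note IS = compact_Inf_Sup[OF assms(1,2)]
  have R: "accum_right K (Inf K)"
    by (rule islimpt_imp_accum_right[OF limpt[OF IS(1)] zero_less_one]) (use IS(3) in force)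
  have L: "accum_left K (Sup K)"
    by (rule islimpt_imp_accum_left[OF limpt[OF IS(2)] zero_less_one]) (use IS(4) in force)
  obtain z where "z \<in> K" "Inf K < z" using R unfolding accum_right_def by (meson zero_less_one)
  then have "Inf K < Sup K" using IS(4) by fastforce
  then show ?thesis using IS R L by (simp add: accum_pair_def)
qed

lemma cantor_inv_node:
  fixes C :: "real set"
  assumes C: "cantor_set C"
  shows "accum_pair C (cantor_a C l) (cantor_b C l)"
proof (induct l)
  case Nil
  then show ?case
    using compact_accum_pair_Inf_Sup[OF _ _ cantor_set_islimpt[OF C]] C
    by (simp add: cantor_a_def cantor_b_def cantor_set_def)
next
  case (Cons \<beta> l)
  then show ?case
    using cantor_inv_step[OF C Cons] by (simp add: cantor_node_Cons cantor_c_def cantor_d_def)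
qed

lemma cantor_cut_bounds:
  fixes C :: "real set"
  assumes C: "cantor_set C"
  shows "cantor_a C l < gap_rat C (cantor_a C l) (cantor_b C l)"
    "gap_rat C (cantor_a C l) (cantor_b C l) < cantor_b C l"
    "cantor_c C l < gap_rat C (cantor_a C l) (cantor_b C l)"
    "gap_rat C (cantor_a C l) (cantor_b C l) < cantor_d C l"
proof -
  have I: "accum_pair C (cantor_a C l) (cantor_b C l)" by (rule cantor_inv_node[OF C])
  then have ab: "cantor_a C l < cantor_b C l" "cantor_a C l \<in> C" "cantor_b C l \<in> C"
    by (auto simp: accum_pair_def)
  note y = gap_rat[OF C ab(1)]
  note G = gap_bounds[OF cantor_set_closed[OF C] ab(2) y(1) ab(3) y(2,3)]
  show "cantor_a C l < gap_rat C (cantor_a C l) (cantor_b C l)"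
    "gap_rat C (cantor_a C l) (cantor_b C l) < cantor_b C l" using y by simp_all
  show "cantor_c C l < gap_rat C (cantor_a C l) (cantor_b C l)"
    "gap_rat C (cantor_a C l) (cantor_b C l) < cantor_d C l"
    using G(3,4) by (simp_all add: cantor_c_def cantor_d_def)
qed

lemma cantor_cut_system:
  fixes C :: "real set"
  assumes C: "cantor_set C"
  shows "cut_system C (cantor_a C) (cantor_b C) (cantor_c C) (cantor_d C)"
  unfolding cut_system_def
proof (intro allI conjI ballI)
  fix l
  have I: "accum_pair C (cantor_a C l) (cantor_b C l)" by (rule cantor_inv_node[OF C])
  then have ab: "cantor_a C l < cantor_b C l" "cantor_a C l \<in> C" "cantor_b C l \<in> C"
    by (auto simp: accum_pair_def)
  note y = gap_rat[OF C ab(1)]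
  note G = gap_bounds[OF cantor_set_closed[OF C] ab(2) y(1) ab(3) y(2,3)]
  note inner = accum_pair_gap[OF cantor_set_closed[OF C] I y]
  show "cantor_a C l \<in> C" "cantor_b C l \<in> C" using ab by auto
  show "cantor_a C l < cantor_c C l" "cantor_c C l \<le> cantor_d C l" "cantor_d C l < cantor_b C l"
    using inner G(3,4) by (simp_all add: cantor_c_def cantor_d_def)
  show "\<And>x. x \<in> C \<Longrightarrow> \<not> (cantor_c C l < x \<and> x < cantor_d C l)"
    using G(9) by (simp add: cantor_c_def cantor_d_def)
  show "cantor_a C (False # l) = cantor_a C l" "cantor_b C (False # l) = cantor_c C l"
    "cantor_a C (True # l) = cantor_d C l" "cantor_b C (True # l) = cantor_b C l"
    by (simp_all add: cantor_node_Cons)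
qed

text \<open>
  If a branch kept a nondegenerate interval, the rationals at which its nodes are cut would
  all lie in the set's gaps inside that interval, be pairwise distinct, and yet all have index at
  most that of one fixed rational in such a gap.
\<close>

lemma cantor_cut_tree:
  fixes C :: "real set"
  assumes C: "cantor_set C"
  shows "cut_tree C (cantor_a C) (cantor_b C) (cantor_c C) (cantor_d C)"
  unfolding cut_tree_def
proof (intro conjI allI impI)
  have cC: "compact C" "C \<noteq> {}" using C by (auto simp: cantor_set_def)
  show "C \<subseteq> {cantor_a C []..cantor_b C []}" using compact_Inf_Sup[OF cC] by (auto simp: cantor_a_def cantor_b_def)
  show T: "cut_system C (cantor_a C) (cantor_b C) (cantor_c C) (cantor_d C)" by (rule cantor_cut_system[OF C])
  fix ns :: "nat \<Rightarrow> bool list" assume P: "is_branch ns"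
  have cl: "closed C" by (rule cantor_set_closed[OF C])
  obtain \<alpha> \<beta> where L: "(\<lambda>n. cantor_a C (ns n)) \<longlonglongrightarrow> \<alpha>" "(\<lambda>n. cantor_b C (ns n)) \<longlonglongrightarrow> \<beta>"
    "\<And>n. cantor_a C (ns n) \<le> \<alpha>" "\<And>n. \<beta> \<le> cantor_b C (ns n)" "\<alpha> \<le> \<beta>" "\<alpha> \<in> C" "\<beta> \<in> C"
    using branch_limits[OF T P cl] by blast
  have "\<alpha> = \<beta>"
  proof (rule ccontr)
    assume "\<alpha> \<noteq> \<beta>"
    then have "\<alpha> < \<beta>" using L(5) by simp
    have "open ({\<alpha><..<\<beta>} - C)" using cl by (intro open_Diff) auto
    then have "rat_enum (first_rat ({\<alpha><..<\<beta>} - C)) \<in> {\<alpha><..<\<beta>} - C"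
      by (rule first_rat_mem[OF _ cantor_set_no_interval[OF C \<open>\<alpha> < \<beta>\<close>]])
    then obtain j where j: "rat_enum j \<in> {\<alpha><..<\<beta>} - C" ..
    define k where "k n = first_rat ({cantor_a C (ns n)<..<cantor_b C (ns n)} - C)" for n
    have gap_rat_k: "gap_rat C (cantor_a C (ns n)) (cantor_b C (ns n)) = rat_enum (k n)" for n
      by (simp add: gap_rat_def k_def)
    have "k n \<le> j" for n
    proof -
      have "rat_enum j \<in> {cantor_a C (ns n)<..<cantor_b C (ns n)} - C" using j L(3,4)[of n] by auto
      then show ?thesis unfolding k_def by (rule first_rat_le)
    qed
    moreover have "k n \<noteq> k m" if "n < m" for n m
    proof -
      have "rat_enum (k n) < cantor_a C (ns m) \<or> cantor_b C (ns m) < rat_enum (k n)"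
        by (rule branch_avoids_cut[OF T P that])
          (use cantor_cut_bounds(3,4)[OF C, of "ns n"] in \<open>simp_all add: gap_rat_k\<close>)
      moreover have "cantor_a C (ns m) < rat_enum (k m)" "rat_enum (k m) < cantor_b C (ns m)"
        using cantor_cut_bounds(1,2)[OF C, of "ns m"] by (simp_all add: gap_rat_k)
      ultimately show ?thesis by auto
    qed
    ultimately show False by (intro infinite_injective_bounded_False[of UNIV k j]) auto
  qed
  have "(\<lambda>n. cantor_b C (ns n) - cantor_a C (ns n)) \<longlonglongrightarrow> \<beta> - \<alpha>" by (intro tendsto_diff L(1,2))
  then show "(\<lambda>n. cantor_b C (ns n) - cantor_a C (ns n)) \<longlonglongrightarrow> 0" using \<open>\<alpha> = \<beta>\<close> by simp
qed

theorem cantor_set_homeomorphic_ternary: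
  fixes C :: "real set"
  assumes C: "cantor_set C"
  shows "C homeomorphic cantor_ternary"
proof (rule cut_trees_homeomorphic[OF cantor_cut_tree[OF C] cantor_ternary_cut_tree])
  show "cantor_c C s = cantor_d C s \<longleftrightarrow> ternary_c s = ternary_d s" for s
    using cantor_cut_bounds(3,4)[OF C, of s] ternary_node_scale_pos[of s] by (simp add: ternary_c_def ternary_d_def)
  show "compact C" using C by (simp add: cantor_set_def)
  show "compact cantor_ternary" by (rule compact_cantor_ternary)
qed

section \<open>The Guthrie--Nymann Cantorval\<close>

definition gn_even_terms :: "nat \<Rightarrow> real" where "gn_even_terms k = 3 * (1/4)^(k+1)"
definition gn_odd_terms :: "nat \<Rightarrow> real" where "gn_odd_terms k = 2 * (1/4)^(k+1)"
definition gn_terms :: "nat \<Rightarrow> real" where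
  "gn_terms n = (if even n then gn_even_terms (n div 2) else 0) + (if odd n then gn_odd_terms (n div 2) else 0)"

lemma quarter_geometric_sums: "(\<lambda>k. c * (1/4::real)^(k+1)) sums (c/3)"
proof -
  have "(\<lambda>n. (1/4::real)^n) sums (1 / (1 - 1/4))" by (rule geometric_sums) simp
  then have "(\<lambda>n. (c/4) * (1/4::real)^n) sums ((c/4) * (1 / (1 - 1/4)))" by (rule sums_mult)
  then show ?thesis by simp
qed

lemma gn_even_terms_sums: "gn_even_terms sums 1" using quarter_geometric_sums[of 3] unfolding gn_even_terms_def by simp
lemma gn_odd_terms_sums: "gn_odd_terms sums (2/3)" using quarter_geometric_sums[of 2] unfolding gn_odd_terms_def by simp

lemma gn_terms_sums: "gn_terms sums (5/3)"
proof -
  have "gn_terms sums (1 + 2/3)" unfolding gn_terms_def by (intro sums_add sums_even_spread sums_odd_spread gn_even_terms_sums gn_odd_terms_sums)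
  then show ?thesis by simp
qed

lemma gn_terms_suminf: "(\<Sum>n. gn_terms n) = 5/3" by (rule sums_unique[OF gn_terms_sums, symmetric])

lemma gn_terms_nonneg: "0 \<le> gn_terms n" by (simp add: gn_terms_def gn_even_terms_def gn_odd_terms_def)

lemma gn_terms_summable: "summable (\<lambda>n. norm (gn_terms n))"
  using gn_terms_sums gn_terms_nonneg by (simp add: sums_iff)

lemma gn_terms_Suc_Suc: "gn_terms (Suc (Suc n)) = (1/4) * gn_terms n"
  by (simp add: gn_terms_def gn_even_terms_def gn_odd_terms_def)

lemma gn_terms_0: "gn_terms 0 = 3/4" by (simp add: gn_terms_def gn_even_terms_def)
lemma gn_terms_1: "gn_terms 1 = 1/2" by (simp add: gn_terms_def gn_odd_terms_def)

definition guthrie_nymann where "guthrie_nymann = achievement_set gn_terms"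

lemma guthrie_nymann_split:
  "guthrie_nymann = (\<lambda>t. t/4) ` guthrie_nymann \<union> (\<lambda>t. 1/2 + t/4) ` guthrie_nymann
     \<union> (\<lambda>t. 3/4 + t/4) ` guthrie_nymann \<union> (\<lambda>t. 5/4 + t/4) ` guthrie_nymann"
proof -
  define w where "w n = gn_terms (Suc n)" for n
  have sw: "summable (\<lambda>n. norm (w n))"
    using gn_terms_summable summable_Suc_iff[of "\<lambda>n. norm (gn_terms n)"] by (simp add: w_def)
  have wf: "(\<lambda>n. gn_terms (Suc n)) = w" by (simp add: w_def fun_eq_iff)
  have e1: "guthrie_nymann = achievement_set w \<union> (\<lambda>t. 3/4 + t) ` achievement_set w"
    unfolding guthrie_nymann_def using achievement_set_split_head[OF gn_terms_summable] unfolding wf gn_terms_0 .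
  have w0: "w 0 = 1/2" by (simp add: w_def gn_terms_def gn_odd_terms_def)
  have e2: "achievement_set w = achievement_set (\<lambda>n. w (Suc n)) \<union> (\<lambda>t. 1/2 + t) ` achievement_set (\<lambda>n. w (Suc n))"
    using achievement_set_split_head[OF sw] unfolding w0 .
  have "(\<lambda>n. w (Suc n)) = (\<lambda>n. (1/4) * gn_terms n)" unfolding w_def by (simp add: gn_terms_Suc_Suc)
  then have e3: "achievement_set (\<lambda>n. w (Suc n)) = (\<lambda>t. (1/4) * t) ` guthrie_nymann"
    unfolding guthrie_nymann_def using achievement_set_scale[OF gn_terms_summable, of "1/4"] by (simp only:)
  define Q where "Q = achievement_set (\<lambda>n. w (Suc n))"
  have "guthrie_nymann = (Q \<union> (\<lambda>t. 1/2 + t) ` Q) \<union> (\<lambda>t. 3/4 + t) ` (Q \<union> (\<lambda>t. 1/2 + t) ` Q)"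
    using e1 e2 unfolding Q_def by simp
  then have "guthrie_nymann = ((\<lambda>t. (1/4) * t) ` guthrie_nymann \<union> (\<lambda>t. 1/2 + t) ` ((\<lambda>t. (1/4) * t) ` guthrie_nymann)) \<union>
      (\<lambda>t. 3/4 + t) ` ((\<lambda>t. (1/4) * t) ` guthrie_nymann \<union> (\<lambda>t. 1/2 + t) ` ((\<lambda>t. (1/4) * t) ` guthrie_nymann))"
    unfolding Q_def e3 .
  then show ?thesis
    by (rule HOL.trans) (auto simp: image_Un image_image add.assoc)
qed

lemma guthrie_nymann_subset: "guthrie_nymann \<subseteq> {0..5/3}"
  using achievement_set_subset_sum[OF gn_terms_summable gn_terms_nonneg] unfolding guthrie_nymann_def gn_terms_suminf .

lemma compact_guthrie_nymann: "compact guthrie_nymann" unfolding guthrie_nymann_def by (rule compact_achievement_set[OF gn_terms_summable])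
lemma closed_guthrie_nymann: "closed guthrie_nymann" using compact_guthrie_nymann compact_imp_closed by blast

lemma guthrie_nymann_reflect: "t \<in> guthrie_nymann \<Longrightarrow> 5/3 - t \<in> guthrie_nymann"
  using achievement_set_reflect[OF gn_terms_summable] unfolding guthrie_nymann_def gn_terms_suminf .

lemma guthrie_nymann_0: "0 \<in> guthrie_nymann" unfolding guthrie_nymann_def by (rule zero_in_achievement_set)
lemma guthrie_nymann_5_3: "5/3 \<in> guthrie_nymann" using guthrie_nymann_reflect[OF guthrie_nymann_0] by simp

lemma guthrie_nymann_2_3: "2/3 \<in> guthrie_nymann"
proof -
  have "(\<lambda>n. if odd n then gn_odd_terms (n div 2) else 0) sums (2/3)" by (rule sums_odd_spread[OF gn_odd_terms_sums])
  moreover have "(\<lambda>n. if odd n then gn_odd_terms (n div 2) else 0) = (\<lambda>n. if odd n then gn_terms n else 0)"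
    by (auto simp: gn_terms_def)
  ultimately have "subsum gn_terms odd = 2/3" unfolding subsum_real by (simp add: sums_iff)
  then show ?thesis unfolding guthrie_nymann_def achievement_set_eq_range_subsum by (metis rangeI)
qed

lemma guthrie_nymann_1: "1 \<in> guthrie_nymann" using guthrie_nymann_reflect[OF guthrie_nymann_2_3] by simp

lemma guthrie_nymann_digit0: "t \<in> guthrie_nymann \<Longrightarrow> t/4 \<in> guthrie_nymann"
  and guthrie_nymann_digit2: "t \<in> guthrie_nymann \<Longrightarrow> 1/2 + t/4 \<in> guthrie_nymann"
  and guthrie_nymann_digit3: "t \<in> guthrie_nymann \<Longrightarrow> 3/4 + t/4 \<in> guthrie_nymann"
  and guthrie_nymann_digit5: "t \<in> guthrie_nymann \<Longrightarrow> 5/4 + t/4 \<in> guthrie_nymann"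
  using equalityD2[OF guthrie_nymann_split] by blast+

lemma guthrie_nymann_cases:
  assumes "x \<in> guthrie_nymann"
  obtains t where "t \<in> guthrie_nymann" "x = t/4" | t where "t \<in> guthrie_nymann" "x = 1/2 + t/4"
    | t where "t \<in> guthrie_nymann" "x = 3/4 + t/4" | t where "t \<in> guthrie_nymann" "x = 5/4 + t/4"
proof -
  have "x \<in> (\<lambda>t. t/4) ` guthrie_nymann \<union> (\<lambda>t. 1/2 + t/4) ` guthrie_nymann
      \<union> (\<lambda>t. 3/4 + t/4) ` guthrie_nymann \<union> (\<lambda>t. 5/4 + t/4) ` guthrie_nymann"
    using assms guthrie_nymann_split by blast
  then show ?thesis using that by blast
qed

definition "gn_left = guthrie_nymann \<inter> {0..2/3}"
definition "gn_right = guthrie_nymann \<inter> {1..5/3}"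

lemma gn_left_digit0: "t \<in> guthrie_nymann \<Longrightarrow> t/4 \<in> gn_left"
  using guthrie_nymann_digit0 guthrie_nymann_subset by (force simp: gn_left_def)

lemma gn_left_digit2: "t \<in> gn_left \<Longrightarrow> 1/2 + t/4 \<in> gn_left"
  using guthrie_nymann_digit2 by (auto simp: gn_left_def)


text \<open>
  To see that \<open>[2/3, 1]\<close> lies in the Cantorval we fold its part below \<open>2/3\<close> onto itself by
  \<open>t \<mapsto> 2/3 - t\<close>. The resulting closed set is mapped into itself by eight contractions with
  ratio \<open>1/4\<close> whose images tile \<open>[0, 1]\<close>, so it contains \<open>[0, 1]\<close>.
\<close>

definition gn_fold :: "real set" where
  "gn_fold = {t \<in> {0..2/3}. t \<in> gn_left \<or> 2/3 - t \<in> gn_left} \<union> {2/3..1} \<inter> guthrie_nymann"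

lemma closed_gn_fold: "closed gn_fold"
proof -
  have "closed gn_left" unfolding gn_left_def using closed_guthrie_nymann by (intro closed_Int) auto
  moreover have "closed ((\<lambda>t::real. 2/3 - t) -` gn_left)" if "closed gn_left"
    by (rule continuous_closed_vimage[OF that]) (auto intro!: continuous_intros)
  moreover have "gn_fold = {0..2/3} \<inter> gn_left \<union> {0..2/3} \<inter> (\<lambda>t. 2/3 - t) -` gn_left \<union> {2/3..1} \<inter> guthrie_nymann"
    unfolding gn_fold_def by auto
  ultimately show ?thesis using closed_guthrie_nymann by (metis closed_Int closed_Un closed_atLeastAtMost)
qed

lemma gn_fold_subset: "gn_fold \<subseteq> {0..1}"
  unfolding gn_fold_def by auto

lemma gn_left_2_3: "2/3 \<in> gn_left"
  using guthrie_nymann_2_3 by (simp add: gn_left_def)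

lemma gn_fold_lower:
  assumes "w \<in> gn_fold" "w \<le> 2/3"
  shows "w/4 \<in> gn_fold" "(1 + w)/4 \<in> gn_fold" "1/2 + w/4 \<in> gn_fold" "3/4 + w/4 \<in> gn_fold"
proof -
  have w: "0 \<le> w" "w \<le> 2/3" and L: "w \<in> gn_left \<or> 2/3 - w \<in> gn_left"
    using assms gn_left_2_3 by (auto simp: gn_fold_def gn_left_def)
  have fold: "s \<in> gn_fold" if "0 \<le> s" "s \<le> 2/3" "s \<in> gn_left \<or> 2/3 - s \<in> gn_left" for s
    using that by (simp add: gn_fold_def)
  have quarter: "t/4 \<in> gn_left" if "t \<in> gn_left" for t
    using that gn_left_digit0 by (auto simp: gn_left_def)
  have reflect: "(5/3 - t)/4 \<in> gn_left" if "t \<in> gn_left" for t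
    using that guthrie_nymann_reflect gn_left_digit0 by (auto simp: gn_left_def)
  show "w/4 \<in> gn_fold"
  proof (rule fold)
    show "w/4 \<in> gn_left \<or> 2/3 - w/4 \<in> gn_left"
      using L
    proof
      assume "2/3 - w \<in> gn_left"
      then have "1/2 + (2/3 - w)/4 \<in> gn_left" by (rule gn_left_digit2)
      moreover have "1/2 + (2/3 - w)/4 = 2/3 - w/4" by (simp add: field_simps)
      ultimately show ?thesis by metis
    qed (simp add: quarter)
  qed (use w in auto)
  show "(1 + w)/4 \<in> gn_fold"
  proof (rule fold)
    show "(1 + w)/4 \<in> gn_left \<or> 2/3 - (1 + w)/4 \<in> gn_left"
      using L
    proof
      assume "w \<in> gn_left"
      then have "(5/3 - w)/4 \<in> gn_left" by (rule reflect)
      moreover have "(5/3 - w)/4 = 2/3 - (1 + w)/4" by (simp add: field_simps)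
      ultimately show ?thesis by metis
    next
      assume "2/3 - w \<in> gn_left"
      then have "(5/3 - (2/3 - w))/4 \<in> gn_left" by (rule reflect)
      moreover have "(5/3 - (2/3 - w))/4 = (1 + w)/4" by (simp add: field_simps)
      ultimately show ?thesis by metis
    qed
  qed (use w in auto)
  show "1/2 + w/4 \<in> gn_fold"
  proof (rule fold)
    show "1/2 + w/4 \<in> gn_left \<or> 2/3 - (1/2 + w/4) \<in> gn_left"
      using L
    proof
      assume "2/3 - w \<in> gn_left"
      then have "(2/3 - w)/4 \<in> gn_left" by (rule quarter)
      moreover have "(2/3 - w)/4 = 2/3 - (1/2 + w/4)" by (simp add: field_simps)
      ultimately show ?thesis by metis
    qed (simp add: gn_left_digit2)
  qed (use w in auto)
  have "3/4 + w/4 \<in> guthrie_nymann"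
  proof (cases "w \<in> gn_left")
    case False
    then have "2/3 - w \<in> guthrie_nymann" using L by (auto simp: gn_left_def)
    then have "1/2 + (5/3 - (2/3 - w))/4 \<in> guthrie_nymann"
      by (intro guthrie_nymann_digit2 guthrie_nymann_reflect)
    moreover have "1/2 + (5/3 - (2/3 - w))/4 = 3/4 + w/4" by (simp add: field_simps)
    ultimately show ?thesis by simp
  qed (auto simp: gn_left_def intro: guthrie_nymann_digit3)
  then show "3/4 + w/4 \<in> gn_fold" using w by (simp add: gn_fold_def)
qed

lemma gn_fold_upper:
  assumes "w \<in> gn_fold" "2/3 \<le> w"
  shows "w/4 \<in> gn_fold" "2/3 - w/4 \<in> gn_fold" "1/2 + w/4 \<in> gn_fold" "3/4 + w/4 \<in> gn_fold"
proof -
  have "w \<in> guthrie_nymann \<and> w \<le> 1"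
  proof (cases "w = 2/3")
    case False
    then show ?thesis using assms by (auto simp: gn_fold_def)
  next
    case True
    then show ?thesis using guthrie_nymann_2_3 by (simp only:) simp
  qed
  then show "w/4 \<in> gn_fold" "2/3 - w/4 \<in> gn_fold" "1/2 + w/4 \<in> gn_fold" "3/4 + w/4 \<in> gn_fold"
    using assms(2) gn_left_digit0 guthrie_nymann_digit2 guthrie_nymann_digit3 by (auto simp: gn_fold_def)
qed

lemma gn_fold_tile:
  assumes t: "t \<in> {0..1}"
  shows "\<exists>u D. u \<in> D \<and> (D = {0..2/3} \<or> D = {2/3..1}) \<and>
    (\<forall>w\<in>gn_fold \<inter> D. \<exists>s\<in>gn_fold. \<bar>s - t\<bar> \<le> \<bar>w - u\<bar> / 4)"
proof -
  have by_map: "\<exists>u D. u \<in> D \<and> (D = {0..2/3} \<or> D = {2/3..1}) \<and>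
      (\<forall>w\<in>gn_fold \<inter> D. \<exists>s\<in>gn_fold. \<bar>s - t\<bar> \<le> \<bar>w - u\<bar> / 4)"
    if "D = {0..2/3} \<or> D = {2/3..1}" "u \<in> D"
      and f: "\<And>w. w \<in> gn_fold \<inter> D \<Longrightarrow> f w \<in> gn_fold \<and> (f w - t = (w - u)/4 \<or> f w - t = (u - w)/4)"
    for u f D
  proof (intro exI[of _ u] exI[of _ D] conjI ballI)
    fix w assume "w \<in> gn_fold \<inter> D"
    with f[of w] show "\<exists>s\<in>gn_fold. \<bar>s - t\<bar> \<le> \<bar>w - u\<bar> / 4"
      by (intro bexI[of _ "f w"]) (auto simp: abs_if)
  qed (use that in auto)
  consider "t \<le> 1/6" | "1/6 \<le> t" "t \<le> 1/4" | "1/4 \<le> t" "t \<le> 5/12" | "5/12 \<le> t" "t \<le> 1/2"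
    | "1/2 \<le> t" "t \<le> 2/3" | "2/3 \<le> t" "t \<le> 3/4" | "3/4 \<le> t" "t \<le> 11/12" | "11/12 \<le> t"
    by linarith
  then show ?thesis
  proof cases
    case 1 show ?thesis by (rule by_map[of "{0..2/3}" "4*t" "\<lambda>w. w/4"]) (use t 1 gn_fold_lower in auto)
  next
    case 2 show ?thesis by (rule by_map[of "{2/3..1}" "4*t" "\<lambda>w. w/4"]) (use 2 gn_fold_upper in auto)
  next
    case 3 show ?thesis by (rule by_map[of "{0..2/3}" "4*t - 1" "\<lambda>w. (1 + w)/4"]) (use 3 gn_fold_lower in auto)
  next
    case 4 show ?thesis by (rule by_map[of "{2/3..1}" "8/3 - 4*t" "\<lambda>w. 2/3 - w/4"]) (use 4 gn_fold_upper in auto)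
  next
    case 5 show ?thesis by (rule by_map[of "{0..2/3}" "4*t - 2" "\<lambda>w. 1/2 + w/4"]) (use 5 gn_fold_lower in auto)
  next
    case 6 show ?thesis by (rule by_map[of "{2/3..1}" "4*t - 2" "\<lambda>w. 1/2 + w/4"]) (use 6 gn_fold_upper in auto)
  next
    case 7 show ?thesis by (rule by_map[of "{0..2/3}" "4*t - 3" "\<lambda>w. 3/4 + w/4"]) (use 7 gn_fold_lower in auto)
  next
    case 8 show ?thesis by (rule by_map[of "{2/3..1}" "4*t - 3" "\<lambda>w. 3/4 + w/4"]) (use t 8 gn_fold_upper in auto)
  qed
qed

lemma unit_interval_subset_gn_fold: "{0..1} \<subseteq> gn_fold"
proof (rule unit_interval_subset_contractive[OF closed_gn_fold gn_fold_subset])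
  have p: "2/3 \<in> gn_fold" using guthrie_nymann_2_3 by (simp add: gn_fold_def)
  then show "gn_fold \<noteq> {}" by auto
  fix t :: real assume t: "t \<in> {0..1}"
  obtain u D where uD: "u \<in> D" "D = {0..2/3} \<or> D = {2/3..1}"
    "\<forall>w\<in>gn_fold \<inter> D. \<exists>s\<in>gn_fold. \<bar>s - t\<bar> \<le> \<bar>w - u\<bar> / 4"
    using gn_fold_tile[OF t] by blast
  show "\<exists>u\<in>{0..1}. \<forall>w\<in>gn_fold. \<exists>s\<in>gn_fold. \<bar>s - t\<bar> \<le> \<bar>w - u\<bar> / 2"
  proof (rule bexI[of _ u], rule ballI)
    fix w assume w: "w \<in> gn_fold"
    \<comment> \<open>A point \<open>w\<close> outside \<open>D\<close> is farther from \<open>u\<close> than \<open>2/3 \<in> D\<close>.\<close>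
    obtain w' where "w' \<in> gn_fold \<inter> D" "\<bar>w' - u\<bar> \<le> \<bar>w - u\<bar>"
    proof (cases "w \<in> D")
      case False
      then have "\<bar>2/3 - u\<bar> \<le> \<bar>w - u\<bar>" using uD(1,2) w gn_fold_subset by auto
      then show ?thesis using that[of "2/3"] p uD(2) by auto
    qed (use w that in auto)
    then obtain s where "s \<in> gn_fold" "\<bar>s - t\<bar> \<le> \<bar>w' - u\<bar> / 4" using uD(3) by blast
    then show "\<exists>s\<in>gn_fold. \<bar>s - t\<bar> \<le> \<bar>w - u\<bar> / 2"
      using \<open>\<bar>w' - u\<bar> \<le> \<bar>w - u\<bar>\<close> by (intro bexI[of _ s]) auto
  qed (use uD in auto)
qed

lemma guthrie_nymann_interval: "{2/3..1} \<subseteq> guthrie_nymann"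
proof
  fix x :: real assume x: "x \<in> {2/3..1}"
  show "x \<in> guthrie_nymann"
  proof (cases "x = 2/3")
    case False
    moreover have "x \<in> gn_fold" using x unit_interval_subset_gn_fold by auto
    ultimately show ?thesis using x by (auto simp: gn_fold_def)
  next
    case True
    then show ?thesis using guthrie_nymann_2_3 by (simp only:)
  qed
qed

definition "gn_tail = guthrie_nymann \<inter> {2/3..5/3}"

lemma gn_left_Int_digit0: "gn_left \<inter> {0 + (1/4)*0 .. 0 + (1/4)*(5/3)} = (\<lambda>t. 0 + (1/4)*t) ` guthrie_nymann"
proof
  show "gn_left \<inter> {0 + (1/4)*0 .. 0 + (1/4)*(5/3)} \<subseteq> (\<lambda>t. 0 + (1/4)*t) ` guthrie_nymann"
  proof
    fix x assume x: "x \<in> gn_left \<inter> {0 + (1/4)*0 .. 0 + (1/4)*(5/3)}"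
    then have "x \<in> guthrie_nymann" "x \<le> 5/12" by (auto simp: gn_left_def)
    then obtain t where "t \<in> guthrie_nymann" "x = t/4" using guthrie_nymann_subset by (cases rule: guthrie_nymann_cases) force+
    then show "x \<in> (\<lambda>t. 0 + (1/4)*t) ` guthrie_nymann" by auto
  qed
  show "(\<lambda>t. 0 + (1/4)*t) ` guthrie_nymann \<subseteq> gn_left \<inter> {0 + (1/4)*0 .. 0 + (1/4)*(5/3)}"
    using guthrie_nymann_digit0 guthrie_nymann_subset by (force simp: gn_left_def)
qed

lemma gn_left_Int_digit2: "gn_left \<inter> {1/2 + (1/4)*0 .. 1/2 + (1/4)*(2/3)} = (\<lambda>t. 1/2 + (1/4)*t) ` gn_left"
proof
  show "gn_left \<inter> {1/2 + (1/4)*0 .. 1/2 + (1/4)*(2/3)} \<subseteq> (\<lambda>t. 1/2 + (1/4)*t) ` gn_left"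
  proof
    fix x assume x: "x \<in> gn_left \<inter> {1/2 + (1/4)*0 .. 1/2 + (1/4)*(2/3)}"
    then have xg: "x \<in> guthrie_nymann" "1/2 \<le> x" "x \<le> 2/3" by (auto simp: gn_left_def)
    then obtain t where "t \<in> guthrie_nymann" "x = 1/2 + t/4" using guthrie_nymann_subset by (cases rule: guthrie_nymann_cases) force+
    moreover then have "t \<le> 2/3" using xg by simp
    ultimately show "x \<in> (\<lambda>t. 1/2 + (1/4)*t) ` gn_left" using guthrie_nymann_subset by (force simp: gn_left_def)
  qed
  show "(\<lambda>t. 1/2 + (1/4)*t) ` gn_left \<subseteq> gn_left \<inter> {1/2 + (1/4)*0 .. 1/2 + (1/4)*(2/3)}"
    using gn_left_digit2 by (force simp: gn_left_def)
qed

lemma gn_left_gap: "x \<in> gn_left \<Longrightarrow> \<not> (5/12 < x \<and> x < 1/2)"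
proof
  assume x: "x \<in> gn_left" "5/12 < x \<and> x < 1/2"
  then have "x \<in> guthrie_nymann" by (simp add: gn_left_def)
  then show False using x guthrie_nymann_subset by (cases rule: guthrie_nymann_cases) force+
qed

lemma gn_right_Int_digit3: "gn_right \<inter> {3/4 + (1/4)*1 .. 3/4 + (1/4)*(5/3)} = (\<lambda>t. 3/4 + (1/4)*t) ` gn_right"
proof
  show "gn_right \<inter> {3/4 + (1/4)*1 .. 3/4 + (1/4)*(5/3)} \<subseteq> (\<lambda>t. 3/4 + (1/4)*t) ` gn_right"
  proof
    fix x assume x: "x \<in> gn_right \<inter> {3/4 + (1/4)*1 .. 3/4 + (1/4)*(5/3)}"
    then have xg: "x \<in> guthrie_nymann" "1 \<le> x" "x \<le> 7/6" by (auto simp: gn_right_def)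
    then obtain t where "t \<in> guthrie_nymann" "x = 3/4 + t/4" using guthrie_nymann_subset by (cases rule: guthrie_nymann_cases) force+
    moreover then have "1 \<le> t" using xg by simp
    ultimately show "x \<in> (\<lambda>t. 3/4 + (1/4)*t) ` gn_right" using guthrie_nymann_subset by (force simp: gn_right_def)
  qed
  show "(\<lambda>t. 3/4 + (1/4)*t) ` gn_right \<subseteq> gn_right \<inter> {3/4 + (1/4)*1 .. 3/4 + (1/4)*(5/3)}"
    using guthrie_nymann_digit3 by (force simp: gn_right_def)
qed

lemma gn_right_Int_digit5: "gn_right \<inter> {5/4 + (1/4)*0 .. 5/4 + (1/4)*(5/3)} = (\<lambda>t. 5/4 + (1/4)*t) ` guthrie_nymann"
proof
  show "gn_right \<inter> {5/4 + (1/4)*0 .. 5/4 + (1/4)*(5/3)} \<subseteq> (\<lambda>t. 5/4 + (1/4)*t) ` guthrie_nymann"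
  proof
    fix x assume x: "x \<in> gn_right \<inter> {5/4 + (1/4)*0 .. 5/4 + (1/4)*(5/3)}"
    then have "x \<in> guthrie_nymann" "5/4 \<le> x" by (auto simp: gn_right_def)
    then obtain t where "t \<in> guthrie_nymann" "x = 5/4 + t/4" using guthrie_nymann_subset by (cases rule: guthrie_nymann_cases) force+
    then show "x \<in> (\<lambda>t. 5/4 + (1/4)*t) ` guthrie_nymann" by auto
  qed
  show "(\<lambda>t. 5/4 + (1/4)*t) ` guthrie_nymann \<subseteq> gn_right \<inter> {5/4 + (1/4)*0 .. 5/4 + (1/4)*(5/3)}"
    using guthrie_nymann_digit5 guthrie_nymann_subset by (force simp: gn_right_def)
qed

lemma gn_right_gap: "x \<in> gn_right \<Longrightarrow> \<not> (7/6 < x \<and> x < 5/4)"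
proof
  assume x: "x \<in> gn_right" "7/6 < x \<and> x < 5/4"
  then have "x \<in> guthrie_nymann" by (simp add: gn_right_def)
  then show False using x guthrie_nymann_subset by (cases rule: guthrie_nymann_cases) force+
qed

lemma gn_tail_Int_interval: "gn_tail \<inter> {2/3 + (1/3)*0 .. 2/3 + (1/3)*1} = (\<lambda>t. 2/3 + (1/3)*t) ` {0..1}"
proof -
  have "gn_tail \<inter> {2/3 + (1/3)*0 .. 2/3 + (1/3)*1} = {2/3..1}" using guthrie_nymann_interval by (auto simp: gn_tail_def)
  moreover have "(\<lambda>t. 2/3 + (1/3)*t) ` {0..1} = {2/3..1::real}"
  proof
    show "(\<lambda>t. 2/3 + (1/3)*t) ` {0..1} \<subseteq> {2/3..1::real}" by auto
    show "{2/3..1::real} \<subseteq> (\<lambda>t. 2/3 + (1/3)*t) ` {0..1}"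
    proof
      fix x :: real assume "x \<in> {2/3..1}"
      then have "3*x - 2 \<in> {0..1}" "x = 2/3 + (1/3)*(3*x - 2)" by (auto simp: field_simps)
      then show "x \<in> (\<lambda>t. 2/3 + (1/3)*t) ` {0..1}" by blast
    qed
  qed
  ultimately show ?thesis by simp
qed

lemma gn_tail_Int_right: "gn_tail \<inter> {0 + 1*1 .. 0 + 1*(5/3)} = (\<lambda>t. 0 + 1*t) ` gn_right"
  by (auto simp: gn_tail_def gn_right_def)

lemma guthrie_nymann_Int_left: "guthrie_nymann \<inter> {0 + 1*0 .. 0 + 1*(2/3)} = (\<lambda>t. 0 + 1*t) ` gn_left"
  by (auto simp: gn_left_def)

lemma guthrie_nymann_Int_tail: "guthrie_nymann \<inter> {0 + 1*(2/3) .. 0 + 1*(5/3)} = (\<lambda>t. 0 + 1*t) ` gn_tail"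
  by (auto simp: gn_tail_def)

lemma unit_interval_Int_lower_half: "{0..1::real} \<inter> {0 + (1/2)*0 .. 0 + (1/2)*1} = (\<lambda>t. 0 + (1/2)*t) ` {0..1}"
proof
  show "{0..1::real} \<inter> {0 + (1/2)*0 .. 0 + (1/2)*1} \<subseteq> (\<lambda>t. 0 + (1/2)*t) ` {0..1}"
  proof
    fix x :: real assume "x \<in> {0..1} \<inter> {0 + (1/2)*0 .. 0 + (1/2)*1}"
    then have "2*x \<in> {0..1}" "x = 0 + (1/2)*(2*x)" by auto
    then show "x \<in> (\<lambda>t. 0 + (1/2)*t) ` {0..1}" by blast
  qed
qed auto

lemma unit_interval_Int_upper_half: "{0..1::real} \<inter> {1/2 + (1/2)*0 .. 1/2 + (1/2)*1} = (\<lambda>t. 1/2 + (1/2)*t) ` {0..1}"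
proof
  show "{0..1::real} \<inter> {1/2 + (1/2)*0 .. 1/2 + (1/2)*1} \<subseteq> (\<lambda>t. 1/2 + (1/2)*t) ` {0..1}"
  proof
    fix x :: real assume "x \<in> {0..1} \<inter> {1/2 + (1/2)*0 .. 1/2 + (1/2)*1}"
    then have "2*x - 1 \<in> {0..1}" "x = 1/2 + (1/2)*(2*x - 1)" by (auto simp: field_simps)
    then show "x \<in> (\<lambda>t. 1/2 + (1/2)*t) ` {0..1}" by blast
  qed
qed auto


section \<open>A cut tree of the Guthrie--Nymann Cantorval\<close>

text \<open>
  Every node of the tree is an affine copy \<open>t \<mapsto> p + \<sigma> t\<close> of one of five model sets, its
  state: the whole Cantorval, its parts in \<open>[0, 2/3]\<close>, \<open>[1, 5/3]\<close> and \<open>[2/3, 5/3]\<close>, and the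
  interval \<open>[0, 1]\<close>. A model set spans \<open>[state_lo, state_hi]\<close> and is cut at
  \<open>state_cut_lo \<le> state_cut_hi\<close>; \<open>child_map T \<beta>\<close> is the affine map placing the model set of
  \<open>next_state T \<beta>\<close> inside that of \<open>T\<close>. Only \<open>Left\<close> and \<open>Right\<close> are cut at a gap.
\<close>

datatype gn_state = Whole | Left | Right | Tail | Interval

fun next_state :: "gn_state \<Rightarrow> bool \<Rightarrow> gn_state" where
  "next_state Whole False = Left" | "next_state Whole True = Tail"
| "next_state Tail False = Interval" | "next_state Tail True = Right"
| "next_state Interval _ = Interval"
| "next_state Left False = Whole" | "next_state Left True = Left"
| "next_state Right False = Right" | "next_state Right True = Whole"

fun state_of :: "bool list \<Rightarrow> gn_state" where
  "state_of [] = Whole" | "state_of (\<beta> # l) = next_state (state_of l) \<beta>"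

fun state_set :: "gn_state \<Rightarrow> real set" where
  "state_set Whole = guthrie_nymann" | "state_set Left = gn_left" | "state_set Right = gn_right"
| "state_set Tail = gn_tail" | "state_set Interval = {0..1}"

fun state_lo :: "gn_state \<Rightarrow> real" where
  "state_lo Whole = 0" | "state_lo Left = 0" | "state_lo Right = 1" | "state_lo Tail = 2/3"
| "state_lo Interval = 0"

fun state_hi :: "gn_state \<Rightarrow> real" where
  "state_hi Whole = 5/3" | "state_hi Left = 2/3" | "state_hi Right = 5/3" | "state_hi Tail = 5/3"
| "state_hi Interval = 1"

fun state_cut_lo :: "gn_state \<Rightarrow> real" where
  "state_cut_lo Whole = 2/3" | "state_cut_lo Left = 5/12" | "state_cut_lo Right = 7/6"
| "state_cut_lo Tail = 1" | "state_cut_lo Interval = 1/2"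

fun state_cut_hi :: "gn_state \<Rightarrow> real" where
  "state_cut_hi Whole = 2/3" | "state_cut_hi Left = 1/2" | "state_cut_hi Right = 5/4"
| "state_cut_hi Tail = 1" | "state_cut_hi Interval = 1/2"

fun child_map :: "gn_state \<Rightarrow> bool \<Rightarrow> real \<times> real" where
  "child_map Whole _ = (0, 1)"
| "child_map Tail False = (2/3, 1/3)" | "child_map Tail True = (0, 1)"
| "child_map Interval False = (0, 1/2)" | "child_map Interval True = (1/2, 1/2)"
| "child_map Left False = (0, 1/4)" | "child_map Left True = (1/2, 1/4)"
| "child_map Right False = (3/4, 1/4)" | "child_map Right True = (5/4, 1/4)"

lemma child_map_scale_pos: "snd (child_map T \<beta>) > 0"
  by (cases T; cases \<beta>) auto

text \<open>The local lemmas on the model sets above are stated in exactly the unnormalized shape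
  produced here, so that \<open>simp only\<close> can match them.\<close>

lemma state_set_Int_child:
  "state_set T \<inter> {fst (child_map T \<beta>) + snd (child_map T \<beta>) * state_lo (next_state T \<beta>) ..
      fst (child_map T \<beta>) + snd (child_map T \<beta>) * state_hi (next_state T \<beta>)}
   = (\<lambda>t. fst (child_map T \<beta>) + snd (child_map T \<beta>) * t) ` state_set (next_state T \<beta>)"
  by (cases T; cases \<beta>)
    (simp_all only: child_map.simps next_state.simps state_lo.simps state_hi.simps state_set.simps
      fst_conv snd_conv gn_left_Int_digit0 gn_left_Int_digit2 gn_right_Int_digit3 gn_right_Int_digit5
      gn_tail_Int_interval gn_tail_Int_right guthrie_nymann_Int_left guthrie_nymann_Int_tail
      unit_interval_Int_lower_half unit_interval_Int_upper_half)

lemma child_map_False_ends: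
  "fst (child_map T False) + snd (child_map T False) * state_lo (next_state T False) = state_lo T"
  "fst (child_map T False) + snd (child_map T False) * state_hi (next_state T False) = state_cut_lo T"
  by (cases T; simp)+

lemma child_map_True_ends:
  "fst (child_map T True) + snd (child_map T True) * state_lo (next_state T True) = state_cut_hi T"
  "fst (child_map T True) + snd (child_map T True) * state_hi (next_state T True) = state_hi T"
  by (cases T; simp)+

lemma state_order: "state_lo T < state_cut_lo T" "state_cut_lo T \<le> state_cut_hi T" "state_cut_hi T < state_hi T"
  by (cases T; simp)+

lemma state_points_mem:
  "state_lo T \<in> state_set T" "state_hi T \<in> state_set T"
  "state_cut_lo T \<in> state_set T" "state_cut_hi T \<in> state_set T"
proof -
  have L: "0 \<in> gn_left" "2/3 \<in> gn_left" "5/12 \<in> gn_left" "1/2 \<in> gn_left"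
    using guthrie_nymann_0 guthrie_nymann_2_3 guthrie_nymann_digit0[OF guthrie_nymann_5_3]
      guthrie_nymann_digit2[OF guthrie_nymann_0] by (auto simp: gn_left_def)
  have R: "1 \<in> gn_right" "5/3 \<in> gn_right" "7/6 \<in> gn_right" "5/4 \<in> gn_right"
    using guthrie_nymann_1 guthrie_nymann_5_3 guthrie_nymann_digit3[OF guthrie_nymann_5_3]
      guthrie_nymann_digit5[OF guthrie_nymann_0] by (auto simp: gn_right_def)
  have I: "2/3 \<in> gn_tail" "5/3 \<in> gn_tail" "1 \<in> gn_tail"
    using guthrie_nymann_2_3 guthrie_nymann_5_3 guthrie_nymann_1 by (auto simp: gn_tail_def)
  show "state_lo T \<in> state_set T" "state_hi T \<in> state_set T"
    "state_cut_lo T \<in> state_set T" "state_cut_hi T \<in> state_set T"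
    by (cases T; simp add: L R I guthrie_nymann_0 guthrie_nymann_5_3 guthrie_nymann_2_3)+
qed

lemma state_gap: "x \<in> state_set T \<Longrightarrow> \<not> (state_cut_lo T < x \<and> x < state_cut_hi T)"
  by (cases T) (auto dest: gn_left_gap gn_right_gap)

lemma child_map_shrink:
  "snd (child_map T \<beta>) * (state_hi (next_state T \<beta>) - state_lo (next_state T \<beta>)) \<le> (2/3) * (state_hi T - state_lo T)"
  by (cases T; cases \<beta>) auto

fun gn_node :: "bool list \<Rightarrow> real \<times> real" where
  "gn_node [] = (0, 1)"
| "gn_node (\<beta> # l) = (fst (gn_node l) + snd (gn_node l) * fst (child_map (state_of l) \<beta>), snd (gn_node l) * snd (child_map (state_of l) \<beta>))"

definition "gn_a l = fst (gn_node l) + snd (gn_node l) * state_lo (state_of l)"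
definition "gn_b l = fst (gn_node l) + snd (gn_node l) * state_hi (state_of l)"
definition "gn_c l = fst (gn_node l) + snd (gn_node l) * state_cut_lo (state_of l)"
definition "gn_d l = fst (gn_node l) + snd (gn_node l) * state_cut_hi (state_of l)"

lemma gn_node_scale_pos: "snd (gn_node l) > 0"
  by (induct l) (auto intro!: mult_pos_pos child_map_scale_pos)

lemma gn_ab_Cons:
  "gn_a (\<beta> # l) = fst (gn_node l) + snd (gn_node l) * (fst (child_map (state_of l) \<beta>) + snd (child_map (state_of l) \<beta>) * state_lo (next_state (state_of l) \<beta>))"
  "gn_b (\<beta> # l) = fst (gn_node l) + snd (gn_node l) * (fst (child_map (state_of l) \<beta>) + snd (child_map (state_of l) \<beta>) * state_hi (next_state (state_of l) \<beta>))"
  by (simp_all add: gn_a_def gn_b_def algebra_simps)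

lemma gn_child_ends:
  "gn_a (False # l) = gn_a l" "gn_b (False # l) = gn_c l" "gn_a (True # l) = gn_d l" "gn_b (True # l) = gn_b l"
  using gn_ab_Cons[of False l] gn_ab_Cons[of True l] child_map_False_ends[of "state_of l"] child_map_True_ends[of "state_of l"]
  by (simp_all add: gn_a_def gn_b_def gn_c_def gn_d_def)

lemma gn_order: "gn_a l < gn_c l" "gn_c l \<le> gn_d l" "gn_d l < gn_b l"
  using gn_node_scale_pos[of l] state_order[of "state_of l"] by (simp_all add: gn_a_def gn_b_def gn_c_def gn_d_def)

lemma guthrie_nymann_Int_node: "guthrie_nymann \<inter> {gn_a l .. gn_b l} = (\<lambda>t. fst (gn_node l) + snd (gn_node l) * t) ` state_set (state_of l)"
proof (induct l)
  case Nil then show ?case using guthrie_nymann_subset by (auto simp: gn_a_def gn_b_def)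
next
  case (Cons \<beta> l)
  define p where "p = fst (gn_node l)"
  define s where "s = snd (gn_node l)"
  define T where "T = state_of l"
  define \<mu> where "\<mu> = fst (child_map T \<beta>)"
  define \<sigma> where "\<sigma> = snd (child_map T \<beta>)"
  define T' where "T' = next_state T \<beta>"
  have s: "s > 0" using gn_node_scale_pos s_def by simp
  have IH: "guthrie_nymann \<inter> {p + s * state_lo T .. p + s * state_hi T} = (\<lambda>t. p + s * t) ` state_set T"
    using Cons by (simp add: gn_a_def gn_b_def p_def s_def T_def)
  have ch: "gn_a (\<beta> # l) = p + s * (\<mu> + \<sigma> * state_lo T')" "gn_b (\<beta> # l) = p + s * (\<mu> + \<sigma> * state_hi T')"
    using gn_ab_Cons[of \<beta> l] by (simp_all add: p_def s_def T_def \<mu>_def \<sigma>_def T'_def)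
  have sub: "state_lo T \<le> \<mu> + \<sigma> * state_lo T'" "\<mu> + \<sigma> * state_hi T' \<le> state_hi T"
    using child_map_False_ends[of T] child_map_True_ends[of T] state_order[of T] unfolding \<mu>_def \<sigma>_def T'_def
    by (cases \<beta>; simp)+
  have "guthrie_nymann \<inter> {gn_a (\<beta> # l) .. gn_b (\<beta> # l)} = (guthrie_nymann \<inter> {p + s * state_lo T .. p + s * state_hi T}) \<inter> {p + s * (\<mu> + \<sigma> * state_lo T') .. p + s * (\<mu> + \<sigma> * state_hi T')}"
  proof -
    have "{p + s * (\<mu> + \<sigma> * state_lo T') .. p + s * (\<mu> + \<sigma> * state_hi T')} \<subseteq> {p + s * state_lo T .. p + s * state_hi T}"
      using sub s by (auto intro: order_trans mult_left_mono)
    then show ?thesis unfolding ch by blast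
  qed
  also have "\<dots> = (\<lambda>t. p + s * t) ` (state_set T \<inter> {\<mu> + \<sigma> * state_lo T' .. \<mu> + \<sigma> * state_hi T'})"
    unfolding IH by (rule affine_image_Int_atLeastAtMost[OF s])
  also have "\<dots> = (\<lambda>t. p + s * t) ` ((\<lambda>t. \<mu> + \<sigma> * t) ` state_set T')"
    using state_set_Int_child[of T \<beta>] unfolding \<mu>_def \<sigma>_def T'_def by simp
  also have "\<dots> = (\<lambda>t. fst (gn_node (\<beta> # l)) + snd (gn_node (\<beta> # l)) * t) ` state_set (state_of (\<beta> # l))"
    unfolding image_image by (simp add: p_def s_def T_def \<mu>_def \<sigma>_def T'_def algebra_simps)
  finally show ?case .
qed

lemma gn_node_mem: "t \<in> state_set (state_of l) \<Longrightarrow> fst (gn_node l) + snd (gn_node l) * t \<in> guthrie_nymann"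
  using guthrie_nymann_Int_node[of l] by blast

lemma guthrie_nymann_cut_system: "cut_system guthrie_nymann gn_a gn_b gn_c gn_d"
  unfolding cut_system_def
proof (intro allI conjI ballI)
  fix l
  show "gn_a l \<in> guthrie_nymann" "gn_b l \<in> guthrie_nymann"
    using gn_node_mem state_points_mem by (simp_all add: gn_a_def gn_b_def)
  show "gn_a l < gn_c l" "gn_c l \<le> gn_d l" "gn_d l < gn_b l" by (rule gn_order)+
  show "gn_a (False # l) = gn_a l" "gn_b (False # l) = gn_c l" "gn_a (True # l) = gn_d l" "gn_b (True # l) = gn_b l"
    by (rule gn_child_ends)+
  fix x assume x: "x \<in> guthrie_nymann"
  show "\<not> (gn_c l < x \<and> x < gn_d l)"
  proof
    assume cx: "gn_c l < x \<and> x < gn_d l"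
    then have "x \<in> guthrie_nymann \<inter> {gn_a l .. gn_b l}" using x gn_order[of l] by auto
    then obtain t where t: "t \<in> state_set (state_of l)" "x = fst (gn_node l) + snd (gn_node l) * t" using guthrie_nymann_Int_node by auto
    have s: "snd (gn_node l) > 0" by (rule gn_node_scale_pos)
    have "state_cut_lo (state_of l) < t" "t < state_cut_hi (state_of l)" using cx t s by (auto simp: gn_c_def gn_d_def)
    then show False using state_gap[OF t(1)] by simp
  qed
qed

lemma gn_branch_length: "is_branch ns \<Longrightarrow> gn_b (ns n) - gn_a (ns n) \<le> (5/3) * (2/3)^n"
proof (induct n)
  case 0 then show ?case by (simp add: is_branch_def gn_a_def gn_b_def)
next
  case (Suc n)
  obtain \<beta> where \<beta>: "ns (Suc n) = \<beta> # ns n" using Suc(2) by (rule branch_step)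
  define l where "l = ns n"
  have s: "snd (gn_node l) > 0" by (rule gn_node_scale_pos)
  have "gn_b (\<beta> # l) - gn_a (\<beta> # l) = snd (gn_node l) * (snd (child_map (state_of l) \<beta>) * (state_hi (next_state (state_of l) \<beta>) - state_lo (next_state (state_of l) \<beta>)))"
    using gn_ab_Cons[of \<beta> l] by (simp add: algebra_simps)
  also have "\<dots> \<le> snd (gn_node l) * ((2/3) * (state_hi (state_of l) - state_lo (state_of l)))"
    using s child_map_shrink by (intro mult_left_mono) auto
  also have "\<dots> = (2/3) * (gn_b l - gn_a l)" by (simp add: gn_a_def gn_b_def field_simps)
  also have "\<dots> \<le> (2/3) * ((5/3) * (2/3)^n)" using Suc l_def by simp
  finally show ?case using \<beta> l_def by simp
qed

lemma guthrie_nymann_cut_tree: "cut_tree guthrie_nymann gn_a gn_b gn_c gn_d"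
  unfolding cut_tree_def
proof (intro conjI allI impI)
  show "guthrie_nymann \<subseteq> {gn_a []..gn_b []}" using guthrie_nymann_subset by (simp add: gn_a_def gn_b_def)
  show "cut_system guthrie_nymann gn_a gn_b gn_c gn_d" by (rule guthrie_nymann_cut_system)
  fix ns :: "nat \<Rightarrow> bool list" assume P: "is_branch ns"
  show "(\<lambda>n. gn_b (ns n) - gn_a (ns n)) \<longlonglongrightarrow> 0"
  proof (rule Lim_null_comparison)
    show "\<forall>\<^sub>F n in sequentially. norm (gn_b (ns n) - gn_a (ns n)) \<le> (5/3) * (2/3)^n"
    proof (intro always_eventually allI)
      fix n
      have pos: "0 \<le> gn_b (ns n) - gn_a (ns n)" using gn_order[of "ns n"] by linarith
      then have "norm (gn_b (ns n) - gn_a (ns n)) = gn_b (ns n) - gn_a (ns n)" by simp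
      then show "norm (gn_b (ns n) - gn_a (ns n)) \<le> (5/3) * (2/3)^n" using gn_branch_length[OF P, of n] by simp
    qed
    show "(\<lambda>n. (5/3) * (2/3::real)^n) \<longlonglongrightarrow> 0" by (intro tendsto_mult_right_zero LIMSEQ_power_zero) simp
  qed
qed

lemma gn_cut_degenerate_iff: "gn_c l = gn_d l \<longleftrightarrow> state_of l \<noteq> Left \<and> state_of l \<noteq> Right"
  using gn_node_scale_pos[of l] by (cases "state_of l") (simp_all add: gn_c_def gn_d_def)


lemma branch_state_step:
  assumes "is_branch ns"
  obtains \<beta> where "ns (Suc n) = \<beta> # ns n" "state_of (ns (Suc n)) = next_state (state_of (ns n)) \<beta>"
proof -
  obtain \<beta> where "ns (Suc n) = \<beta> # ns n" using assms by (rule branch_step)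
  then show ?thesis using that by simp
qed

lemma Interval_absorbing:
  assumes P: "is_branch ns" and T: "state_of (ns n) = Interval" and "n \<le> m"
  shows "state_of (ns m) = Interval"
  using \<open>n \<le> m\<close>
proof (induction m rule: dec_induct)
  case (step m)
  obtain \<beta> where "state_of (ns (Suc m)) = next_state (state_of (ns m)) \<beta>" using branch_state_step[OF P] by blast
  then show ?case using step.IH by simp
qed (use T in simp)

lemma branch_state_cases:
  assumes P: "is_branch ns"
  shows "(\<forall>N. \<exists>n\<ge>N. state_of (ns n) = Whole) \<or> (\<exists>N. \<forall>n\<ge>N. state_of (ns n) = Interval)
     \<or> (\<exists>N. \<forall>n\<ge>N. state_of (ns n) = Left \<and> ns (Suc n) = True # ns n)
     \<or> (\<exists>N. \<forall>n\<ge>N. state_of (ns n) = Right \<and> ns (Suc n) = False # ns n)"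
proof (rule ccontr)
  assume neg: "\<not> ?thesis"
  then have W: "\<not> (\<forall>N. \<exists>n\<ge>N. state_of (ns n) = Whole)"
    and I: "\<not> (\<exists>N. \<forall>n\<ge>N. state_of (ns n) = Interval)"
    and L: "\<not> (\<exists>N. \<forall>n\<ge>N. state_of (ns n) = Left \<and> ns (Suc n) = True # ns n)"
    and R: "\<not> (\<exists>N. \<forall>n\<ge>N. state_of (ns n) = Right \<and> ns (Suc n) = False # ns n)"
    by blast+
  from W obtain N0 where N0: "\<And>n. n \<ge> N0 \<Longrightarrow> state_of (ns n) \<noteq> Whole" by auto
  have stays: "\<forall>n\<ge>N. state_of (ns n) = T \<and> ns (Suc n) = (T = Left) # ns n"
    if N: "N \<ge> N0" "state_of (ns N) = T" and T: "T = Left \<or> T = Right" for N T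
  proof -
    have one_step: "state_of (ns (Suc n)) = T \<and> ns (Suc n) = (T = Left) # ns n"
      if "n \<ge> N0" "state_of (ns n) = T" for n
    proof -
      obtain \<beta> where \<beta>: "ns (Suc n) = \<beta> # ns n" "state_of (ns (Suc n)) = next_state (state_of (ns n)) \<beta>"
        using branch_state_step[OF P] by blast
      then show ?thesis using N0[of "Suc n"] that T by (cases \<beta>) auto
    qed
    have "state_of (ns n) = T" if "N \<le> n" for n
      using that
    proof (induction n rule: dec_induct)
      case (step m)
      then have "N0 \<le> m" using N(1) by simp
      then show ?case using one_step step.IH by blast
    qed (use N(2) in simp)
    then show ?thesis using one_step N(1) le_trans by blast
  qed
  have no_Interval: "state_of (ns n) \<noteq> Interval" for n
    using Interval_absorbing[OF P] I by blast
  have no_Left: "state_of (ns N) \<noteq> Left" if "N \<ge> N0" for N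
  proof
    assume "state_of (ns N) = Left"
    then have "\<forall>n\<ge>N. state_of (ns n) = Left \<and> ns (Suc n) = True # ns n" using stays[OF that, of Left] by simp
    then show False using L by blast
  qed
  have no_Right: "state_of (ns N) \<noteq> Right" if "N \<ge> N0" for N
  proof
    assume "state_of (ns N) = Right"
    then have "\<forall>n\<ge>N. state_of (ns n) = Right \<and> ns (Suc n) = False # ns n" using stays[OF that, of Right] by simp
    then show False using R by blast
  qed
  obtain \<beta> where "state_of (ns (Suc N0)) = next_state (state_of (ns N0)) \<beta>"
    using branch_state_step[OF P] by blast
  then show False
    using N0[of N0] no_Interval[of N0] no_Interval[of "Suc N0"] no_Left[of N0] no_Left[of "Suc N0"]
      no_Right[of N0] no_Right[of "Suc N0"]
    by (cases "state_of (ns N0)"; cases \<beta>) auto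
qed

lemma branch_Left_Right_frequently:
  assumes P: "is_branch ns" and W: "\<forall>N. \<exists>n\<ge>N. state_of (ns n) = Whole"
  shows "\<exists>n\<ge>N. state_of (ns n) = Left \<or> state_of (ns n) = Right"
proof -
  obtain n where n: "n \<ge> N" "state_of (ns n) = Whole" using W by blast
  obtain n' where n': "n' \<ge> Suc (Suc n)" "state_of (ns n') = Whole" using W by blast
  obtain \<beta> where \<beta>: "state_of (ns (Suc n)) = next_state (state_of (ns n)) \<beta>"
    using branch_state_step[OF P] by blast
  obtain \<gamma> where \<gamma>: "state_of (ns (Suc (Suc n))) = next_state (state_of (ns (Suc n))) \<gamma>"
    using branch_state_step[OF P] by blast
  have "state_of (ns (Suc (Suc n))) \<noteq> Interval"
    using Interval_absorbing[OF P _ n'(1)] n'(2) by auto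
  then have "state_of (ns (Suc n)) = Left \<or> state_of (ns (Suc (Suc n))) = Right"
    using \<beta> \<gamma> n(2) by (cases \<beta>; cases \<gamma>) auto
  moreover have "Suc n \<ge> N" "Suc (Suc n) \<ge> N" using n(1) by simp_all
  ultimately show ?thesis by blast
qed

lemma halving_bounded_below_False:
  fixes f :: "nat \<Rightarrow> real"
  assumes h: "\<And>n. n \<ge> N \<Longrightarrow> f (Suc n) \<le> f n / 2" and lb: "\<And>n. f n \<ge> c" and c: "c > 0"
  shows False
proof -
  have k: "f (N + k) \<le> f N * (1/2)^k" for k
  proof (induct k)
    case (Suc k)
    have "f (N + Suc k) \<le> f (N + k) / 2" using h[of "N + k"] by simp
    also have "\<dots> \<le> f N * (1/2)^k / 2" using Suc by simp
    finally show ?case by simp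
  qed simp
  have fN: "f N > 0" using lb[of N] c by simp
  obtain k where "(1/2::real)^k < c / f N" using real_arch_pow_inv[of "c / f N" "1/2"] c fN by auto
  then have "f N * (1/2)^k < c" using fN by (simp add: field_simps)
  then show False using k[of k] lb[of "N + k"] by simp
qed

section \<open>Every M-Cantorval is homeomorphic to the Guthrie--Nymann Cantorval\<close>

locale cantorval =
  fixes M :: "real set"
  assumes cantorval: "m_cantorval M"
begin

lemma M_compact: "compact M" and M_ne: "M \<noteq> {}" and M_closed: "closed M"
  and M_reg: "closure (interior M) = M"
  using cantorval compact_imp_closed unfolding m_cantorval_def by auto

lemma M_bdd: "bdd_below M" "bdd_above M"
  using compact_imp_bounded[OF M_compact] by (simp_all add: bounded_imp_bdd_below bounded_imp_bdd_above)

lemma interior_dense: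
  assumes x: "x \<in> M" and e: "e > 0"
  shows "\<exists>y\<in>interior M. \<bar>y - x\<bar> < e"
proof -
  have "x \<in> closure (interior M)" using x M_reg by simp
  then show ?thesis using e unfolding closure_approachable dist_real_def by blast
qed

lemma M_islimpt:
  assumes "x \<in> M"
  shows "x islimpt M"
proof -
  have "x \<in> interior M \<or> x islimpt interior M"
    using assms M_reg closure_def by blast
  then show ?thesis using interior_limit_point islimpt_subset interior_subset by blast
qed

lemma interior_Icc_nbhd: "y \<in> interior M \<Longrightarrow> \<exists>r>0. {y - r..y + r} \<subseteq> M"
proof -
  assume "y \<in> interior M"
  then obtain r where r: "r > 0" "ball y r \<subseteq> M" unfolding mem_interior by blast
  have "{y - r/2..y + r/2} \<subseteq> ball y r" using r by (auto simp: dist_real_def)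
  then show ?thesis using r by (intro exI[of _ "r/2"]) auto
qed

lemma maximal_interval_component:
  assumes c: "c \<in> M"
  shows "maximal_interval (connected_component_set M c) M"
  unfolding maximal_interval_def
proof (intro conjI allI impI)
  show "connected_component_set M c \<noteq> {}" using c connected_component_refl by blast
  show "is_interval (connected_component_set M c)" by (simp add: is_interval_connected_1)
  show "connected_component_set M c \<subseteq> M" by (rule connected_component_subset)
  fix K assume K: "is_interval K \<and> connected_component_set M c \<subseteq> K \<and> K \<subseteq> M"
  have "c \<in> K" using K c by auto
  then have "K \<subseteq> connected_component_set M c"
    using K by (intro connected_component_maximal) (auto simp: is_interval_connected_1)
  then show "K = connected_component_set M c" using K by blast
qed

lemma component_bdd: "bdd_below (connected_component_set M c)" "bdd_above (connected_component_set M c)"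
  by (rule bdd_below_mono[OF M_bdd(1) connected_component_subset]
      bdd_above_mono[OF M_bdd(2) connected_component_subset])+

text \<open>This is where the M-Cantorval condition enters: an interval of \<open>M\<close> is accumulated by
  other points of \<open>M\<close> at both ends.\<close>

lemma accum_left_of_interval:
  assumes cd: "c < d" "{c..d} \<subseteq> M"
  shows "accum_left M c"
  unfolding accum_left_def
proof (intro allI impI)
  fix e :: real assume e: "e > 0"
  define J where "J = connected_component_set M c"
  have c: "c \<in> M" using cd by auto
  have cJ: "c \<in> J" using c by (simp add: J_def)
  have cdJ: "{c..d} \<subseteq> J" unfolding J_def using cd by (intro connected_component_maximal) auto
  have iJ: "is_interval J" unfolding J_def by (simp add: is_interval_connected_1)
  have JM: "J \<subseteq> M" unfolding J_def by (rule connected_component_subset)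
  have le: "Inf J \<le> c" using cJ component_bdd(1) unfolding J_def by (intro cInf_lower)
  show "\<exists>z\<in>M. c - e < z \<and> z < c"
  proof (cases "Inf J < c")
    case True
    then obtain j where j: "j \<in> J" "j < c" using cInf_lessD[of J c] cJ by blast
    define z where "z = max j (c - e/2)"
    have "j \<le> z \<and> z \<le> c" using e j by (auto simp: z_def)
    then have "z \<in> J" using iJ j(1) cJ unfolding is_interval_1 by blast
    then show ?thesis using JM j e by (intro bexI[of _ z]) (auto simp: z_def)
  next
    case False
    then have eq: "Inf J = c" using le by simp
    have "Inf J islimpt (M - J)"
      using maximal_interval_component[OF c] cantorval unfolding m_cantorval_def J_def by blast
    then obtain z where z: "z \<in> M - J" "z \<noteq> c" "dist z c < min e (d - c)"
      using eq cd e unfolding islimpt_approachable by (metis diff_gt_0_iff_gt min_less_iff_conj)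
    have "\<not> c < z"
    proof
      assume "c < z"
      then have "z \<in> {c..d}" using z by (auto simp: dist_real_def)
      then show False using cdJ z by auto
    qed
    then show ?thesis using z by (intro bexI[of _ z]) (auto simp: dist_real_def)
  qed
qed

lemma accum_right_of_interval:
  assumes cd: "c < d" "{c..d} \<subseteq> M"
  shows "accum_right M d"
  unfolding accum_right_def
proof (intro allI impI)
  fix e :: real assume e: "e > 0"
  define J where "J = connected_component_set M d"
  have d: "d \<in> M" using cd by auto
  have dJ: "d \<in> J" using d by (simp add: J_def)
  have cdJ: "{c..d} \<subseteq> J" unfolding J_def using cd by (intro connected_component_maximal) auto
  have iJ: "is_interval J" unfolding J_def by (simp add: is_interval_connected_1)
  have JM: "J \<subseteq> M" unfolding J_def by (rule connected_component_subset)
  have le: "d \<le> Sup J" using dJ component_bdd(2) unfolding J_def by (intro cSup_upper)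
  show "\<exists>z\<in>M. d < z \<and> z < d + e"
  proof (cases "d < Sup J")
    case True
    then obtain j where j: "j \<in> J" "d < j" using less_cSupD[of J d] dJ by blast
    define z where "z = min j (d + e/2)"
    have "d \<le> z \<and> z \<le> j" using e j by (auto simp: z_def)
    then have "z \<in> J" using iJ j(1) dJ unfolding is_interval_1 by blast
    then show ?thesis using JM j e by (intro bexI[of _ z]) (auto simp: z_def)
  next
    case False
    then have eq: "Sup J = d" using le by simp
    have "Sup J islimpt (M - J)"
      using maximal_interval_component[OF d] cantorval unfolding m_cantorval_def J_def by blast
    then obtain z where z: "z \<in> M - J" "z \<noteq> d" "dist z d < min e (d - c)"
      using eq cd e unfolding islimpt_approachable by (metis diff_gt_0_iff_gt min_less_iff_conj)
    have "\<not> z < d"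
    proof
      assume "z < d"
      then have "z \<in> {c..d}" using z by (auto simp: dist_real_def)
      then show False using cdJ z by auto
    qed
    then show ?thesis using z by (intro bexI[of _ z]) (auto simp: dist_real_def)
  qed
qed

lemma isolated_right_imp_accum_left:
  assumes x: "x \<in> M" and d: "\<delta> > 0" and g: "\<And>y. x < y \<Longrightarrow> y < x + \<delta> \<Longrightarrow> y \<notin> M"
  shows "accum_left (- M) x" "accum_left M x"
proof -
  show "accum_left (- M) x" unfolding accum_left_def
  proof (intro allI impI, rule ccontr)
    fix e :: real assume e: "e > 0" and n: "\<not> (\<exists>y\<in>- M. x - e < y \<and> y < x)"
    have "{x - e/2..x} \<subseteq> M"
    proof
      fix z assume z: "z \<in> {x - e/2..x}"
      show "z \<in> M"
      proof (rule ccontr)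
        assume z': "z \<notin> M"
        then have "z \<in> - M" by simp
        with n have "\<not> (x - e < z \<and> z < x)" by blast
        with z e x z' show False by (cases "z = x") auto
      qed
    qed
    then have "accum_right M x" using e by (intro accum_right_of_interval[of "x - e/2"]) auto
    then obtain z where "z \<in> M" "x < z" "z < x + \<delta>" using accum_rightD[of M x "x + \<delta>"] d by auto
    then show False using g by blast
  qed
  show "accum_left M x" by (rule islimpt_imp_accum_left[OF M_islimpt[OF x] d g])
qed

lemma isolated_left_imp_accum_right:
  assumes x: "x \<in> M" and d: "\<delta> > 0" and g: "\<And>y. x - \<delta> < y \<Longrightarrow> y < x \<Longrightarrow> y \<notin> M"
  shows "accum_right (- M) x" "accum_right M x"
proof -
  show "accum_right (- M) x" unfolding accum_right_def
  proof (intro allI impI, rule ccontr)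
    fix e :: real assume e: "e > 0" and n: "\<not> (\<exists>y\<in>- M. x < y \<and> y < x + e)"
    have "{x..x + e/2} \<subseteq> M"
    proof
      fix z assume z: "z \<in> {x..x + e/2}"
      show "z \<in> M"
      proof (rule ccontr)
        assume z': "z \<notin> M"
        then have "z \<in> - M" by simp
        with n have "\<not> (x < z \<and> z < x + e)" by blast
        with z e x z' show False by (cases "z = x") auto
      qed
    qed
    then have "accum_left M x" using e by (intro accum_left_of_interval[of x "x + e/2"]) auto
    then obtain z where "z \<in> M" "x - \<delta> < z" "z < x" using accum_leftD[of M x "x - \<delta>"] d by auto
    then show False using g by blast
  qed
  show "accum_right M x" by (rule islimpt_imp_accum_right[OF M_islimpt[OF x] d g])
qed

definition component_lo :: "real \<Rightarrow> real" where "component_lo y = Inf {t. t \<le> y \<and> {t..y} \<subseteq> M}"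
definition component_hi :: "real \<Rightarrow> real" where "component_hi y = Sup {t. y \<le> t \<and> {y..t} \<subseteq> M}"

lemma component_lo_props:
  assumes y: "y \<in> interior M"
  shows "component_lo y < y" "{component_lo y..y} \<subseteq> M" "component_lo y \<in> M"
    "accum_left (- M) (component_lo y)" "accum_left M (component_lo y)"
    "\<And>x. x \<in> M \<Longrightarrow> accum_right (- M) x \<Longrightarrow> x < y \<Longrightarrow> x < component_lo y"
proof -
  define S where "S = {t. t \<le> y \<and> {t..y} \<subseteq> M}"
  have yM: "y \<in> M" using y interior_subset by blast
  have yS: "y \<in> S" using yM by (simp add: S_def)
  have SM: "S \<subseteq> M" by (auto simp: S_def)
  have bb: "bdd_below S" by (rule bdd_below_mono[OF M_bdd(1) SM])
  obtain r where r: "r > 0" "{y - r..y + r} \<subseteq> M" using interior_Icc_nbhd y by blast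
  have "y - r \<in> S" using r by (auto simp: S_def)
  then have "component_lo y \<le> y - r" unfolding component_lo_def S_def[symmetric] using bb by (intro cInf_lower)
  then show lt: "component_lo y < y" using r by simp
  have open_part: "z \<in> M" if z: "component_lo y < z" "z \<le> y" for z
  proof -
    obtain t where t: "t \<in> S" "t < z" using cInf_lessD[of S z] yS z unfolding component_lo_def S_def[symmetric] by blast
    then show ?thesis using z by (auto simp: S_def)
  qed
  have end_mem: "component_lo y \<in> M"
  proof -
    have "\<forall>e>0. \<exists>w\<in>M. dist w (component_lo y) < e"
    proof (intro allI impI)
      fix e :: real assume e: "e > 0"
      define w where "w = component_lo y + min (e/2) (y - component_lo y)"
      have "w \<in> M" using lt e by (intro open_part) (auto simp: w_def)
      moreover have "dist w (component_lo y) < e" using e lt by (auto simp: w_def dist_real_def)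
      ultimately show "\<exists>w\<in>M. dist w (component_lo y) < e" by blast
    qed
    then show ?thesis using closed_approachable[OF M_closed] by blast
  qed
  show "component_lo y \<in> M" by (rule end_mem)
  show sub: "{component_lo y..y} \<subseteq> M"
  proof
    fix z assume "z \<in> {component_lo y..y}"
    then show "z \<in> M" using end_mem open_part by (cases "z = component_lo y") auto
  qed
  show "accum_left (- M) (component_lo y)" unfolding accum_left_def
  proof (intro allI impI, rule ccontr)
    fix e :: real assume e: "e > 0" and n: "\<not> (\<exists>w\<in>- M. component_lo y - e < w \<and> w < component_lo y)"
    have "{component_lo y - e/2..y} \<subseteq> M"
    proof
      fix z assume z: "z \<in> {component_lo y - e/2..y}"
      show "z \<in> M"
      proof (rule ccontr)
        assume z': "z \<notin> M"
        then have "z \<in> - M" by simp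
        with n have "\<not> (component_lo y - e < z \<and> z < component_lo y)" by blast
        with sub z e z' show False by (cases "z < component_lo y") (auto simp: subset_iff)
      qed
    qed
    then have "component_lo y - e/2 \<in> S" using lt e by (auto simp: S_def)
    then have "component_lo y \<le> component_lo y - e/2" unfolding component_lo_def S_def[symmetric] using bb by (intro cInf_lower)
    then show False using e by simp
  qed
  show "accum_left M (component_lo y)" using accum_left_of_interval[OF lt sub] .
  show "x < component_lo y" if x: "x \<in> M" "accum_right (- M) x" "x < y" for x
  proof (rule ccontr)
    assume "\<not> x < component_lo y"
    then have sx: "{x..y} \<subseteq> M" using sub by auto
    obtain w where w: "x < w" "w < y" "w \<notin> M" using accum_rightD[OF x(2,3)] by auto
    then have "w \<in> {x..y}" by auto
    then show False using sx w(3) by blast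
  qed
qed

lemma component_hi_props:
  assumes y: "y \<in> interior M"
  shows "y < component_hi y" "{y..component_hi y} \<subseteq> M" "component_hi y \<in> M"
    "accum_right (- M) (component_hi y)" "accum_right M (component_hi y)"
    "\<And>x. x \<in> M \<Longrightarrow> accum_left (- M) x \<Longrightarrow> y < x \<Longrightarrow> component_hi y < x"
proof -
  define S where "S = {t. y \<le> t \<and> {y..t} \<subseteq> M}"
  have yM: "y \<in> M" using y interior_subset by blast
  have yS: "y \<in> S" using yM by (simp add: S_def)
  have SM: "S \<subseteq> M" by (auto simp: S_def)
  have bb: "bdd_above S" by (rule bdd_above_mono[OF M_bdd(2) SM])
  obtain r where r: "r > 0" "{y - r..y + r} \<subseteq> M" using interior_Icc_nbhd y by blast
  have "y + r \<in> S" using r by (auto simp: S_def)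
  then have "y + r \<le> component_hi y" unfolding component_hi_def S_def[symmetric] using bb by (intro cSup_upper)
  then show lt: "y < component_hi y" using r by simp
  have open_part: "z \<in> M" if z: "y \<le> z" "z < component_hi y" for z
  proof -
    obtain t where t: "t \<in> S" "z < t" using less_cSupD[of S z] yS z unfolding component_hi_def S_def[symmetric] by blast
    then show ?thesis using z by (auto simp: S_def)
  qed
  have end_mem: "component_hi y \<in> M"
  proof -
    have "\<forall>e>0. \<exists>w\<in>M. dist w (component_hi y) < e"
    proof (intro allI impI)
      fix e :: real assume e: "e > 0"
      define w where "w = component_hi y - min (e/2) (component_hi y - y)"
      have "w \<in> M" using lt e by (intro open_part) (auto simp: w_def)
      moreover have "dist w (component_hi y) < e" using e lt by (auto simp: w_def dist_real_def)
      ultimately show "\<exists>w\<in>M. dist w (component_hi y) < e" by blast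
    qed
    then show ?thesis using closed_approachable[OF M_closed] by blast
  qed
  show "component_hi y \<in> M" by (rule end_mem)
  show sub: "{y..component_hi y} \<subseteq> M"
  proof
    fix z assume "z \<in> {y..component_hi y}"
    then show "z \<in> M" using end_mem open_part by (cases "z = component_hi y") auto
  qed
  show "accum_right (- M) (component_hi y)" unfolding accum_right_def
  proof (intro allI impI, rule ccontr)
    fix e :: real assume e: "e > 0" and n: "\<not> (\<exists>w\<in>- M. component_hi y < w \<and> w < component_hi y + e)"
    have "{y..component_hi y + e/2} \<subseteq> M"
    proof
      fix z assume z: "z \<in> {y..component_hi y + e/2}"
      show "z \<in> M"
      proof (rule ccontr)
        assume z': "z \<notin> M"
        then have "z \<in> - M" by simp
        with n have "\<not> (component_hi y < z \<and> z < component_hi y + e)" by blast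
        with sub z e z' show False by (cases "component_hi y < z") (auto simp: subset_iff)
      qed
    qed
    then have "component_hi y + e/2 \<in> S" using lt e by (auto simp: S_def)
    then have "component_hi y + e/2 \<le> component_hi y" unfolding component_hi_def S_def[symmetric] using bb by (intro cSup_upper)
    then show False using e by simp
  qed
  show "accum_right M (component_hi y)" using accum_right_of_interval[OF lt sub] .
  show "component_hi y < x" if x: "x \<in> M" "accum_left (- M) x" "y < x" for x
  proof (rule ccontr)
    assume "\<not> component_hi y < x"
    then have sx: "{y..x} \<subseteq> M" using sub by auto
    obtain w where w: "y < w" "w < x" "w \<notin> M" using accum_leftD[OF x(2,3)] by auto
    then have "w \<in> {y..x}" by auto
    then show False using sx w(3) by blast
  qed
qed

lemma component_hi_eq:
  assumes cy: "c \<le> y" "{c..y} \<subseteq> M"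
  shows "component_hi c = component_hi y"
proof -
  define A where "A = {t. c \<le> t \<and> {c..t} \<subseteq> M}"
  define B where "B = {t. y \<le> t \<and> {y..t} \<subseteq> M}"
  have yB: "y \<in> B" using cy by (auto simp: B_def)
  have BA: "B \<subseteq> A"
  proof
    fix t assume "t \<in> B"
    then have "y \<le> t" "{y..t} \<subseteq> M" by (auto simp: B_def)
    then show "t \<in> A" using cy unfolding A_def by (auto, metis atLeastAtMost_iff linear subsetD)
  qed
  have AM: "A \<subseteq> M" by (auto simp: A_def)
  have bA: "bdd_above A" by (rule bdd_above_mono[OF M_bdd(2) AM])
  have bB: "bdd_above B" by (rule bdd_above_mono[OF bA BA])
  have "Sup A \<le> Sup B"
  proof (rule cSup_least)
    show "A \<noteq> {}" using yB BA by blast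
    fix t assume t: "t \<in> A"
    show "t \<le> Sup B"
    proof (cases "y \<le> t")
      case True
      have "{y..t} \<subseteq> {c..t}" using cy(1) by auto
      then have "t \<in> B" using t True unfolding A_def B_def by blast
      then show ?thesis using bB by (intro cSup_upper)
    next
      case False
      then have "t \<le> y" by simp
      also have "y \<le> Sup B" using yB bB by (intro cSup_upper)
      finally show ?thesis .
    qed
  qed
  moreover have "Sup B \<le> Sup A" using BA yB bA by (intro cSup_subset_mono) auto
  ultimately show ?thesis unfolding component_hi_def A_def[symmetric] B_def[symmetric] by simp
qed

definition boundary_pair :: "real \<Rightarrow> real \<Rightarrow> bool" where
  "boundary_pair a b \<longleftrightarrow> accum_pair M a b \<and> accum_right (- M) a \<and> accum_left (- M) b"

definition interior_index :: "real \<Rightarrow> real \<Rightarrow> nat" where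
  "interior_index a b = first_rat ({a<..<b} \<inter> interior M)"

definition gap_index_upper :: "real \<Rightarrow> real \<Rightarrow> nat" where
  "gap_index_upper a b = first_rat ({(a+b)/2<..<b} - M)"

definition gap_index_lower :: "real \<Rightarrow> real \<Rightarrow> nat" where
  "gap_index_lower a b = first_rat ({a<..<(a+b)/2} - M)"

lemma boundary_pairD:
  assumes "boundary_pair a b"
  shows "a < b" "a \<in> M" "b \<in> M" "accum_right M a" "accum_left M b" "accum_right (- M) a" "accum_left (- M) b"
  using assms by (simp_all add: boundary_pair_def accum_pair_def)

lemma interior_index:
  assumes C: "boundary_pair a b"
  shows "rat_enum (interior_index a b) \<in> {a<..<b} \<inter> interior M"
proof -
  obtain z where z: "z \<in> M" "a < z" "z < b" using accum_rightD boundary_pairD[OF C] by blast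
  obtain y where "y \<in> interior M" "\<bar>y - z\<bar> < min (z - a) (b - z)"
    using interior_dense[OF z(1), of "min (z - a) (b - z)"] z by auto
  then have "y \<in> {a<..<b} \<inter> interior M" using z by auto
  then show ?thesis unfolding interior_index_def by (intro first_rat_mem) auto
qed

lemma gap_index_upper:
  assumes C: "boundary_pair a b"
  shows "rat_enum (gap_index_upper a b) \<in> {(a+b)/2<..<b} - M"
proof -
  have "(a+b)/2 < b" using boundary_pairD(1)[OF C] by simp
  then obtain z where "z \<in> - M" "(a+b)/2 < z" "z < b" using accum_leftD boundary_pairD(7)[OF C] by blast
  then have "z \<in> {(a+b)/2<..<b} - M" by simp
  then show ?thesis unfolding gap_index_upper_def using M_closed by (intro first_rat_mem open_Diff) auto
qed

lemma gap_index_lower: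
  assumes C: "boundary_pair a b"
  shows "rat_enum (gap_index_lower a b) \<in> {a<..<(a+b)/2} - M"
proof -
  have "a < (a+b)/2" using boundary_pairD(1)[OF C] by simp
  then obtain z where "z \<in> - M" "a < z" "z < (a+b)/2" using accum_rightD boundary_pairD(6)[OF C] by blast
  then have "z \<in> {a<..<(a+b)/2} - M" by simp
  then show ?thesis unfolding gap_index_lower_def using M_closed by (intro first_rat_mem open_Diff) auto
qed

lemma boundary_pair_split:
  assumes C: "boundary_pair a b" and r: "a < r" "r < b" "r \<notin> M"
  shows "boundary_pair a (gap_lo M r)" "boundary_pair (gap_hi M r) b" "gap_lo M r < r" "r < gap_hi M r"
    "gap_lo M r \<in> M" "gap_hi M r \<in> M" "\<And>x. x \<in> M \<Longrightarrow> \<not> (gap_lo M r < x \<and> x < gap_hi M r)"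
proof -
  note ab = boundary_pairD[OF C]
  note G = gap_bounds[OF M_closed ab(2) r(1) ab(3) r(2,3)]
  have inner: "a < gap_lo M r" "gap_hi M r < b"
    using accum_pair_gap[OF M_closed _ r] C by (auto simp: boundary_pair_def)
  show "gap_lo M r < r" "r < gap_hi M r" "gap_lo M r \<in> M" "gap_hi M r \<in> M"
    "\<And>x. x \<in> M \<Longrightarrow> \<not> (gap_lo M r < x \<and> x < gap_hi M r)" using G by auto
  have d: "gap_hi M r - gap_lo M r > 0" using G(3,4) by simp
  note L = isolated_right_imp_accum_left[OF G(1) d] and R = isolated_left_imp_accum_right[OF G(6) d]
  have "accum_left (- M) (gap_lo M r)" "accum_left M (gap_lo M r)" by (rule L; use G(9) in auto)+
  then show "boundary_pair a (gap_lo M r)"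
    using ab inner G(1) by (simp add: boundary_pair_def accum_pair_def)
  have "accum_right (- M) (gap_hi M r)" "accum_right M (gap_hi M r)" by (rule R; use G(9) in auto)+
  then show "boundary_pair (gap_hi M r) b"
    using ab inner G(6) by (simp add: boundary_pair_def accum_pair_def)
qed

text \<open>
  The interval \<open>[a, b]\<close> of a node in state \<open>T\<close> is cut as follows. \<open>Whole\<close>: degenerately, at
  the left end of the component of \<open>M\<close> containing the first rational of \<open>interior M \<inter> (a, b)\<close>;
  the right child then starts with that component (state \<open>Tail\<close>), which is cut degenerately at
  its right end, and its left part becomes an \<open>Interval\<close>, halved forever. \<open>Left\<close> and \<open>Right\<close>:
  at the gap around the first rational outside \<open>M\<close> in the right resp. left half of \<open>(a, b)\<close>.
\<close>

definition state_cut :: "gn_state \<Rightarrow> real \<Rightarrow> real \<Rightarrow> real \<times> real" where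
  "state_cut T a b = (case T of
      Whole \<Rightarrow> (component_lo (rat_enum (interior_index a b)), component_lo (rat_enum (interior_index a b)))
    | Tail \<Rightarrow> (component_hi a, component_hi a)
    | Interval \<Rightarrow> ((a+b)/2, (a+b)/2)
    | Left \<Rightarrow> (gap_lo M (rat_enum (gap_index_upper a b)), gap_hi M (rat_enum (gap_index_upper a b)))
    | Right \<Rightarrow> (gap_lo M (rat_enum (gap_index_lower a b)), gap_hi M (rat_enum (gap_index_lower a b))))"

primrec m_node :: "bool list \<Rightarrow> real \<times> real" where
  "m_node [] = (Inf M, Sup M)"
| "m_node (\<beta> # l) = (let (a, b) = m_node l; (c, d) = state_cut (state_of l) a b in
      if \<beta> then (d, b) else (a, c))"

definition "m_a l = fst (m_node l)"
definition "m_b l = snd (m_node l)"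
definition "m_c l = fst (state_cut (state_of l) (m_a l) (m_b l))"
definition "m_d l = snd (state_cut (state_of l) (m_a l) (m_b l))"

lemma m_node_Cons:
  "m_a (\<beta> # l) = (if \<beta> then m_d l else m_a l)" "m_b (\<beta> # l) = (if \<beta> then m_b l else m_c l)"
  by (simp_all add: m_a_def m_b_def m_c_def m_d_def split: prod.split)

definition m_state_inv :: "gn_state \<Rightarrow> real \<Rightarrow> real \<Rightarrow> bool" where
  "m_state_inv T a b = (case T of
      Whole \<Rightarrow> boundary_pair a b | Left \<Rightarrow> boundary_pair a b | Right \<Rightarrow> boundary_pair a b
    | Tail \<Rightarrow> a \<in> M \<and> a < component_hi a \<and> {a..component_hi a} \<subseteq> M \<and> boundary_pair (component_hi a) b
    | Interval \<Rightarrow> a < b \<and> {a..b} \<subseteq> M)"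

definition good_cut :: "gn_state \<Rightarrow> real \<Rightarrow> real \<Rightarrow> bool" where
  "good_cut T a b \<longleftrightarrow> (let (c, d) = state_cut T a b in
     a \<in> M \<and> b \<in> M \<and> a < c \<and> c \<le> d \<and> d < b \<and> (\<forall>x\<in>M. \<not> (c < x \<and> x < d))
     \<and> m_state_inv (next_state T False) a c \<and> m_state_inv (next_state T True) d b)"

lemma good_cut_Whole: "boundary_pair a b \<Longrightarrow> good_cut Whole a b"
proof -
  assume C: "boundary_pair a b"
  define r where "r = rat_enum (interior_index a b)"
  have r: "a < r" "r < b" "r \<in> interior M" using interior_index[OF C] by (simp_all add: r_def)
  note ab = boundary_pairD[OF C]
  note CL = component_lo_props[OF r(3)] and CH = component_hi_props[OF r(3)]
  have ac: "a < component_lo r" using CL(6)[OF ab(2) ab(6) r(1)] .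
  have chb: "component_hi r < b" using CH(6)[OF ab(3) ab(7) r(2)] .
  have ceq: "component_hi (component_lo r) = component_hi r" using component_hi_eq[of "component_lo r" r] CL(1,2) by simp
  have sub: "{component_lo r..component_hi r} \<subseteq> M"
  proof
    fix x assume x: "x \<in> {component_lo r..component_hi r}"
    then show "x \<in> M" using CL(2) CH(2) by (cases "x \<le> r") auto
  qed
  have cut: "state_cut Whole a b = (component_lo r, component_lo r)" by (simp add: state_cut_def r_def)
  show "good_cut Whole a b"
    unfolding good_cut_def cut m_state_inv_def
    using ab CL CH ac chb ceq sub r by (auto simp: boundary_pair_def accum_pair_def Let_def)
qed

lemma good_cut_Tail: "m_state_inv Tail a b \<Longrightarrow> good_cut Tail a b"
  unfolding good_cut_def m_state_inv_def state_cut_def by (auto simp: boundary_pair_def accum_pair_def Let_def)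

lemma good_cut_Interval: "m_state_inv Interval a b \<Longrightarrow> good_cut Interval a b"
  unfolding good_cut_def m_state_inv_def state_cut_def by (auto simp: Let_def)

lemma good_cut_at_gap:
  assumes C: "boundary_pair a b" and r: "a < r" "r < b" "r \<notin> M"
    and cut: "state_cut T a b = (gap_lo M r, gap_hi M r)" and T: "T = Left \<or> T = Right"
  shows "good_cut T a b"
  using boundary_pair_split[OF C r] boundary_pairD[OF C] T
  unfolding good_cut_def cut m_state_inv_def by (auto simp: boundary_pair_def accum_pair_def Let_def)

lemma good_cut_m_state_inv: "m_state_inv T a b \<Longrightarrow> good_cut T a b"
proof (cases T)
  case Left
  assume "m_state_inv T a b"
  then have C: "boundary_pair a b" using Left by (simp add: m_state_inv_def)
  then show ?thesis
    using gap_index_upper[OF C] boundary_pairD(1)[OF C] Left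
    by (intro good_cut_at_gap[OF C, where r="rat_enum (gap_index_upper a b)"]) (auto simp: state_cut_def)
next
  case Right
  assume "m_state_inv T a b"
  then have C: "boundary_pair a b" using Right by (simp add: m_state_inv_def)
  then show ?thesis
    using gap_index_lower[OF C] boundary_pairD(1)[OF C] Right
    by (intro good_cut_at_gap[OF C, where r="rat_enum (gap_index_lower a b)"]) (auto simp: state_cut_def)
qed (auto simp: m_state_inv_def intro: good_cut_Whole good_cut_Tail[unfolded m_state_inv_def]
    good_cut_Interval[unfolded m_state_inv_def])

lemma m_state_inv_root: "m_state_inv Whole (Inf M) (Sup M)"
proof -
  note IS = compact_Inf_Sup[OF M_compact M_ne]
  have "\<And>y. Inf M - 1 < y \<Longrightarrow> y < Inf M \<Longrightarrow> y \<notin> M" using IS(3) by force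
  then have R: "accum_right (- M) (Inf M)" by (rule isolated_left_imp_accum_right[OF IS(1) zero_less_one])
  have "\<And>y. Sup M < y \<Longrightarrow> y < Sup M + 1 \<Longrightarrow> y \<notin> M" using IS(4) by force
  then have L: "accum_left (- M) (Sup M)" by (rule isolated_right_imp_accum_left[OF IS(2) zero_less_one])
  show ?thesis
    using compact_accum_pair_Inf_Sup[OF M_compact M_ne M_islimpt] R L
    by (simp add: m_state_inv_def boundary_pair_def)
qed

lemma m_state_inv_node: "m_state_inv (state_of l) (m_a l) (m_b l)"
proof (induct l)
  case Nil then show ?case using m_state_inv_root by (simp add: m_a_def m_b_def)
next
  case (Cons \<beta> l)
  have "good_cut (state_of l) (m_a l) (m_b l)" by (rule good_cut_m_state_inv[OF Cons])
  then show ?case by (cases \<beta>) (simp_all add: good_cut_def m_node_Cons m_c_def m_d_def Let_def split: prod.splits)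
qed

lemma M_cut_system: "cut_system M m_a m_b m_c m_d"
  unfolding cut_system_def
proof (intro allI)
  fix l
  have "good_cut (state_of l) (m_a l) (m_b l)" by (rule good_cut_m_state_inv[OF m_state_inv_node])
  then show "m_a l \<in> M \<and> m_b l \<in> M \<and> m_a l < m_c l \<and> m_c l \<le> m_d l \<and> m_d l < m_b l \<and>
        (\<forall>x\<in>M. \<not> (m_c l < x \<and> x < m_d l)) \<and>
        m_a (False # l) = m_a l \<and> m_b (False # l) = m_c l \<and> m_a (True # l) = m_d l \<and> m_b (True # l) = m_b l"
    by (simp add: good_cut_def m_node_Cons m_c_def m_d_def Let_def split: prod.splits)
qed

lemma boundary_pair_node:
  "state_of l = Whole \<or> state_of l = Left \<or> state_of l = Right \<Longrightarrow> boundary_pair (m_a l) (m_b l)"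
  using m_state_inv_node[of l] by (auto simp: m_state_inv_def)

definition interior_rat :: "bool list \<Rightarrow> real" where
  "interior_rat l = rat_enum (interior_index (m_a l) (m_b l))"

definition gap_rat_M :: "bool list \<Rightarrow> real" where
  "gap_rat_M l = rat_enum (if state_of l = Left then gap_index_upper (m_a l) (m_b l) else gap_index_lower (m_a l) (m_b l))"

lemma m_cut_Whole: "state_of l = Whole \<Longrightarrow> m_c l = component_lo (interior_rat l) \<and> m_d l = component_lo (interior_rat l)"
  by (simp add: m_c_def m_d_def state_cut_def interior_rat_def)

lemma m_cut_Tail: "state_of l = Tail \<Longrightarrow> m_d l = component_hi (m_a l)"
  by (simp add: m_d_def state_cut_def)

lemma m_cut_Interval: "state_of l = Interval \<Longrightarrow> m_c l = (m_a l + m_b l)/2 \<and> m_d l = (m_a l + m_b l)/2"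
  by (simp add: m_c_def m_d_def state_cut_def)

lemma m_cut_gap:
  assumes "state_of l = Left \<or> state_of l = Right"
  shows "m_a l < gap_rat_M l" "gap_rat_M l < m_b l" "m_c l < gap_rat_M l" "gap_rat_M l < m_d l"
    "state_of l = Left \<Longrightarrow> (m_a l + m_b l)/2 < gap_rat_M l"
    "state_of l = Right \<Longrightarrow> gap_rat_M l < (m_a l + m_b l)/2"
proof -
  have C: "boundary_pair (m_a l) (m_b l)" using boundary_pair_node assms by blast
  have r: "m_a l < gap_rat_M l" "gap_rat_M l < m_b l" "gap_rat_M l \<notin> M"
    "state_of l = Left \<Longrightarrow> (m_a l + m_b l)/2 < gap_rat_M l"
    "state_of l = Right \<Longrightarrow> gap_rat_M l < (m_a l + m_b l)/2"
    using assms gap_index_upper[OF C] gap_index_lower[OF C] boundary_pairD(1)[OF C]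
    by (auto simp: gap_rat_M_def)
  then show "m_a l < gap_rat_M l" "gap_rat_M l < m_b l"
    "state_of l = Left \<Longrightarrow> (m_a l + m_b l)/2 < gap_rat_M l"
    "state_of l = Right \<Longrightarrow> gap_rat_M l < (m_a l + m_b l)/2" by simp_all
  have "m_c l = gap_lo M (gap_rat_M l) \<and> m_d l = gap_hi M (gap_rat_M l)"
    using assms by (auto simp: m_c_def m_d_def state_cut_def gap_rat_M_def)
  then show "m_c l < gap_rat_M l" "gap_rat_M l < m_d l" using boundary_pair_split(3,4)[OF C r(1-3)] by simp_all
qed

lemma m_child_halves:
  assumes "state_of l = Interval \<or> (state_of l = Left \<and> \<beta>) \<or> (state_of l = Right \<and> \<not> \<beta>)"
  shows "m_b (\<beta> # l) - m_a (\<beta> # l) \<le> (m_b l - m_a l) / 2"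
  using assms m_cut_Interval[of l] m_cut_gap[of l] cut_system_child[OF M_cut_system]
    cut_system_order[OF M_cut_system, of l]
  by (cases \<beta>) (auto simp: m_node_Cons)

text \<open>
  The rational cut at a node in state \<open>Whole\<close> lies in the interior of \<open>M\<close>, inside the
  component that forms the next \<open>Tail\<close>; so no later node in state \<open>Whole\<close> contains it.
\<close>

lemma m_Whole_excludes:
  assumes P: "is_branch ns" and n: "state_of (ns n) = Whole" and m: "state_of (ns m) = Whole" "n < m"
  shows "interior_rat (ns n) < m_a (ns m) \<or> m_b (ns m) < interior_rat (ns n)"
proof -
  note T = M_cut_system
  define l r where "l = ns n" and "r = interior_rat (ns n)"
  have r: "r \<in> interior M" using interior_index[OF boundary_pair_node[of l]] n
    by (simp add: r_def l_def interior_rat_def)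
  note CL = component_lo_props[OF r] and CH = component_hi_props(1)[OF r]
  have cuts: "m_c l = component_lo r" "m_d l = component_lo r" using m_cut_Whole n by (simp_all add: r_def l_def)
  obtain \<beta> where \<beta>: "ns (Suc n) = \<beta> # l" "state_of (ns (Suc n)) = next_state Whole \<beta>"
    using branch_state_step[OF P, of n] n l_def by metis
  show ?thesis
  proof (cases \<beta>)
    case False
    then have "m_b (ns (Suc n)) = component_lo r" using \<beta> cut_system_child(2)[OF T] cuts by simp
    moreover have "m_b (ns m) \<le> m_b (ns (Suc n))"
      using cut_system_decseq[OF T P] m(2) by (simp add: decseq_def)
    ultimately show ?thesis using CL(1) by (simp add: r_def)
  next
    case True
    then have Tail: "state_of (ns (Suc n)) = Tail" using \<beta> by simp
    have a1: "m_a (ns (Suc n)) = component_lo r" using True \<beta> cut_system_child(3)[OF T] cuts by simp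
    have "m \<noteq> Suc n" using Tail m(1) by auto
    then have m2: "Suc (Suc n) \<le> m" using m(2) by simp
    obtain \<gamma> where \<gamma>: "ns (Suc (Suc n)) = \<gamma> # ns (Suc n)" "state_of (ns (Suc (Suc n))) = next_state Tail \<gamma>"
      using branch_state_step[OF P, of "Suc n"] Tail by metis
    have "state_of (ns (Suc (Suc n))) \<noteq> Interval" using Interval_absorbing[OF P _ m2] m(1) by auto
    then have "\<gamma>" using \<gamma> by (cases \<gamma>) auto
    then have "m_a (ns (Suc (Suc n))) = m_d (ns (Suc n))" using \<gamma> cut_system_child(3)[OF T] by simp
    also have "\<dots> = component_hi r" using m_cut_Tail[OF Tail] a1 component_hi_eq[of "component_lo r" r] CL(1,2) by simp
    finally have "r < m_a (ns (Suc (Suc n)))" using CH by simp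
    moreover have "m_a (ns (Suc (Suc n))) \<le> m_a (ns m)"
      using cut_system_incseq[OF T P] m2 by (simp add: incseq_def)
    ultimately show ?thesis by (simp add: r_def)
  qed
qed

text \<open>The two remaining cases of the shrinking argument: if a branch meets \<open>Whole\<close> infinitely
  often, the rationals cut along it are pairwise distinct and their indices are bounded.\<close>

lemma M_branch_Whole_interior_False:
  assumes P: "is_branch ns" and W: "\<forall>N. \<exists>n\<ge>N. state_of (ns n) = Whole"
    and enclose: "\<And>n. m_a (ns n) \<le> \<alpha>" "\<And>n. \<beta> \<le> m_b (ns n)"
    and y: "\<alpha> < y" "y < \<beta>" "y \<in> interior M"
  shows False
proof -
  have "rat_enum (first_rat ({\<alpha><..<\<beta>} \<inter> interior M)) \<in> {\<alpha><..<\<beta>} \<inter> interior M"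
    using y by (intro first_rat_mem) auto
  then obtain j where j: "rat_enum j \<in> {\<alpha><..<\<beta>} \<inter> interior M" ..
  define I where "I = {n. state_of (ns n) = Whole}"
  have "infinite I" unfolding I_def infinite_nat_iff_unbounded_le using W by blast
  moreover have "interior_index (m_a (ns n)) (m_b (ns n)) \<le> j" if "n \<in> I" for n
    unfolding interior_index_def using j enclose[of n] by (intro first_rat_le) auto
  moreover have "interior_index (m_a (ns n)) (m_b (ns n)) \<noteq> interior_index (m_a (ns m)) (m_b (ns m))"
    if "n \<in> I" "m \<in> I" "n < m" for n m
  proof -
    have "interior_rat (ns n) < m_a (ns m) \<or> m_b (ns m) < interior_rat (ns n)"
      using m_Whole_excludes[OF P _ _ \<open>n < m\<close>] that by (simp add: I_def)
    moreover have "m_a (ns m) < interior_rat (ns m)" "interior_rat (ns m) < m_b (ns m)"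
      using interior_index[OF boundary_pair_node[of "ns m"]] that by (auto simp: I_def interior_rat_def)
    ultimately show ?thesis unfolding interior_rat_def by auto
  qed
  ultimately show False by (rule infinite_injective_bounded_False)
qed

lemma M_branch_Whole_gaps_False:
  assumes P: "is_branch ns" and W: "\<forall>N. \<exists>n\<ge>N. state_of (ns n) = Whole"
    and lim: "(\<lambda>n. m_a (ns n)) \<longlonglongrightarrow> \<alpha>" "(\<lambda>n. m_b (ns n)) \<longlonglongrightarrow> \<beta>"
    and enclose: "\<And>n. m_a (ns n) \<le> \<alpha>" "\<And>n. \<beta> \<le> m_b (ns n)"
    and ab: "\<alpha> < \<beta>" and gap: "\<And>z. \<alpha> < z \<Longrightarrow> z < \<beta> \<Longrightarrow> z \<notin> M"
  shows False
proof -
  obtain j1 where j1: "(\<alpha> + 3*\<beta>)/4 < rat_enum j1" "rat_enum j1 < \<beta>" using rat_enum_dense[of "(\<alpha> + 3*\<beta>)/4" \<beta>] ab by auto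
  obtain j2 where j2: "\<alpha> < rat_enum j2" "rat_enum j2 < (3*\<alpha> + \<beta>)/4" using rat_enum_dense[of \<alpha> "(3*\<alpha> + \<beta>)/4"] ab by auto
  \<comment> \<open>Eventually the midpoint of the node interval lies in the middle half of \<open>(\<alpha>, \<beta>)\<close>.\<close>
  have mid: "(\<lambda>n. (m_a (ns n) + m_b (ns n))/2) \<longlonglongrightarrow> (\<alpha> + \<beta>)/2" using lim by (auto intro!: tendsto_intros)
  have "\<forall>\<^sub>F n in sequentially. (3*\<alpha> + \<beta>)/4 < (m_a (ns n) + m_b (ns n))/2"
    by (rule order_tendstoD(1)[OF mid]) (use ab in simp)
  moreover have "\<forall>\<^sub>F n in sequentially. (m_a (ns n) + m_b (ns n))/2 < (\<alpha> + 3*\<beta>)/4"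
    by (rule order_tendstoD(2)[OF mid]) (use ab in simp)
  ultimately have "\<forall>\<^sub>F n in sequentially. (3*\<alpha> + \<beta>)/4 < (m_a (ns n) + m_b (ns n))/2
      \<and> (m_a (ns n) + m_b (ns n))/2 < (\<alpha> + 3*\<beta>)/4"
    by (rule eventually_conj)
  then obtain N0 where N0: "\<And>n. n \<ge> N0 \<Longrightarrow> (3*\<alpha> + \<beta>)/4 < (m_a (ns n) + m_b (ns n))/2
      \<and> (m_a (ns n) + m_b (ns n))/2 < (\<alpha> + 3*\<beta>)/4"
    unfolding eventually_sequentially by blast
  define I where "I = {n. n \<ge> N0 \<and> (state_of (ns n) = Left \<or> state_of (ns n) = Right)}"
  define k where "k n = (if state_of (ns n) = Left then gap_index_upper (m_a (ns n)) (m_b (ns n))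
    else gap_index_lower (m_a (ns n)) (m_b (ns n)))" for n
  have k: "rat_enum (k n) = gap_rat_M (ns n)" for n by (simp add: k_def gap_rat_M_def)
  have "infinite I"
    unfolding infinite_nat_iff_unbounded_le
  proof
    fix m
    obtain n where "n \<ge> max m N0" "state_of (ns n) = Left \<or> state_of (ns n) = Right"
      using branch_Left_Right_frequently[OF P W] by blast
    then show "\<exists>n\<ge>m. n \<in> I" by (auto simp: I_def)
  qed
  moreover have "k n \<le> max j1 j2" if n: "n \<in> I" for n
  proof (cases "state_of (ns n) = Left")
    case True
    have "rat_enum j1 \<in> {(m_a (ns n) + m_b (ns n))/2<..<m_b (ns n)} - M"
      using j1 N0[of n] n enclose(2)[of n] gap[of "rat_enum j1"] ab by (auto simp: I_def)
    then have "gap_index_upper (m_a (ns n)) (m_b (ns n)) \<le> j1"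
      unfolding gap_index_upper_def by (rule first_rat_le)
    then show ?thesis using True by (simp add: k_def)
  next
    case False
    have "rat_enum j2 \<in> {m_a (ns n)<..<(m_a (ns n) + m_b (ns n))/2} - M"
      using j2 N0[of n] n enclose(1)[of n] gap[of "rat_enum j2"] ab by (auto simp: I_def)
    then have "gap_index_lower (m_a (ns n)) (m_b (ns n)) \<le> j2"
      unfolding gap_index_lower_def by (rule first_rat_le)
    then show ?thesis using False by (simp add: k_def)
  qed
  moreover have "k n \<noteq> k m" if "n \<in> I" "m \<in> I" "n < m" for n m
  proof -
    have LR: "state_of (ns n) = Left \<or> state_of (ns n) = Right" "state_of (ns m) = Left \<or> state_of (ns m) = Right"
      using that by (simp_all add: I_def)
    have "gap_rat_M (ns n) < m_a (ns m) \<or> m_b (ns m) < gap_rat_M (ns n)"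
      by (rule branch_avoids_cut[OF M_cut_system P \<open>n < m\<close>]) (use m_cut_gap(3,4)[OF LR(1)] in simp_all)
    moreover have "m_a (ns m) < gap_rat_M (ns m)" "gap_rat_M (ns m) < m_b (ns m)"
      using m_cut_gap(1,2)[OF LR(2)] by simp_all
    ultimately show ?thesis using k[of n] k[of m] by auto
  qed
  ultimately show False by (rule infinite_injective_bounded_False)
qed

lemma M_branch_length_tendsto_0:
  assumes P: "is_branch ns"
  shows "(\<lambda>n. m_b (ns n) - m_a (ns n)) \<longlonglongrightarrow> 0"
proof -
  have T: "cut_system M m_a m_b m_c m_d" by (rule M_cut_system)
  obtain \<alpha> \<beta> where L: "(\<lambda>n. m_a (ns n)) \<longlonglongrightarrow> \<alpha>" "(\<lambda>n. m_b (ns n)) \<longlonglongrightarrow> \<beta>" "\<And>n. m_a (ns n) \<le> \<alpha>"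
    "\<And>n. \<beta> \<le> m_b (ns n)" "\<alpha> \<le> \<beta>" "\<alpha> \<in> M" "\<beta> \<in> M"
    using branch_limits[OF T P M_closed] by blast
  have "\<alpha> = \<beta>"
  proof (rule ccontr)
    assume "\<alpha> \<noteq> \<beta>"
    then have ab: "\<alpha> < \<beta>" using L(5) by simp
    have lb: "\<And>n. m_b (ns n) - m_a (ns n) \<ge> \<beta> - \<alpha>" using L(3,4) by (smt (verit))
    have halves: False
      if N: "\<And>n. n \<ge> N \<Longrightarrow> \<exists>\<gamma>. ns (Suc n) = \<gamma> # ns n \<and> (state_of (ns n) = Interval
        \<or> (state_of (ns n) = Left \<and> \<gamma>) \<or> (state_of (ns n) = Right \<and> \<not> \<gamma>))" for N
    proof (rule halving_bounded_below_False[OF _ lb])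
      fix n assume "n \<ge> N"
      then obtain \<gamma> where "ns (Suc n) = \<gamma> # ns n"
        "state_of (ns n) = Interval \<or> (state_of (ns n) = Left \<and> \<gamma>) \<or> (state_of (ns n) = Right \<and> \<not> \<gamma>)"
        using N by blast
      then show "m_b (ns (Suc n)) - m_a (ns (Suc n)) \<le> (m_b (ns n) - m_a (ns n)) / 2"
        using m_child_halves by simp
    qed (use ab in simp)
    consider (Whole) "\<forall>N. \<exists>n\<ge>N. state_of (ns n) = Whole"
      | (Interval) N where "\<forall>n\<ge>N. state_of (ns n) = Interval"
      | (Left) N where "\<forall>n\<ge>N. state_of (ns n) = Left \<and> ns (Suc n) = True # ns n"
      | (Right) N where "\<forall>n\<ge>N. state_of (ns n) = Right \<and> ns (Suc n) = False # ns n"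
      using branch_state_cases[OF P] by blast
    then show False
    proof cases
      case Whole
      show False
      proof (cases "\<exists>y. \<alpha> < y \<and> y < \<beta> \<and> y \<in> interior M")
        case True
        then show False using M_branch_Whole_interior_False[OF P Whole L(3,4)] by blast
      next
        case False
        have "z \<notin> M" if z: "\<alpha> < z" "z < \<beta>" for z
        proof
          assume "z \<in> M"
          then obtain y where "y \<in> interior M" "\<bar>y - z\<bar> < min (z - \<alpha>) (\<beta> - z)"
            using interior_dense[of z "min (z - \<alpha>) (\<beta> - z)"] z by auto
          then show False using False by auto
        qed
        then show False using M_branch_Whole_gaps_False[OF P Whole L(1-4) ab] by blast
      qed
    next
      case Interval
      show False
      proof (rule halves)
        fix n assume "n \<ge> N"
        moreover obtain \<gamma> where "ns (Suc n) = \<gamma> # ns n" using P by (rule branch_step)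
        ultimately show "\<exists>\<gamma>. ns (Suc n) = \<gamma> # ns n \<and> (state_of (ns n) = Interval
          \<or> (state_of (ns n) = Left \<and> \<gamma>) \<or> (state_of (ns n) = Right \<and> \<not> \<gamma>))" using Interval by blast
      qed
    next
      case Left
      then show False by (intro halves[of N]) auto
    next
      case Right
      then show False by (intro halves[of N]) auto
    qed
  qed
  have "(\<lambda>n. m_b (ns n) - m_a (ns n)) \<longlonglongrightarrow> \<beta> - \<alpha>" by (intro tendsto_diff L(1,2))
  then show ?thesis using \<open>\<alpha> = \<beta>\<close> by simp
qed

lemma M_cut_tree: "cut_tree M m_a m_b m_c m_d"
  unfolding cut_tree_def
  using compact_Inf_Sup[OF M_compact M_ne] M_cut_system M_branch_length_tendsto_0
  by (auto simp: m_a_def m_b_def)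

lemma M_cut_degenerate_iff: "m_c l = m_d l \<longleftrightarrow> state_of l \<noteq> Left \<and> state_of l \<noteq> Right"
  using m_cut_gap(3,4)[of l] by (cases "state_of l") (simp_all add: m_c_def m_d_def state_cut_def)

theorem M_homeomorphic_guthrie_nymann: "M homeomorphic guthrie_nymann"
proof (rule cut_trees_homeomorphic[OF M_cut_tree guthrie_nymann_cut_tree])
  show "\<And>s. m_c s = m_d s \<longleftrightarrow> gn_c s = gn_d s" using M_cut_degenerate_iff gn_cut_degenerate_iff by simp
  show "compact M" by (rule M_compact)
  show "compact guthrie_nymann" by (rule compact_guthrie_nymann)
qed

end

theorem proposition3p1:
  fixes C M :: "real set" and p :: real
  assumes "cantor_set C" and "m_cantorval M"
  shows "realizable_in_plane {p}
       \<and> realizable_in_plane {0..1::real}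
       \<and> realizable_in_plane C
       \<and> realizable_in_plane M
       \<and> realizable_in_plane ({0..1::real} \<times> {0..1::real})
       \<and> realizable_in_plane ({0..1::real} \<times> C)
       \<and> realizable_in_plane ({0..1::real} \<times> M)
       \<and> realizable_in_plane (C \<times> M)
       \<and> realizable_in_plane (M \<times> M)"
proof -
  interpret cantorval M by (rule cantorval.intro[OF assms(2)])
  have I: "achievement_set dyadic_terms homeomorphic {0..1::real}"
    unfolding achievement_set_dyadic_terms by (rule homeomorphic_refl)
  have C: "achievement_set ternary_terms homeomorphic C"
    by (subst homeomorphic_sym) (rule cantor_set_homeomorphic_ternary[OF assms(1), unfolded cantor_ternary_def])
  have M: "achievement_set gn_terms homeomorphic M"
    by (subst homeomorphic_sym) (rule M_homeomorphic_guthrie_nymann[unfolded guthrie_nymann_def])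
  have P: "achievement_set (\<lambda>n. 0::real) homeomorphic {p}"
    unfolding achievement_set_zero by (simp add: homeomorphic_finite)
  note real = realizable_in_plane_real and Times = realizable_in_plane_Times
  note sI = dyadic_terms_summable and sC = ternary_terms_summable and sM = gn_terms_summable
  show ?thesis
    using real[OF _ P] real[OF sI I] real[OF sC C] real[OF sM M]
      Times[OF sI sI I I] Times[OF sI sC I C] Times[OF sI sM I M] Times[OF sC sM C M] Times[OF sM sM M M]
    by simp
qed

end
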